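(* Let $|\Psi\rangle,|\Psi'\rangle\in\mathcal{B}^n$ be $M$-party stabilizer states (with respect to the same distribution $n=\sum_{\alpha\in M}n_\alpha$ of qubits among the parties) which both have full local ranks, and let $S,S'\subset G^n$ be their stabilizer groups. Then $|\Psi\rangle$ is LCU-equivalent to $|\Psi'\rangle$ if and only if there exists a linear invertible map $T:S\to S'$ such that $\omega(T(f)_\alpha,T(g)_\alpha)=\omega(f_\alpha,g_\alpha)$ for all $f,g\in S$ and all $\alpha\in M$.
   Context: Let $G=\{00,01,10,11\}\cong\mathbb{F}_2^2$ and $G^n\cong\mathbb{F}_2^{2n}$, with elements written $f=(a_1,b_1,\dots,a_n,b_n)$. Put $\sigma_{00}=I$, $\sigma_{10}=\sigma^x$, $\sigma_{01}=\sigma^z$, $\sigma_{11}=\sigma^y$ and $\sigma(f)=\sigma_{a_1b_1}\otimes\cdots\otimes\sigma_{a_nb_n}$, an operator on $\mathcal{B}^n=(\mathbb{C}^2)^{\otimes n}$. The symplectic form is $\omega(f,f')=\sum_{j=1}^n(a_jb_j'+b_ja_j')\bmod 2$. For a subspace $S\subseteq G^n$, $S^\perp=\{f\in G^n:\omega(f,g)=0\ \forall g\in S\}$; $S$ is self-dual if $S^\perp=S$ (then $\dim S=n$). A stabilizer state with stabilizer group $S$ is, for a self-dual $S\subset G^n$ and a sign function $\epsilon:S\to\{\pm1\}$ for which the equations are consistent, the unique (up to global phase) unit vector $|\Psi\rangle$ with $\sigma(f)|\Psi\rangle=\epsilon(f)|\Psi\rangle$ for all $f\in S$. The Clifford group $\mathcal{C}(n)$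 is the set of unitaries $U$ on $\mathcal{B}^n$ such that $U\sigma(f)U^\dagger=\pm\sigma(u(f))$ for all $f\in G^n$ for some map $u:G^n\to G^n$. Multipartite setting: $M$ is a finite set of parties, $n=\sum_{\alpha\in M}n_\alpha$ with $n_\alpha\ge 0$, and party $\alpha$ holds $n_\alpha$ of the qubits. Accordingly $G^n=\bigoplus_{\alpha}G^{n_\alpha}$; for $f\in G^n$, $f_\alpha\in G^{n_\alpha}$ denotes the restriction of $f$ to the qubits of party $\alpha$, and $\omega(f_\alpha,g_\alpha)$ is the symplectic form of $G^{n_\alpha}$. For a subspace $S\subseteq G^n$, the local subspace is $S_\alpha=\{g\in S: g_\beta=0\text{ for all }\beta\neq\alpha\}$ and the co-local subspace is $S_{\hat\alpha}=\{g\in S:g_\alpha=0\}$ (if $n_\alpha=0$: $S_\alpha=0$, $S_{\hat\alpha}=S$). Two $M$-party stabilizer states $|\Psi\rangle,|\Psi'\rangle$ are LCU-equivalent if $|\Psi'\rangle=\bigotimes_{\alpha\in M}U_\alpha|\Psi\rangle$ (up to global phase) for some $U_\alpha\in\mathcal{C}(n_\alpha)$ acting on the qubits of party $\alpha$. A stabilizer state with stabilizer group $S$ has full local ranks if $S_\alpha=0$ for all $\alpha\in M$. *)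

theory Defs
  imports Complex_Main
begin

text \<open>A subset Q of qubits carries the
  Hilbert space with computational basis the bit strings supported in Q.\<close>

type_synonym pauli_vec = "nat \<Rightarrow> bool \<times> bool"
type_synonym bits = "nat \<Rightarrow> bool"
type_synonym op = "bits \<Rightarrow> bits \<Rightarrow> complex"
type_synonym state = "bits \<Rightarrow> complex"

definition basis :: "nat set \<Rightarrow> bits set" where
  "basis Q = {x. \<forall>j. j \<notin> Q \<longrightarrow> \<not> x j}"

definition Gset :: "nat set \<Rightarrow> pauli_vec set" where
  "Gset Q = {f. \<forall>j. j \<notin> Q \<longrightarrow> f j = (False, False)}"

definition gzero :: pauli_vec where
  "gzero = (\<lambda>j. (False, False))"

definition gadd :: "pauli_vec \<Rightarrow> pauli_vec \<Rightarrow> pauli_vec" where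
  "gadd f g = (\<lambda>j. (fst (f j) \<noteq> fst (g j), snd (f j) \<noteq> snd (g j)))"

text \<open>Symplectic form restricted to the qubits in Q (as an element of F_2, True = 1).\<close>
definition symp :: "nat set \<Rightarrow> pauli_vec \<Rightarrow> pauli_vec \<Rightarrow> bool" where
  "symp Q f g = odd (card {j \<in> Q. (fst (f j) \<and> snd (g j)) \<noteq> (snd (f j) \<and> fst (g j))})"

definition is_subspace :: "nat \<Rightarrow> pauli_vec set \<Rightarrow> bool" where
  "is_subspace n S \<longleftrightarrow> S \<subseteq> Gset {..<n} \<and> gzero \<in> S \<and> (\<forall>f\<in>S. \<forall>g\<in>S. gadd f g \<in> S)"

definition perp :: "nat \<Rightarrow> pauli_vec set \<Rightarrow> pauli_vec set" where
  "perp n S = {f \<in> Gset {..<n}. \<forall>g\<in>S. \<not> symp {..<n} f g}"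

definition self_dual :: "nat \<Rightarrow> pauli_vec set \<Rightarrow> bool" where
  "self_dual n S \<longleftrightarrow> is_subspace n S \<and> perp n S = S"

text \<open>Single-qubit Paulis: (0,0)=I, (1,0)=X, (0,1)=Z, (1,1)=Y; basis bit False = |0>.\<close>
definition pauli1 :: "bool \<times> bool \<Rightarrow> bool \<Rightarrow> bool \<Rightarrow> complex" where
  "pauli1 ab x y =
    (case ab of
       (False, False) \<Rightarrow> (if x = y then 1 else 0)
     | (True, False) \<Rightarrow> (if x \<noteq> y then 1 else 0)
     | (False, True) \<Rightarrow> (if x = y then (if x then -1 else 1) else 0)
     | (True, True) \<Rightarrow> (if x \<noteq> y then (if x then \<i> else -\<i>) else 0))"

definition pauli :: "nat set \<Rightarrow> pauli_vec \<Rightarrow> op" where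
  "pauli Q f x y = (\<Prod>j\<in>Q. pauli1 (f j) (x j) (y j))"

definition mmul :: "nat set \<Rightarrow> op \<Rightarrow> op \<Rightarrow> op" where
  "mmul Q A B x y = (\<Sum>z\<in>basis Q. A x z * B z y)"

definition adj :: "op \<Rightarrow> op" where
  "adj A x y = cnj (A y x)"

definition apply_op :: "nat set \<Rightarrow> op \<Rightarrow> state \<Rightarrow> state" where
  "apply_op Q A \<psi> x = (\<Sum>y\<in>basis Q. A x y * \<psi> y)"

definition op_eq :: "nat set \<Rightarrow> op \<Rightarrow> op \<Rightarrow> bool" where
  "op_eq Q A B \<longleftrightarrow> (\<forall>x\<in>basis Q. \<forall>y\<in>basis Q. A x y = B x y)"

definition unitary :: "nat set \<Rightarrow> op \<Rightarrow> bool" where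
  "unitary Q U \<longleftrightarrow> op_eq Q (mmul Q U (adj U)) (\<lambda>x y. if x = y then 1 else 0)
                 \<and> op_eq Q (mmul Q (adj U) U) (\<lambda>x y. if x = y then 1 else 0)"

definition clifford :: "nat set \<Rightarrow> op \<Rightarrow> bool" where
  "clifford Q U \<longleftrightarrow> unitary Q U \<and>
     (\<exists>u. \<forall>f\<in>Gset Q. u f \<in> Gset Q \<and>
        (\<exists>s::complex. (s = 1 \<or> s = -1) \<and>
           op_eq Q (mmul Q (mmul Q U (pauli Q f)) (adj U)) (\<lambda>x y. s * pauli Q (u f) x y)))"

definition unit_state :: "nat set \<Rightarrow> state \<Rightarrow> bool" where
  "unit_state Q \<psi> \<longleftrightarrow> (\<Sum>x\<in>basis Q. (cmod (\<psi> x))\<^sup>2) = 1"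

text \<open>psi is a stabilizer state with stabilizer group S: S self-dual and psi a unit
  vector that is a common eigenvector, with sign +-1, of all sigma(f), f in S
  (such a vector is then unique up to phase).\<close>
definition stab_state :: "nat \<Rightarrow> state \<Rightarrow> pauli_vec set \<Rightarrow> bool" where
  "stab_state n \<psi> S \<longleftrightarrow> self_dual n S \<and> unit_state {..<n} \<psi> \<and>
     (\<forall>f\<in>S. \<exists>e::complex. (e = 1 \<or> e = -1) \<and>
        (\<forall>x\<in>basis {..<n}. apply_op {..<n} (pauli {..<n} f) \<psi> x = e * \<psi> x))"

text \<open>Multipartite setting: qubit j < n belongs to party part j \<in> M.\<close>
definition qubits :: "nat \<Rightarrow> (nat \<Rightarrow> 'p) \<Rightarrow> 'p \<Rightarrow> nat set" where
  "qubits n part \<alpha> = {j. j < n \<and> part j = \<alpha>}"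

definition restr :: "nat set \<Rightarrow> bits \<Rightarrow> bits" where
  "restr Q x = (\<lambda>j. j \<in> Q \<and> x j)"

definition tensor_op :: "nat \<Rightarrow> (nat \<Rightarrow> 'p) \<Rightarrow> 'p set \<Rightarrow> ('p \<Rightarrow> op) \<Rightarrow> op" where
  "tensor_op n part M Us x y =
     (\<Prod>\<alpha>\<in>M. Us \<alpha> (restr (qubits n part \<alpha>) x) (restr (qubits n part \<alpha>) y))"

definition LCU_equiv :: "nat \<Rightarrow> (nat \<Rightarrow> 'p) \<Rightarrow> 'p set \<Rightarrow> state \<Rightarrow> state \<Rightarrow> bool" where
  "LCU_equiv n part M \<psi> \<psi>' \<longleftrightarrow>
     (\<exists>Us. (\<forall>\<alpha>\<in>M. clifford (qubits n part \<alpha>) (Us \<alpha>)) \<and>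
        (\<exists>c. cmod c = 1 \<and>
           (\<forall>x\<in>basis {..<n}. \<psi>' x = c * apply_op {..<n} (tensor_op n part M Us) \<psi> x)))"

definition local_sub :: "nat \<Rightarrow> (nat \<Rightarrow> 'p) \<Rightarrow> 'p set \<Rightarrow> pauli_vec set \<Rightarrow> 'p \<Rightarrow> pauli_vec set" where
  "local_sub n part M S \<alpha> =
     {g \<in> S. \<forall>\<beta>\<in>M. \<beta> \<noteq> \<alpha> \<longrightarrow> (\<forall>j\<in>qubits n part \<beta>. g j = (False, False))}"

definition full_local_ranks :: "nat \<Rightarrow> (nat \<Rightarrow> 'p) \<Rightarrow> 'p set \<Rightarrow> pauli_vec set \<Rightarrow> bool" where
  "full_local_ranks n part M S \<longleftrightarrow> (\<forall>\<alpha>\<in>M. local_sub n part M S \<alpha> = {gzero})"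

definition F2_linear_iso :: "pauli_vec set \<Rightarrow> pauli_vec set \<Rightarrow> (pauli_vec \<Rightarrow> pauli_vec) \<Rightarrow> bool" where
  "F2_linear_iso S S' T \<longleftrightarrow> bij_betw T S S' \<and> (\<forall>f\<in>S. \<forall>g\<in>S. T (gadd f g) = gadd (T f) (T g))"

end

theory Submission
  imports Defs
begin

text \<open>
  A local Clifford \<open>U = \<Otimes>\<^sub>\<alpha> U\<^sub>\<alpha>\<close> with \<open>U|\<Psi>\<rangle> \<sim> |\<Psi>'\<rangle>\<close> acts on Paulis by symplectic maps \<open>u\<^sub>\<alpha>\<close>
  of the parties, and their direct sum maps \<open>S\<close> onto \<open>S'\<close> preserving every local form \<open>\<omega>\<^sub>\<alpha>\<close>.

  Conversely, full local ranks make the projections of \<open>S\<close> to the parties surjective, and nondegeneracy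
  of \<open>\<omega>\<^sub>\<alpha>\<close> lets \<open>T\<close> descend to symplectic maps \<open>u\<^sub>\<alpha>\<close>. Each \<open>u\<^sub>\<alpha>\<close> is realised by a Clifford
  unitary: suitable signs make \<open>f \<mapsto> \<plusminus>\<sigma>(u f)\<close> a projective representation with the same phases as
  \<open>\<sigma>\<close>, and a normalised Pauli twirl intertwines the two. The product of these Cliffords maps
  \<open>|\<Psi>\<rangle>\<close> to a state stabilised by \<open>S'\<close> up to signs, and a Pauli correction fixes the signs.
\<close>

definition padd :: "bool \<times> bool \<Rightarrow> bool \<times> bool \<Rightarrow> bool \<times> bool" where
  "padd p q = (fst p \<noteq> fst q, snd p \<noteq> snd q)"

lemma gadd_apply: "gadd f g j = padd (f j) (g j)"
  by (simp add: gadd_def padd_def)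

lemma gadd_comm: "gadd f g = gadd g f"
  by (auto simp: gadd_def fun_eq_iff)

lemma gadd_assoc: "gadd (gadd f g) h = gadd f (gadd g h)"
  by (auto simp: gadd_def fun_eq_iff)

lemma gadd_left_comm: "gadd f (gadd g h) = gadd g (gadd f h)"
  by (auto simp: gadd_def fun_eq_iff)

lemmas gadd_ac = gadd_assoc gadd_comm gadd_left_comm

lemma gadd_self[simp]: "gadd f f = gzero"
  by (auto simp: gadd_def gzero_def fun_eq_iff)

lemma gadd_zero_left[simp]: "gadd gzero f = f"
  by (auto simp: gadd_def gzero_def fun_eq_iff)

lemma gadd_zero_right[simp]: "gadd f gzero = f"
  by (auto simp: gadd_def gzero_def fun_eq_iff)

lemma gadd_cancel_left[simp]: "gadd f (gadd f g) = g"
  by (simp add: gadd_assoc[symmetric])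

lemma gadd_cancel_right[simp]: "gadd (gadd g f) f = g"
  by (simp add: gadd_assoc)

lemma gzero_apply[simp]: "gzero j = (False, False)"
  by (simp add: gzero_def)

lemma gadd_eq_zero: "gadd x y = gzero \<Longrightarrow> x = y"
  by (metis gadd_cancel_right gadd_zero_left)

lemma Gset_gadd: "f \<in> Gset Q \<Longrightarrow> g \<in> Gset Q \<Longrightarrow> gadd f g \<in> Gset Q"
  by (auto simp: Gset_def gadd_def)

lemma Gset_gzero[simp]: "gzero \<in> Gset Q"
  by (auto simp: Gset_def)

lemma Gset_mono: "R \<subseteq> Q' \<Longrightarrow> f \<in> Gset R \<Longrightarrow> f \<in> Gset Q'"
  by (auto simp: Gset_def)

definition gsubspace :: "pauli_vec set \<Rightarrow> bool" where
  "gsubspace V \<longleftrightarrow> gzero \<in> V \<and> (\<forall>v\<in>V. \<forall>w\<in>V. gadd v w \<in> V)"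

lemma gsubspace_Gset: "gsubspace (Gset Q)"
  by (simp add: gsubspace_def Gset_gadd)

lemma finite_basis: "finite Q \<Longrightarrow> finite (basis Q)"
proof -
  assume "finite Q"
  have "basis Q = (\<lambda>A j. j \<in> A) ` Pow Q"
  proof
    show "basis Q \<subseteq> (\<lambda>A j. j \<in> A) ` Pow Q"
    proof
      fix x assume "x \<in> basis Q"
      then have "x = (\<lambda>j. j \<in> {j\<in>Q. x j})" by (auto simp: basis_def fun_eq_iff)
      moreover have "{j\<in>Q. x j} \<in> Pow Q" by auto
      ultimately show "x \<in> (\<lambda>A j. j \<in> A) ` Pow Q" by blast
    qed
  qed (auto simp: basis_def)
  then show ?thesis using \<open>finite Q\<close> by simp
qed

lemma basis_nonempty: "(\<lambda>j. False) \<in> basis Q"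
  by (simp add: basis_def)

lemma card_basis_pos: "finite Q \<Longrightarrow> card (basis Q) > 0"
  using finite_basis basis_nonempty card_gt_0_iff by blast

lemma basis_eq_iff: "x \<in> basis Q \<Longrightarrow> y \<in> basis Q \<Longrightarrow> (\<forall>j\<in>Q. x j = y j) \<longleftrightarrow> x = y"
  by (auto simp: basis_def fun_eq_iff)

lemma basis_insert:
  assumes "a \<notin> Q"
  shows "basis (insert a Q) = basis Q \<union> (\<lambda>z. z(a := True)) ` basis Q"
proof
  show "basis (insert a Q) \<subseteq> basis Q \<union> (\<lambda>z. z(a := True)) ` basis Q"
  proof
    fix x assume x: "x \<in> basis (insert a Q)"
    show "x \<in> basis Q \<union> (\<lambda>z. z(a := True)) ` basis Q"
    proof (cases "x a")
      case True
      then have "x = (x(a := False))(a := True)" by (auto simp: fun_eq_iff)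
      moreover have "x(a := False) \<in> basis Q" using x by (auto simp: basis_def)
      ultimately show ?thesis by blast
    next
      case False
      then have "x \<in> basis Q" using x by (auto simp: basis_def)
      then show ?thesis by blast
    qed
  qed
next
  show "basis Q \<union> (\<lambda>z. z(a := True)) ` basis Q \<subseteq> basis (insert a Q)"
    by (auto simp: basis_def)
qed

lemma sum_basis_insert:
  assumes a: "a \<notin> Q" and fQ: "finite Q"
  shows "(\<Sum>z\<in>basis (insert a Q). G z) = (\<Sum>z\<in>basis Q. G z + G (z(a := True)))"
proof -
  have disj: "basis Q \<inter> (\<lambda>z. z(a := True)) ` basis Q = {}"
    using a by (auto simp: basis_def)
  have inj: "inj_on (\<lambda>z. z(a := True)) (basis Q)"
    using a by (auto simp: inj_on_def basis_def fun_eq_iff)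
  have "(\<Sum>z\<in>basis (insert a Q). G z) = (\<Sum>z\<in>basis Q. G z) + (\<Sum>z\<in>(\<lambda>z. z(a := True)) ` basis Q. G z)"
    unfolding basis_insert[OF a] using finite_basis[OF fQ] disj by (intro sum.union_disjoint) auto
  also have "\<dots> = (\<Sum>z\<in>basis Q. G z + G (z(a := True)))"
    using inj by (simp add: sum.reindex sum.distrib)
  finally show ?thesis .
qed

lemma sum_basis_prod:
  fixes F :: "nat \<Rightarrow> bool \<Rightarrow> 'a::comm_semiring_1"
  assumes "finite Q"
  shows "(\<Sum>z\<in>basis Q. \<Prod>j\<in>Q. F j (z j)) = (\<Prod>j\<in>Q. F j False + F j True)"
  using assms
proof (induction Q rule: finite_induct)
  case empty
  have "basis {} = {\<lambda>j. False}" by (auto simp: basis_def)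
  then show ?case by simp
next
  case (insert a Q)
  have "(\<Prod>j\<in>Q. F j ((z(a := True)) j)) = (\<Prod>j\<in>Q. F j (z j))" for z
    using insert.hyps by (intro prod.cong) auto
  then have "(\<Prod>j\<in>insert a Q. F j (z j)) = F a False * (\<Prod>j\<in>Q. F j (z j))"
    and "(\<Prod>j\<in>insert a Q. F j ((z(a := True)) j)) = F a True * (\<Prod>j\<in>Q. F j (z j))"
    if "z \<in> basis Q" for z
    using that insert.hyps by (auto simp: basis_def)
  then have "(\<Sum>z\<in>basis (insert a Q). \<Prod>j\<in>insert a Q. F j (z j))
      = (F a False + F a True) * (\<Sum>z\<in>basis Q. \<Prod>j\<in>Q. F j (z j))"
    by (simp add: sum_basis_insert[OF insert.hyps(2,1)] distrib_right sum_distrib_left sum.distrib)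
  then show ?case using insert by simp
qed

lemma Gset_insert:
  assumes "a \<notin> Q"
  shows "Gset (insert a Q) = (\<lambda>(p, f). f(a := p)) ` (UNIV \<times> Gset Q)"
proof
  show "Gset (insert a Q) \<subseteq> (\<lambda>(p, f). f(a := p)) ` (UNIV \<times> Gset Q)"
  proof
    fix x assume x: "x \<in> Gset (insert a Q)"
    have "x = (\<lambda>(p, f). f(a := p)) (x a, x(a := (False, False)))" by auto
    moreover have "x(a := (False, False)) \<in> Gset Q" using x by (auto simp: Gset_def)
    ultimately show "x \<in> (\<lambda>(p, f). f(a := p)) ` (UNIV \<times> Gset Q)" by blast
  qed
qed (auto simp: Gset_def)

lemma finite_Gset: "finite Q \<Longrightarrow> finite (Gset Q)"
proof (induction Q rule: finite_induct)
  case empty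
  have "Gset {} = {gzero}" by (auto simp: Gset_def gzero_def)
  then show ?case by simp
next
  case (insert a Q)
  then show ?case unfolding Gset_insert[OF insert.hyps(2)] by simp
qed

lemma sum_Gset_prod:
  fixes F :: "nat \<Rightarrow> bool \<times> bool \<Rightarrow> 'a::comm_semiring_1"
  assumes "finite Q"
  shows "(\<Sum>f\<in>Gset Q. \<Prod>j\<in>Q. F j (f j)) = (\<Prod>j\<in>Q. \<Sum>p\<in>UNIV. F j p)"
  using assms
proof (induction Q rule: finite_induct)
  case empty
  have "Gset {} = {gzero}" by (auto simp: Gset_def gzero_def)
  then show ?case by simp
next
  case (insert a Q)
  have fG: "finite (Gset Q)" using insert finite_Gset by blast
  have inj: "inj_on (\<lambda>(p, f). f(a := p)) (UNIV \<times> Gset Q)"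
  proof (rule inj_onI, clarify)
    fix p f q g assume "f \<in> Gset Q" "g \<in> Gset Q" "f(a := p) = g(a := q)"
    then show "p = q \<and> f = g" using insert.hyps(2)
      by (auto simp: Gset_def fun_eq_iff) metis+
  qed
  have "(\<Sum>f\<in>Gset (insert a Q). \<Prod>j\<in>insert a Q. F j (f j))
      = (\<Sum>(p, f)\<in>UNIV \<times> Gset Q. \<Prod>j\<in>insert a Q. F j ((f(a := p)) j))"
    unfolding Gset_insert[OF insert.hyps(2)] using inj
    by (simp add: sum.reindex case_prod_beta')
  also have "\<dots> = (\<Sum>(p, f)\<in>UNIV \<times> Gset Q. F a p * (\<Prod>j\<in>Q. F j (f j)))"
  proof (rule sum.cong, simp, clarify)
    fix p f assume "f \<in> Gset Q"
    have "(\<Prod>j\<in>Q. F j ((f(a := p)) j)) = (\<Prod>j\<in>Q. F j (f j))"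
      using insert.hyps(2) by (intro prod.cong) auto
    then show "(\<Prod>j\<in>insert a Q. F j ((f(a := p)) j)) = F a p * (\<Prod>j\<in>Q. F j (f j))"
      using insert.hyps by simp
  qed
  also have "\<dots> = (\<Sum>p\<in>UNIV. \<Sum>f\<in>Gset Q. F a p * (\<Prod>j\<in>Q. F j (f j)))"
    by (simp add: sum.cartesian_product)
  also have "\<dots> = (\<Sum>p\<in>UNIV. F a p * (\<Sum>f\<in>Gset Q. \<Prod>j\<in>Q. F j (f j)))"
    by (simp add: sum_distrib_left)
  also have "\<dots> = (\<Sum>p\<in>UNIV. F a p) * (\<Prod>j\<in>Q. \<Sum>p\<in>UNIV. F j p)"
    using insert.IH by (simp add: sum_distrib_right)
  finally show ?case using insert.hyps by simp
qed

lemma sum_Gset_shift: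
  assumes "g \<in> Gset Q"
  shows "(\<Sum>f\<in>Gset Q. F (gadd f g)) = (\<Sum>f\<in>Gset Q. F f)"
  by (rule sum.reindex_bij_witness[where i = "\<lambda>f. gadd f g" and j = "\<lambda>f. gadd f g"])
     (auto simp: Gset_gadd assms)

lemma UNIV_bool_pair: "(UNIV :: (bool \<times> bool) set) = {(False,False), (True,False), (False,True), (True,True)}"
  by auto

lemma sum_UNIV_pair: "(\<Sum>p\<in>(UNIV :: (bool \<times> bool) set). F p) = F (False,False) + F (True,False) + F (False,True) + F (True,True)"
  unfolding UNIV_bool_pair by (simp add: add.assoc)

lemma prod_indicator:
  "finite Q \<Longrightarrow> (\<Prod>i\<in>Q. if P i then 1 else (0::complex)) = (if \<forall>i\<in>Q. P i then 1 else 0)"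
  by (simp add: prod_zero_iff)

definition phase1 :: "bool \<times> bool \<Rightarrow> bool \<times> bool \<Rightarrow> complex" where
  "phase1 p q = (if p = (True,False) \<and> q = (False,True) then -\<i>
     else if p = (False,True) \<and> q = (True,False) then \<i>
     else if p = (True,False) \<and> q = (True,True) then \<i>
     else if p = (True,True) \<and> q = (True,False) then -\<i>
     else if p = (False,True) \<and> q = (True,True) then -\<i>
     else if p = (True,True) \<and> q = (False,True) then \<i>
     else 1)"

definition bsign :: "bool \<Rightarrow> complex" where
  "bsign b = (if b then -1 else 1)"

definition anticomm1 :: "bool \<times> bool \<Rightarrow> bool \<times> bool \<Rightarrow> bool" where
  "anticomm1 p q = ((fst p \<and> snd q) \<noteq> (snd p \<and> fst q))"

lemma bsign_xor: "bsign (a \<noteq> b) = bsign a * bsign b"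
  by (simp add: bsign_def)

lemma bsign_eq_not: "bsign (a = (\<not> b)) = bsign a * bsign b"
  by (simp add: bsign_def)

lemma bsign_nz[simp]: "bsign a \<noteq> 0"
  by (simp add: bsign_def)

lemma bsign_inj: "bsign a = bsign b \<longleftrightarrow> a = b"
  by (simp add: bsign_def)

lemma bool_pair_cases: "(p::bool\<times>bool) = (False,False) \<or> p = (True,False) \<or> p = (False,True) \<or> p = (True,True)"
  by (cases p) auto

lemma pauli1_I: "pauli1 (False,False) x y = (if x = y then 1 else 0)" by (simp add: pauli1_def)

lemma pauli1_X: "pauli1 (True,False) x y = (if x \<noteq> y then 1 else 0)" by (simp add: pauli1_def)

lemma pauli1_Z: "pauli1 (False,True) x y = (if x = y then (if x then -1 else 1) else 0)" by (simp add: pauli1_def)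

lemma pauli1_Y: "pauli1 (True,True) x y = (if x \<noteq> y then (if x then \<i> else -\<i>) else 0)" by (simp add: pauli1_def)

lemmas pauli1_simps = pauli1_I pauli1_X pauli1_Z pauli1_Y

lemma pauli1_mult:
  "pauli1 p x False * pauli1 q False y + pauli1 p x True * pauli1 q True y
   = phase1 p q * pauli1 (padd p q) x y"
  using bool_pair_cases[of p] bool_pair_cases[of q]
  by (elim disjE; cases x; cases y; simp add: pauli1_simps phase1_def padd_def)

lemma phase1_comm: "phase1 p q = bsign (anticomm1 p q) * phase1 q p"
  using bool_pair_cases[of p] bool_pair_cases[of q] by (elim disjE; simp add: phase1_def bsign_def anticomm1_def)

lemma phase1_sq: "phase1 p q * phase1 p q = bsign (anticomm1 p q)"
  using bool_pair_cases[of p] bool_pair_cases[of q] by (elim disjE; simp add: phase1_def bsign_def anticomm1_def)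

lemma phase1_cocycle: "phase1 p q * phase1 (padd p q) r = phase1 q r * phase1 p (padd q r)"
  using bool_pair_cases[of p] bool_pair_cases[of q] bool_pair_cases[of r] by (elim disjE; simp add: phase1_def padd_def)

lemma phase1_self: "phase1 p p = 1"
  using bool_pair_cases[of p] by (elim disjE; simp add: phase1_def)

lemma phase1_padd_swap: "phase1 (padd p q) q = phase1 q p"
  using bool_pair_cases[of p] bool_pair_cases[of q] by (elim disjE; simp add: phase1_def padd_def)

lemma phase1_nz: "phase1 p q \<noteq> 0"
  by (auto simp: phase1_def)

lemma anticomm1_sym: "anticomm1 p q = anticomm1 q p"
  by (auto simp: anticomm1_def)

lemma anticomm1_padd: "anticomm1 (padd p q) r = (anticomm1 p r \<noteq> anticomm1 q r)"
  using bool_pair_cases[of p] bool_pair_cases[of q] bool_pair_cases[of r] by (elim disjE; simp add: anticomm1_def padd_def)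

lemma pauli1_herm: "cnj (pauli1 p y x) = pauli1 p x y"
  using bool_pair_cases[of p] by (elim disjE; cases x; cases y; simp add: pauli1_simps)

lemma pauli1_complete:
  "(\<Sum>p\<in>UNIV. pauli1 p a b * cnj (pauli1 p a' b')) = (if a = a' \<and> b = b' then 2 else 0)"
  unfolding sum_UNIV_pair by (cases a; cases b; cases a'; cases b'; simp add: pauli1_simps)

lemma pauli1_trace: "pauli1 p False False + pauli1 p True True = (if p = (False,False) then 2 else 0)"
  using bool_pair_cases[of p] by (elim disjE; simp add: pauli1_simps)

lemma pauli1_x_part: "pauli1 (a, False) z w = (if w = (z \<noteq> a) then 1 else 0)"
  by (cases a; cases z; cases w; simp add: pauli1_simps)

definition phase :: "nat set \<Rightarrow> pauli_vec \<Rightarrow> pauli_vec \<Rightarrow> complex" where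
  "phase Q f g = (\<Prod>j\<in>Q. phase1 (f j) (g j))"

lemma bsign_prod: "finite Q \<Longrightarrow> (\<Prod>j\<in>Q. bsign (P j)) = bsign (odd (card {j\<in>Q. P j}))"
proof (induction Q rule: finite_induct)
  case empty then show ?case by (simp add: bsign_def)
next
  case (insert a Q)
  show ?case
  proof (cases "P a")
    case True
    then have "{j \<in> insert a Q. P j} = insert a {j\<in>Q. P j}" by auto
    then have "card {j \<in> insert a Q. P j} = Suc (card {j\<in>Q. P j})" using insert by simp
    then show ?thesis using insert True by (simp add: bsign_def)
  next
    case False
    then have "{j \<in> insert a Q. P j} = {j\<in>Q. P j}" by auto
    then show ?thesis using insert False by (simp add: bsign_def)
  qed
qed

lemma symp_anticomm1: "symp Q f g = odd (card {j\<in>Q. anticomm1 (f j) (g j)})"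
  by (simp add: symp_def anticomm1_def)

lemma bsign_symp: "finite Q \<Longrightarrow> bsign (symp Q f g) = (\<Prod>j\<in>Q. bsign (anticomm1 (f j) (g j)))"
  by (simp add: bsign_prod symp_anticomm1)

lemma symp_comm: "symp Q f g = symp Q g f"
  unfolding symp_anticomm1 by (simp add: anticomm1_sym[of "f _"])

lemma symp_gadd_left: "finite Q \<Longrightarrow> symp Q (gadd f g) h = (symp Q f h \<noteq> symp Q g h)"
proof -
  assume fQ: "finite Q"
  have "bsign (symp Q (gadd f g) h) = (\<Prod>j\<in>Q. bsign (anticomm1 (f j) (h j)) * bsign (anticomm1 (g j) (h j)))"
    using fQ by (simp add: bsign_symp gadd_apply anticomm1_padd bsign_xor bsign_eq_not)
  also have "\<dots> = bsign (symp Q f h) * bsign (symp Q g h)"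
    using fQ by (simp add: bsign_symp prod.distrib)
  also have "\<dots> = bsign (symp Q f h \<noteq> symp Q g h)" by (simp add: bsign_xor bsign_eq_not)
  finally show ?thesis by (simp add: bsign_inj)
qed

lemma symp_zero_right[simp]: "symp Q g gzero = False"
  by (simp add: symp_def)

lemma phase_comm: "finite Q \<Longrightarrow> phase Q f g = bsign (symp Q f g) * phase Q g f"
proof -
  assume fQ: "finite Q"
  have "phase Q f g = (\<Prod>j\<in>Q. bsign (anticomm1 (f j) (g j)) * phase1 (g j) (f j))"
    unfolding phase_def by (rule prod.cong[OF refl], rule phase1_comm)
  also have "\<dots> = bsign (symp Q f g) * phase Q g f"
    using fQ by (simp add: prod.distrib bsign_symp phase_def)
  finally show ?thesis .
qed

lemma phase_sq: "finite Q \<Longrightarrow> phase Q f g * phase Q f g = bsign (symp Q f g)"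
  by (simp add: phase_def bsign_symp prod.distrib[symmetric] phase1_sq)

lemma phase_cocycle: "phase Q f g * phase Q (gadd f g) h = phase Q g h * phase Q f (gadd g h)"
  by (simp add: phase_def prod.distrib[symmetric] gadd_apply phase1_cocycle)

lemma phase_self[simp]: "phase Q f f = 1"
  by (simp add: phase_def phase1_self)

lemma phase_gadd_swap: "phase Q (gadd f g) g = phase Q g f"
  by (simp add: phase_def gadd_apply phase1_padd_swap)

lemma phase_nz[simp]: "phase Q f g \<noteq> 0"
  by (cases "finite Q") (simp_all add: phase_def phase1_nz)

lemma pauli_mult:
  assumes "finite Q"
  shows "mmul Q (pauli Q f) (pauli Q g) x y = phase Q f g * pauli Q (gadd f g) x y"
proof -
  have "mmul Q (pauli Q f) (pauli Q g) x y
      = (\<Sum>z\<in>basis Q. \<Prod>j\<in>Q. pauli1 (f j) (x j) (z j) * pauli1 (g j) (z j) (y j))"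
    by (simp add: mmul_def pauli_def prod.distrib)
  also have "\<dots> = (\<Prod>j\<in>Q. pauli1 (f j) (x j) False * pauli1 (g j) False (y j)
                         + pauli1 (f j) (x j) True * pauli1 (g j) True (y j))"
    using sum_basis_prod[OF assms, of "\<lambda>j c. pauli1 (f j) (x j) c * pauli1 (g j) c (y j)"] by simp
  also have "\<dots> = (\<Prod>j\<in>Q. phase1 (f j) (g j) * pauli1 (padd (f j) (g j)) (x j) (y j))"
    by (simp add: pauli1_mult)
  also have "\<dots> = phase Q f g * pauli Q (gadd f g) x y"
    by (simp add: prod.distrib phase_def pauli_def gadd_apply)
  finally show ?thesis .
qed

lemma pauli_mult_comm_apply:
  "finite Q \<Longrightarrow> mmul Q (pauli Q a) (pauli Q b) x y = bsign (symp Q a b) * mmul Q (pauli Q b) (pauli Q a) x y"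
  by (simp add: pauli_mult phase_comm[of Q a b] gadd_comm[of a b])

lemma pauli_herm: "cnj (pauli Q f y x) = pauli Q f x y"
  by (simp add: pauli_def pauli1_herm)

lemma pauli_zero: "finite Q \<Longrightarrow> pauli Q gzero x y = (if \<forall>j\<in>Q. x j = y j then 1 else 0)"
  by (simp add: pauli_def pauli1_I prod_zero_iff)

lemma pauli_zero_basis: "finite Q \<Longrightarrow> x \<in> basis Q \<Longrightarrow> y \<in> basis Q \<Longrightarrow> pauli Q gzero x y = (if x = y then 1 else 0)"
  by (simp add: pauli_zero basis_eq_iff)

lemma pauli_complete:
  assumes "finite Q"
  shows "(\<Sum>g\<in>Gset Q. pauli Q g a b * cnj (pauli Q g a' b'))
       = (if \<forall>j\<in>Q. a j = a' j \<and> b j = b' j then 2 ^ card Q else 0)"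
proof -
  have "(\<Sum>g\<in>Gset Q. pauli Q g a b * cnj (pauli Q g a' b'))
      = (\<Sum>g\<in>Gset Q. \<Prod>j\<in>Q. pauli1 (g j) (a j) (b j) * cnj (pauli1 (g j) (a' j) (b' j)))"
    by (simp add: pauli_def prod.distrib)
  also have "\<dots> = (\<Prod>j\<in>Q. \<Sum>p\<in>UNIV. pauli1 p (a j) (b j) * cnj (pauli1 p (a' j) (b' j)))"
    using sum_Gset_prod[OF assms, of "\<lambda>j p. pauli1 p (a j) (b j) * cnj (pauli1 p (a' j) (b' j))"] by simp
  also have "\<dots> = (\<Prod>j\<in>Q. if a j = a' j \<and> b j = b' j then 2 else 0)"
    by (simp add: pauli1_complete)
  also have "\<dots> = (if \<forall>j\<in>Q. a j = a' j \<and> b j = b' j then 2 ^ card Q else 0)"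
  proof (cases "\<forall>j\<in>Q. a j = a' j \<and> b j = b' j")
    case True then show ?thesis by simp
  next
    case False
    then obtain j where "j \<in> Q" "\<not> (a j = a' j \<and> b j = b' j)" by blast
    then show ?thesis using assms False by (simp add: prod_zero_iff)
  qed
  finally show ?thesis .
qed

lemma pauli_trace:
  assumes "finite Q"
  shows "(\<Sum>x\<in>basis Q. pauli Q f x x) = (if \<forall>j\<in>Q. f j = (False,False) then 2 ^ card Q else 0)"
proof -
  have "(\<Sum>x\<in>basis Q. pauli Q f x x) = (\<Prod>j\<in>Q. pauli1 (f j) False False + pauli1 (f j) True True)"
    unfolding pauli_def using sum_basis_prod[OF assms, of "\<lambda>j c. pauli1 (f j) c c"] by simp
  also have "\<dots> = (\<Prod>j\<in>Q. if f j = (False,False) then 2 else 0)"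
    by (simp add: pauli1_trace)
  also have "\<dots> = (if \<forall>j\<in>Q. f j = (False,False) then 2 ^ card Q else 0)"
    using assms by (simp add: prod_zero_iff)
  finally show ?thesis .
qed

definition z_at :: "nat \<Rightarrow> pauli_vec" where "z_at j = gzero(j := (False, True))"

definition x_string :: "bits \<Rightarrow> pauli_vec" where "x_string a = (\<lambda>i. (a i, False))"

definition bits_xor :: "nat set \<Rightarrow> bits \<Rightarrow> bits \<Rightarrow> bits" where "bits_xor Q z a = (\<lambda>i. i \<in> Q \<and> (z i \<noteq> a i))"

lemma z_at_Gset: "j \<in> Q \<Longrightarrow> z_at j \<in> Gset Q"
  by (simp add: z_at_def Gset_def)

lemma x_string_Gset: "a \<in> basis Q \<Longrightarrow> x_string a \<in> Gset Q"
  by (simp add: x_string_def Gset_def basis_def)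

lemma bits_xor_basis: "bits_xor Q z a \<in> basis Q"
  by (simp add: bits_xor_def basis_def)

lemma bits_xor_involution: "z \<in> basis Q \<Longrightarrow> bits_xor Q (bits_xor Q z a) a = z"
  by (auto simp: bits_xor_def basis_def fun_eq_iff)

lemma pauli_z_at:
  assumes fQ: "finite Q" and j: "j \<in> Q" and z: "z \<in> basis Q" and w: "w \<in> basis Q"
  shows "pauli Q (z_at j) z w = (if z = w then (if z j then -1 else 1) else 0)"
proof -
  have "pauli Q (z_at j) z w = (\<Prod>i\<in>Q. (if z i = w i then 1 else 0) * (if i = j then (if z i then -1 else 1) else 1))"
    unfolding pauli_def z_at_def by (rule prod.cong) (auto simp: pauli1_simps)
  also have "\<dots> = (if \<forall>i\<in>Q. z i = w i then 1 else 0) * (if z j then -1 else 1)"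
    using fQ j by (simp add: prod.distrib prod_indicator prod.delta)
  also have "\<dots> = (if z = w then (if z j then -1 else 1) else 0)"
    using basis_eq_iff[OF z w] by simp
  finally show ?thesis .
qed

lemma pauli_x_string:
  assumes fQ: "finite Q" and z: "z \<in> basis Q" and w: "w \<in> basis Q"
  shows "pauli Q (x_string a) z w = (if w = bits_xor Q z a then 1 else 0)"
proof -
  have "pauli Q (x_string a) z w = (\<Prod>i\<in>Q. if w i = (z i \<noteq> a i) then 1 else 0)"
    unfolding pauli_def x_string_def by (simp add: pauli1_x_part)
  also have "\<dots> = (if \<forall>i\<in>Q. w i = (z i \<noteq> a i) then 1 else 0)"
    using fQ by (simp add: prod_indicator)
  also have "(\<forall>i\<in>Q. w i = (z i \<noteq> a i)) \<longleftrightarrow> w = bits_xor Q z a"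
    using w by (auto simp: bits_xor_def basis_def fun_eq_iff)
  finally show ?thesis .
qed

definition id_op :: op where "id_op x y = (if x = y then 1 else 0)"

lemma id_op_eta: "id_op = (\<lambda>x y. if x = y then 1 else 0)"
  by (simp add: fun_eq_iff id_op_def)

lemma unitary_iff: "unitary Q U \<longleftrightarrow> op_eq Q (mmul Q U (adj U)) id_op \<and> op_eq Q (mmul Q (adj U) U) id_op"
  by (simp add: unitary_def id_op_eta)

definition smul :: "complex \<Rightarrow> op \<Rightarrow> op" where "smul c A x y = c * A x y"

lemma op_eq_refl[simp]: "op_eq Q A A" by (simp add: op_eq_def)

lemma op_eq_sym: "op_eq Q A B \<Longrightarrow> op_eq Q B A" by (simp add: op_eq_def)

lemma op_eq_trans[trans]: "op_eq Q A B \<Longrightarrow> op_eq Q B C \<Longrightarrow> op_eq Q A C" by (simp add: op_eq_def)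

lemma op_eq_D: "op_eq Q A B \<Longrightarrow> x \<in> basis Q \<Longrightarrow> y \<in> basis Q \<Longrightarrow> A x y = B x y" by (simp add: op_eq_def)

lemma op_eq_I: "(\<And>x y. x \<in> basis Q \<Longrightarrow> y \<in> basis Q \<Longrightarrow> A x y = B x y) \<Longrightarrow> op_eq Q A B" by (simp add: op_eq_def)

lemma mmul_cong: "op_eq Q A A' \<Longrightarrow> op_eq Q B B' \<Longrightarrow> op_eq Q (mmul Q A B) (mmul Q A' B')"
  by (simp add: op_eq_def mmul_def)

lemma mmul_assoc: "finite Q \<Longrightarrow> mmul Q (mmul Q A B) C x y = mmul Q A (mmul Q B C) x y"
proof -
  assume fQ: "finite Q"
  have fb: "finite (basis Q)" using fQ finite_basis by blast
  have "mmul Q (mmul Q A B) C x y = (\<Sum>z\<in>basis Q. \<Sum>w\<in>basis Q. A x w * B w z * C z y)"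
    by (simp add: mmul_def sum_distrib_right)
  also have "\<dots> = (\<Sum>w\<in>basis Q. \<Sum>z\<in>basis Q. A x w * B w z * C z y)"
    by (rule sum.swap)
  also have "\<dots> = mmul Q A (mmul Q B C) x y"
    by (simp add: mmul_def sum_distrib_left mult.assoc)
  finally show ?thesis .
qed

lemma mmul_assoc_eq: "finite Q \<Longrightarrow> op_eq Q (mmul Q (mmul Q A B) C) (mmul Q A (mmul Q B C))"
  by (simp add: op_eq_def mmul_assoc)

lemma sum_basis_delta:
  fixes F :: "bits \<Rightarrow> complex"
  assumes "finite Q" "x \<in> basis Q"
  shows "(\<Sum>z\<in>basis Q. (if x = z then 1 else 0) * F z) = F x"
        "(\<Sum>z\<in>basis Q. F z * (if z = x then 1 else 0)) = F x"
proof -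
  have fb: "finite (basis Q)" using assms finite_basis by blast
  have "(\<Sum>z\<in>basis Q. (if x = z then 1 else 0) * F z) = (\<Sum>z\<in>basis Q. if x = z then F x else 0)"
    by (rule sum.cong) auto
  then show "(\<Sum>z\<in>basis Q. (if x = z then 1 else 0) * F z) = F x" using fb assms(2) by simp
  have "(\<Sum>z\<in>basis Q. F z * (if z = x then 1 else 0)) = (\<Sum>z\<in>basis Q. if x = z then F x else 0)"
    by (rule sum.cong) auto
  then show "(\<Sum>z\<in>basis Q. F z * (if z = x then 1 else 0)) = F x" using fb assms(2) by simp
qed

lemma mmul_id_left: "finite Q \<Longrightarrow> x \<in> basis Q \<Longrightarrow> mmul Q id_op A x y = A x y"
  by (simp add: mmul_def id_op_def sum_basis_delta)

lemma mmul_id_right: "finite Q \<Longrightarrow> y \<in> basis Q \<Longrightarrow> mmul Q A id_op x y = A x y"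
  by (simp add: mmul_def id_op_def sum_basis_delta)

lemma mmul_id_left_eq: "finite Q \<Longrightarrow> op_eq Q (mmul Q id_op A) A"
  by (simp add: op_eq_def mmul_id_left)

lemma mmul_id_right_eq: "finite Q \<Longrightarrow> op_eq Q (mmul Q A id_op) A"
  by (simp add: op_eq_def mmul_id_right)

lemma adj_adj[simp]: "adj (adj A) = A"
  by (simp add: adj_def fun_eq_iff)

lemma adj_mmul: "adj (mmul Q A B) x y = mmul Q (adj B) (adj A) x y"
  by (simp add: adj_def mmul_def mult.commute)

lemma adj_mmul_eq: "op_eq Q (adj (mmul Q A B)) (mmul Q (adj B) (adj A))"
  by (simp add: op_eq_def adj_mmul)

lemma adj_cong: "op_eq Q A B \<Longrightarrow> op_eq Q (adj A) (adj B)"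
  by (simp add: op_eq_def adj_def)

lemma adj_smul: "adj (smul c A) = smul (cnj c) (adj A)"
  by (simp add: adj_def smul_def fun_eq_iff)

lemma adj_idop[simp]: "adj id_op = id_op"
  by (simp add: adj_def id_op_def fun_eq_iff)

lemma smul_mmul_left: "mmul Q (smul c A) B = smul c (mmul Q A B)"
  by (simp add: mmul_def smul_def fun_eq_iff sum_distrib_left mult.assoc)

lemma smul_mmul_right: "mmul Q A (smul c B) = smul c (mmul Q A B)"
  by (simp add: mmul_def smul_def fun_eq_iff sum_distrib_left mult.left_commute)

lemma smul_smul: "smul a (smul b A) = smul (a * b) A"
  by (simp add: smul_def fun_eq_iff)

lemma smul_one[simp]: "smul 1 A = A"
  by (simp add: smul_def fun_eq_iff)

lemma smul_cong: "op_eq Q A B \<Longrightarrow> op_eq Q (smul c A) (smul c B)"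
  by (simp add: op_eq_def smul_def)

lemma smul_cancel: "c \<noteq> 0 \<Longrightarrow> op_eq Q (smul c A) (smul c B) \<Longrightarrow> op_eq Q A B"
  by (simp add: op_eq_def smul_def)

lemma smul_eta: "smul c A = (\<lambda>x y. c * A x y)"
  by (simp add: fun_eq_iff smul_def)

lemma unitary_mult:
  assumes fQ: "finite Q" and A: "unitary Q A" and B: "unitary Q B"
  shows "unitary Q (mmul Q A B)"
proof -
  have A1: "op_eq Q (mmul Q A (adj A)) id_op" and A2: "op_eq Q (mmul Q (adj A) A) id_op"
    and B1: "op_eq Q (mmul Q B (adj B)) id_op" and B2: "op_eq Q (mmul Q (adj B) B) id_op"
    using A B by (auto simp: unitary_iff)
  have "op_eq Q (mmul Q (mmul Q A B) (adj (mmul Q A B))) (mmul Q (mmul Q A B) (mmul Q (adj B) (adj A)))"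
    by (rule mmul_cong[OF op_eq_refl adj_mmul_eq])
  also have "op_eq Q \<dots> (mmul Q A (mmul Q B (mmul Q (adj B) (adj A))))" by (rule mmul_assoc_eq[OF fQ])
  also have "op_eq Q \<dots> (mmul Q A (mmul Q (mmul Q B (adj B)) (adj A)))"
    by (rule mmul_cong[OF op_eq_refl op_eq_sym[OF mmul_assoc_eq[OF fQ]]])
  also have "op_eq Q \<dots> (mmul Q A (mmul Q id_op (adj A)))"
    by (rule mmul_cong[OF op_eq_refl mmul_cong[OF B1 op_eq_refl]])
  also have "op_eq Q \<dots> (mmul Q A (adj A))"
    by (rule mmul_cong[OF op_eq_refl mmul_id_left_eq[OF fQ]])
  also have "op_eq Q \<dots> id_op" by (rule A1)
  finally have C1: "op_eq Q (mmul Q (mmul Q A B) (adj (mmul Q A B))) id_op" .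
  have "op_eq Q (mmul Q (adj (mmul Q A B)) (mmul Q A B)) (mmul Q (mmul Q (adj B) (adj A)) (mmul Q A B))"
    by (rule mmul_cong[OF adj_mmul_eq op_eq_refl])
  also have "op_eq Q \<dots> (mmul Q (adj B) (mmul Q (adj A) (mmul Q A B)))" by (rule mmul_assoc_eq[OF fQ])
  also have "op_eq Q \<dots> (mmul Q (adj B) (mmul Q (mmul Q (adj A) A) B))"
    by (rule mmul_cong[OF op_eq_refl op_eq_sym[OF mmul_assoc_eq[OF fQ]]])
  also have "op_eq Q \<dots> (mmul Q (adj B) (mmul Q id_op B))"
    by (rule mmul_cong[OF op_eq_refl mmul_cong[OF A2 op_eq_refl]])
  also have "op_eq Q \<dots> (mmul Q (adj B) B)"
    by (rule mmul_cong[OF op_eq_refl mmul_id_left_eq[OF fQ]])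
  also have "op_eq Q \<dots> id_op" by (rule B2)
  finally have C2: "op_eq Q (mmul Q (adj (mmul Q A B)) (mmul Q A B)) id_op" .
  show ?thesis using C1 C2 by (simp add: unitary_iff)
qed

lemma adj_pauli: "adj (pauli Q f) = pauli Q f"
  by (simp add: adj_def fun_eq_iff pauli_herm)

lemma pauli_mult_eq: "finite Q \<Longrightarrow> mmul Q (pauli Q f) (pauli Q g) = smul (phase Q f g) (pauli Q (gadd f g))"
  by (simp add: fun_eq_iff smul_def pauli_mult)

lemma pauli_mult_comm: assumes fQ: "finite Q"
  shows "mmul Q (pauli Q h) (pauli Q k) = smul (bsign (symp Q h k)) (mmul Q (pauli Q k) (pauli Q h))"
  unfolding smul_def by (rule ext, rule ext, rule pauli_mult_comm_apply[OF fQ])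

lemma pauli_zero_eq: "finite Q \<Longrightarrow> op_eq Q (pauli Q gzero) id_op"
  by (simp add: op_eq_def pauli_zero_basis id_op_def)

lemma pauli_sq_eq: "finite Q \<Longrightarrow> op_eq Q (mmul Q (pauli Q f) (pauli Q f)) id_op"
  by (simp add: pauli_mult_eq pauli_zero_eq)

lemma pauli_adj_mult_self: "finite Q \<Longrightarrow> op_eq Q (mmul Q (adj (pauli Q h)) (pauli Q h)) id_op"
  by (simp add: adj_pauli pauli_sq_eq)

lemma unitary_pauli: "finite Q \<Longrightarrow> unitary Q (pauli Q h)"
  by (simp add: unitary_iff adj_pauli pauli_sq_eq)

lemma pauli_nonzero_entry:
  assumes fQ: "finite Q"
  shows "\<exists>x\<in>basis Q. \<exists>y\<in>basis Q. pauli Q f x y \<noteq> 0"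
proof (rule ccontr)
  assume "\<not> ?thesis"
  then have z: "\<And>x y. x \<in> basis Q \<Longrightarrow> y \<in> basis Q \<Longrightarrow> pauli Q f x y = 0" by blast
  have "mmul Q (pauli Q f) (pauli Q f) (\<lambda>j. False) (\<lambda>j. False) = id_op (\<lambda>j. False) (\<lambda>j. False)"
    using pauli_sq_eq[OF fQ] basis_nonempty by (simp add: op_eq_def)
  moreover have "mmul Q (pauli Q f) (pauli Q f) (\<lambda>j. False) (\<lambda>j. False) = 0"
    unfolding mmul_def using z basis_nonempty by simp
  ultimately show False by (simp add: id_op_def)
qed

lemma pauli_proportional_imp_eq:
  assumes fQ: "finite Q" and a: "a \<in> Gset Q" and b: "b \<in> Gset Q" and c: "c \<noteq> 0"
    and eq: "op_eq Q (pauli Q a) (smul c (pauli Q b))"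
  shows "a = b"
proof -
  have fb: "finite (basis Q)" using fQ finite_basis by blast
  have "(\<Sum>x\<in>basis Q. mmul Q (pauli Q a) (pauli Q b) x x) = phase Q a b * (\<Sum>x\<in>basis Q. pauli Q (gadd a b) x x)"
    by (simp add: pauli_mult[OF fQ] sum_distrib_left)
  also have "\<dots> = phase Q a b * (if \<forall>j\<in>Q. gadd a b j = (False,False) then 2 ^ card Q else 0)"
    by (simp add: pauli_trace[OF fQ])
  finally have T1: "(\<Sum>x\<in>basis Q. mmul Q (pauli Q a) (pauli Q b) x x) = phase Q a b * (if \<forall>j\<in>Q. gadd a b j = (False,False) then 2 ^ card Q else 0)" .
  have "(\<Sum>x\<in>basis Q. mmul Q (pauli Q a) (pauli Q b) x x) = (\<Sum>x\<in>basis Q. c)"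
  proof (rule sum.cong[OF refl])
    fix x assume x: "x \<in> basis Q"
    have "mmul Q (pauli Q a) (pauli Q b) x x = mmul Q (smul c (pauli Q b)) (pauli Q b) x x"
      using mmul_cong[OF eq op_eq_refl] x by (simp add: op_eq_def)
    also have "\<dots> = c * (phase Q b b * pauli Q (gadd b b) x x)"
      by (simp add: smul_mmul_left smul_def pauli_mult[OF fQ])
    also have "\<dots> = c" using pauli_zero_basis[OF fQ x x] by simp
    finally show "mmul Q (pauli Q a) (pauli Q b) x x = c" .
  qed
  also have "\<dots> = of_nat (card (basis Q)) * c" by simp
  finally have "phase Q a b * (if \<forall>j\<in>Q. gadd a b j = (False,False) then 2 ^ card Q else 0) = of_nat (card (basis Q)) * c"
    using T1 by simp
  moreover have "of_nat (card (basis Q)) * c \<noteq> 0" using c card_basis_pos[OF fQ] by simp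
  ultimately have "\<forall>j\<in>Q. gadd a b j = (False,False)" by (auto split: if_splits)
  then show "a = b" using a b by (auto simp: Gset_def gadd_def fun_eq_iff prod_eq_iff)
qed

definition conj_op :: "nat set \<Rightarrow> op \<Rightarrow> op \<Rightarrow> op" where
  "conj_op Q U A = mmul Q (mmul Q U A) (adj U)"

lemma conj_op_smul: "conj_op Q U (smul c A) = smul c (conj_op Q U A)"
  by (simp add: conj_op_def smul_mmul_left smul_mmul_right)

lemma conj_op_cong: "op_eq Q A B \<Longrightarrow> op_eq Q (conj_op Q U A) (conj_op Q U B)"
  by (simp add: conj_op_def mmul_cong)

lemma conj_op_mult:
  assumes fQ: "finite Q" and U: "op_eq Q (mmul Q (adj U) U) id_op"
  shows "op_eq Q (mmul Q (conj_op Q U A) (conj_op Q U B)) (conj_op Q U (mmul Q A B))"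
proof -
  have "op_eq Q (mmul Q (conj_op Q U A) (conj_op Q U B)) (mmul Q (mmul Q U A) (mmul Q (adj U) (conj_op Q U B)))"
    unfolding conj_op_def[of Q U A] by (rule mmul_assoc_eq[OF fQ])
  also have "op_eq Q (mmul Q (adj U) (conj_op Q U B)) (mmul Q B (adj U))"
  proof -
    have "op_eq Q (mmul Q (adj U) (conj_op Q U B)) (mmul Q (mmul Q (adj U) (mmul Q U B)) (adj U))"
      unfolding conj_op_def using mmul_assoc_eq[OF fQ] op_eq_sym by blast
    also have "op_eq Q \<dots> (mmul Q (mmul Q (mmul Q (adj U) U) B) (adj U))"
      using mmul_cong[OF op_eq_sym[OF mmul_assoc_eq[OF fQ]] op_eq_refl] .
    also have "op_eq Q \<dots> (mmul Q (mmul Q id_op B) (adj U))"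
      using mmul_cong[OF mmul_cong[OF U op_eq_refl] op_eq_refl] .
    also have "op_eq Q \<dots> (mmul Q B (adj U))"
      using mmul_cong[OF mmul_id_left_eq[OF fQ] op_eq_refl] .
    finally show ?thesis .
  qed
  then have "op_eq Q (mmul Q (mmul Q U A) (mmul Q (adj U) (conj_op Q U B))) (mmul Q (mmul Q U A) (mmul Q B (adj U)))"
    using mmul_cong[OF op_eq_refl] by blast
  finally have "op_eq Q (mmul Q (conj_op Q U A) (conj_op Q U B)) (mmul Q (mmul Q U A) (mmul Q B (adj U)))" .
  also have "op_eq Q \<dots> (mmul Q (mmul Q (mmul Q U A) B) (adj U))"
    using mmul_assoc_eq[OF fQ] op_eq_sym by blast
  also have "op_eq Q \<dots> (conj_op Q U (mmul Q A B))"
    unfolding conj_op_def using mmul_cong[OF mmul_assoc_eq[OF fQ] op_eq_refl] .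
  finally show ?thesis .
qed

lemma conj_op_cancel:
  assumes fQ: "finite Q" and U: "op_eq Q (mmul Q (adj U) U) id_op"
  shows "op_eq Q (mmul Q (mmul Q (adj U) (conj_op Q U A)) U) A"
proof -
  have "op_eq Q (mmul Q (adj U) (conj_op Q U A)) (mmul Q A (adj U))"
  proof -
    have "op_eq Q (mmul Q (adj U) (conj_op Q U A)) (mmul Q (mmul Q (adj U) (mmul Q U A)) (adj U))"
      unfolding conj_op_def using mmul_assoc_eq[OF fQ] op_eq_sym by blast
    also have "op_eq Q \<dots> (mmul Q (mmul Q (mmul Q (adj U) U) A) (adj U))"
      using mmul_cong[OF op_eq_sym[OF mmul_assoc_eq[OF fQ]] op_eq_refl] .
    also have "op_eq Q \<dots> (mmul Q (mmul Q id_op A) (adj U))"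
      using mmul_cong[OF mmul_cong[OF U op_eq_refl] op_eq_refl] .
    also have "op_eq Q \<dots> (mmul Q A (adj U))"
      using mmul_cong[OF mmul_id_left_eq[OF fQ] op_eq_refl] .
    finally show ?thesis .
  qed
  then have "op_eq Q (mmul Q (mmul Q (adj U) (conj_op Q U A)) U) (mmul Q (mmul Q A (adj U)) U)"
    using mmul_cong[OF _ op_eq_refl] by blast
  also have "op_eq Q \<dots> (mmul Q A (mmul Q (adj U) U))" by (rule mmul_assoc_eq[OF fQ])
  also have "op_eq Q \<dots> (mmul Q A id_op)" using mmul_cong[OF op_eq_refl U] .
  also have "op_eq Q \<dots> A" by (rule mmul_id_right_eq[OF fQ])
  finally show ?thesis .
qed

lemma conj_op_comp:
  assumes fQ: "finite Q"
  shows "op_eq Q (conj_op Q (mmul Q A B) X) (conj_op Q A (conj_op Q B X))"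
proof -
  have "op_eq Q (conj_op Q (mmul Q A B) X) (mmul Q (mmul Q (mmul Q A B) X) (mmul Q (adj B) (adj A)))"
    unfolding conj_op_def by (rule mmul_cong[OF op_eq_refl adj_mmul_eq])
  also have "op_eq Q \<dots> (mmul Q (mmul Q (mmul Q (mmul Q A B) X) (adj B)) (adj A))"
    by (rule op_eq_sym[OF mmul_assoc_eq[OF fQ]])
  also have "op_eq Q \<dots> (mmul Q (mmul Q A (mmul Q (mmul Q B X) (adj B))) (adj A))"
  proof (rule mmul_cong[OF _ op_eq_refl])
    have "op_eq Q (mmul Q (mmul Q (mmul Q A B) X) (adj B)) (mmul Q (mmul Q A (mmul Q B X)) (adj B))"
      by (rule mmul_cong[OF mmul_assoc_eq[OF fQ] op_eq_refl])
    also have "op_eq Q \<dots> (mmul Q A (mmul Q (mmul Q B X) (adj B)))" by (rule mmul_assoc_eq[OF fQ])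
    finally show "op_eq Q (mmul Q (mmul Q (mmul Q A B) X) (adj B)) (mmul Q A (mmul Q (mmul Q B X) (adj B)))" .
  qed
  also have "\<dots> = conj_op Q A (conj_op Q B X)" by (simp only: conj_op_def)
  finally show ?thesis .
qed

lemma pauli_conj:
  assumes fQ: "finite Q"
  shows "op_eq Q (conj_op Q (pauli Q h) (pauli Q k)) (smul (bsign (symp Q h k)) (pauli Q k))"
proof -
  have "op_eq Q (conj_op Q (pauli Q h) (pauli Q k)) (smul (bsign (symp Q h k)) (mmul Q (mmul Q (pauli Q k) (pauli Q h)) (pauli Q h)))"
    unfolding conj_op_def adj_pauli pauli_mult_comm[OF fQ, of h k] smul_mmul_left by (rule op_eq_refl)
  also have "op_eq Q \<dots> (smul (bsign (symp Q h k)) (mmul Q (pauli Q k) (mmul Q (pauli Q h) (pauli Q h))))"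
    by (rule smul_cong[OF mmul_assoc_eq[OF fQ]])
  also have "op_eq Q \<dots> (smul (bsign (symp Q h k)) (mmul Q (pauli Q k) id_op))"
    by (rule smul_cong[OF mmul_cong[OF op_eq_refl pauli_sq_eq[OF fQ]]])
  also have "op_eq Q \<dots> (smul (bsign (symp Q h k)) (pauli Q k))"
    by (rule smul_cong[OF mmul_id_right_eq[OF fQ]])
  finally show ?thesis .
qed

lemma apply_op_mmul: "finite Q \<Longrightarrow> apply_op Q (mmul Q A B) \<psi> x = apply_op Q A (apply_op Q B \<psi>) x"
proof -
  assume fQ: "finite Q"
  have "apply_op Q (mmul Q A B) \<psi> x = (\<Sum>y\<in>basis Q. \<Sum>z\<in>basis Q. A x z * B z y * \<psi> y)"
    by (simp add: apply_op_def mmul_def sum_distrib_right)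
  also have "\<dots> = (\<Sum>z\<in>basis Q. \<Sum>y\<in>basis Q. A x z * B z y * \<psi> y)"
    by (rule sum.swap)
  also have "\<dots> = apply_op Q A (apply_op Q B \<psi>) x"
    by (simp add: apply_op_def sum_distrib_left mult.assoc)
  finally show ?thesis .
qed

lemma apply_op_cong_op: "op_eq Q A B \<Longrightarrow> x \<in> basis Q \<Longrightarrow> apply_op Q A \<psi> x = apply_op Q B \<psi> x"
  by (simp add: apply_op_def op_eq_def)

lemma apply_op_cong_state: "(\<And>y. y \<in> basis Q \<Longrightarrow> \<psi> y = \<phi> y) \<Longrightarrow> apply_op Q A \<psi> x = apply_op Q A \<phi> x"
  by (simp add: apply_op_def)

lemma apply_op_id: "finite Q \<Longrightarrow> x \<in> basis Q \<Longrightarrow> apply_op Q id_op \<psi> x = \<psi> x"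
  by (simp add: apply_op_def id_op_def sum_basis_delta)

lemma apply_op_smul: "apply_op Q (smul c A) \<psi> x = c * apply_op Q A \<psi> x"
  by (simp add: apply_op_def smul_def sum_distrib_left mult.assoc)

lemma apply_op_scale: "apply_op Q A (\<lambda>y. c * \<psi> y) x = c * apply_op Q A \<psi> x"
  by (simp add: apply_op_def sum_distrib_left mult.left_commute)

definition braket :: "nat set \<Rightarrow> state \<Rightarrow> state \<Rightarrow> complex" where
  "braket Q \<phi> \<psi> = (\<Sum>x\<in>basis Q. cnj (\<phi> x) * \<psi> x)"

lemma braket_adj:
  "braket Q \<phi> (apply_op Q A \<psi>) = braket Q (apply_op Q (adj A) \<phi>) \<psi>"
proof -
  have "braket Q \<phi> (apply_op Q A \<psi>) = (\<Sum>x\<in>basis Q. \<Sum>y\<in>basis Q. cnj (\<phi> x) * A x y * \<psi> y)"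
    by (simp add: braket_def apply_op_def sum_distrib_left mult.assoc)
  also have "\<dots> = (\<Sum>y\<in>basis Q. \<Sum>x\<in>basis Q. cnj (\<phi> x) * A x y * \<psi> y)"
    by (rule sum.swap)
  also have "\<dots> = (\<Sum>y\<in>basis Q. (\<Sum>x\<in>basis Q. cnj (\<phi> x) * A x y) * \<psi> y)"
    by (simp add: sum_distrib_right)
  also have "\<dots> = braket Q (apply_op Q (adj A) \<phi>) \<psi>"
    unfolding braket_def apply_op_def adj_def by (simp add: mult.commute)
  finally show ?thesis .
qed

lemma braket_adj_left: "braket Q (apply_op Q A \<phi>) \<chi> = braket Q \<phi> (apply_op Q (adj A) \<chi>)"
  using braket_adj[of Q \<phi> "adj A" \<chi>] by simp

lemma braket_cong: "(\<And>x. x \<in> basis Q \<Longrightarrow> \<phi> x = \<phi>' x) \<Longrightarrow> (\<And>x. x \<in> basis Q \<Longrightarrow> \<psi> x = \<psi>' x)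
  \<Longrightarrow> braket Q \<phi> \<psi> = braket Q \<phi>' \<psi>'"
  by (simp add: braket_def)

lemma braket_scale_right: "braket Q \<phi> (\<lambda>x. c * \<psi> x) = c * braket Q \<phi> \<psi>"
  by (simp add: braket_def sum_distrib_left mult.left_commute)

lemma braket_scale_left: "braket Q (\<lambda>x. c * \<phi> x) \<psi> = cnj c * braket Q \<phi> \<psi>"
  by (simp add: braket_def sum_distrib_left mult.assoc)

lemma cnj_braket: "cnj (braket Q \<phi> \<psi>) = braket Q \<psi> \<phi>"
  by (simp add: braket_def mult.commute)

lemma braket_apply_mmul: "finite Q \<Longrightarrow> braket Q \<phi> (apply_op Q (mmul Q A B) \<psi>) = braket Q \<phi> (apply_op Q A (apply_op Q B \<psi>))"
  by (simp add: braket_def apply_op_mmul)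

lemma braket_unitary:
  assumes fQ: "finite Q" and U: "op_eq Q (mmul Q (adj A) A) id_op"
  shows "braket Q (apply_op Q A \<phi>) (apply_op Q A \<psi>) = braket Q \<phi> \<psi>"
proof -
  have "braket Q (apply_op Q A \<phi>) (apply_op Q A \<psi>) = braket Q \<phi> (apply_op Q (adj A) (apply_op Q A \<psi>))"
    by (rule braket_adj_left)
  also have "\<dots> = braket Q \<phi> (apply_op Q (mmul Q (adj A) A) \<psi>)"
    by (simp add: braket_apply_mmul[OF fQ])
  also have "\<dots> = braket Q \<phi> \<psi>"
    by (rule braket_cong) (simp_all add: apply_op_cong_op[OF U] apply_op_id[OF fQ])
  finally show ?thesis .
qed

lemma cnj_mult_self: "cnj z * z = complex_of_real ((cmod z)\<^sup>2)"
  by (subst complex_norm_square) (simp add: mult.commute)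

lemma braket_self_real: "braket Q \<psi> \<psi> = complex_of_real (\<Sum>x\<in>basis Q. (cmod (\<psi> x))\<^sup>2)"
  unfolding braket_def cnj_mult_self of_real_sum by simp

lemma unit_state_iff: "unit_state Q \<psi> \<longleftrightarrow> braket Q \<psi> \<psi> = 1"
  unfolding braket_self_real unit_state_def of_real_eq_1_iff by simp

lemma unit_nonzero: "finite Q \<Longrightarrow> unit_state Q \<psi> \<Longrightarrow> \<exists>x\<in>basis Q. \<psi> x \<noteq> 0"
proof (rule ccontr)
  assume "unit_state Q \<psi>" "\<not> (\<exists>x\<in>basis Q. \<psi> x \<noteq> 0)"
  then show False by (simp add: unit_state_def)
qed

definition eigvec :: "nat set \<Rightarrow> op \<Rightarrow> state \<Rightarrow> complex \<Rightarrow> bool" where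
  "eigvec Q A \<psi> e \<longleftrightarrow> (\<forall>x\<in>basis Q. apply_op Q A \<psi> x = e * \<psi> x)"

lemma apply_op_eigvec:
  assumes "finite Q" "eigvec Q B \<psi> e" "x \<in> basis Q"
  shows "apply_op Q A (apply_op Q B \<psi>) x = e * apply_op Q A \<psi> x"
proof -
  have "apply_op Q A (apply_op Q B \<psi>) x = apply_op Q A (\<lambda>y. e * \<psi> y) x"
    using assms(2) by (intro apply_op_cong_state) (simp add: eigvec_def)
  then show ?thesis by (simp add: apply_op_scale)
qed

lemma eigvec_scale:
  assumes "eigvec Q A \<psi> e" and "\<And>x. x \<in> basis Q \<Longrightarrow> \<phi> x = c * \<psi> x"
  shows "eigvec Q A \<phi> e"
  unfolding eigvec_def
proof
  fix x assume x: "x \<in> basis Q"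
  have "apply_op Q A \<phi> x = apply_op Q A (\<lambda>y. c * \<psi> y) x"
    using assms(2) by (rule apply_op_cong_state)
  also have "\<dots> = c * (e * \<psi> x)"
    using assms(1) x by (simp add: apply_op_scale eigvec_def)
  finally show "apply_op Q A \<phi> x = e * \<phi> x"
    using assms(2)[OF x] by simp
qed

lemma eigvec_conj:
  assumes fQ: "finite Q" and UU: "op_eq Q (mmul Q (adj U) U) id_op"
    and conj: "conj_op Q U A = smul \<sigma> B" and \<sigma>: "\<sigma> * \<sigma> = 1" and e: "eigvec Q A \<psi> e"
  shows "eigvec Q B (apply_op Q U \<psi>) (\<sigma> * e)"
  unfolding eigvec_def
proof
  fix x assume x: "x \<in> basis Q"
  have B: "B = smul \<sigma> (conj_op Q U A)"
    using conj \<sigma> by (simp add: smul_smul)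
  have "apply_op Q (conj_op Q U A) (apply_op Q U \<psi>) x = apply_op Q (mmul Q U A) (apply_op Q (adj U) (apply_op Q U \<psi>)) x"
    by (simp add: conj_op_def apply_op_mmul[OF fQ])
  also have "\<dots> = apply_op Q (mmul Q U A) \<psi> x"
  proof (rule apply_op_cong_state)
    fix y assume y: "y \<in> basis Q"
    have "apply_op Q (adj U) (apply_op Q U \<psi>) y = apply_op Q (mmul Q (adj U) U) \<psi> y"
      by (simp add: apply_op_mmul[OF fQ])
    also have "\<dots> = apply_op Q id_op \<psi> y" by (rule apply_op_cong_op[OF UU y])
    also have "\<dots> = \<psi> y" by (rule apply_op_id[OF fQ y])
    finally show "apply_op Q (adj U) (apply_op Q U \<psi>) y = \<psi> y" .
  qed
  also have "\<dots> = apply_op Q U (apply_op Q A \<psi>) x" by (simp add: apply_op_mmul[OF fQ])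
  also have "\<dots> = apply_op Q U (\<lambda>y. e * \<psi> y) x"
    by (rule apply_op_cong_state) (use e in \<open>simp add: eigvec_def\<close>)
  also have "\<dots> = e * apply_op Q U \<psi> x" by (rule apply_op_scale)
  finally show "apply_op Q B (apply_op Q U \<psi>) x = \<sigma> * e * apply_op Q U \<psi> x"
    by (simp add: B apply_op_smul)
qed

lemma common_eigvec_imp_commute:
  assumes fQ: "finite Q" and a: "eigvec Q (pauli Q a) \<phi> ea" and b: "eigvec Q (pauli Q b) \<phi> eb"
    and nz: "ea \<noteq> 0" "eb \<noteq> 0" and x: "x \<in> basis Q" "\<phi> x \<noteq> 0"
  shows "\<not> symp Q a b"
proof
  assume s: "symp Q a b"
  have "apply_op Q (pauli Q a) (apply_op Q (pauli Q b) \<phi>) x = eb * ea * \<phi> x"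
    using apply_op_eigvec[OF fQ b x(1)] a x(1) by (simp add: eigvec_def)
  moreover have "apply_op Q (pauli Q a) (apply_op Q (pauli Q b) \<phi>) x
      = apply_op Q (mmul Q (pauli Q a) (pauli Q b)) \<phi> x"
    by (simp add: apply_op_mmul[OF fQ])
  moreover have "apply_op Q (mmul Q (pauli Q a) (pauli Q b)) \<phi> x
      = - apply_op Q (mmul Q (pauli Q b) (pauli Q a)) \<phi> x"
    using s by (simp add: apply_op_def pauli_mult_comm_apply[OF fQ, of a b] bsign_def sum_negf)
  moreover have "apply_op Q (mmul Q (pauli Q b) (pauli Q a)) \<phi> x = ea * eb * \<phi> x"
    using apply_op_eigvec[OF fQ a x(1)] b x(1) by (simp add: eigvec_def apply_op_mmul[OF fQ])
  ultimately have "eb * ea * \<phi> x = - (ea * eb * \<phi> x)" by simp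
  then have "2 * (ea * eb * \<phi> x) = 0" by (simp add: mult_ac)
  then show False using nz x by simp
qed

lemma braket_eig_right: "eigvec Q A \<psi> e \<Longrightarrow> braket Q \<phi> (apply_op Q A \<psi>) = e * braket Q \<phi> \<psi>"
proof -
  assume "eigvec Q A \<psi> e"
  then have "braket Q \<phi> (apply_op Q A \<psi>) = braket Q \<phi> (\<lambda>x. e * \<psi> x)"
    by (intro braket_cong) (auto simp: eigvec_def)
  then show ?thesis by (simp add: braket_scale_right)
qed

lemma braket_eig_left: "eigvec Q A \<phi> e \<Longrightarrow> braket Q (apply_op Q A \<phi>) \<psi> = cnj e * braket Q \<phi> \<psi>"
proof -
  assume "eigvec Q A \<phi> e"
  then have "braket Q (apply_op Q A \<phi>) \<psi> = braket Q (\<lambda>x. e * \<phi> x) \<psi>"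
    by (intro braket_cong) (auto simp: eigvec_def)
  then show ?thesis by (simp add: braket_scale_left)
qed

lemma braket_pauli_move: "braket Q \<phi> (apply_op Q (pauli Q s) \<chi>) = braket Q (apply_op Q (pauli Q s) \<phi>) \<chi>"
  using braket_adj[of Q \<phi> "pauli Q s" \<chi>] by (simp add: adj_pauli)

section \<open>Counting and nondegeneracy\<close>

definition symp_perp :: "nat set \<Rightarrow> pauli_vec set \<Rightarrow> pauli_vec set" where
  "symp_perp Q V = {h \<in> Gset Q. \<forall>v\<in>V. \<not> symp Q v h}"

lemma bsign_anticomm1_sum: "(\<Sum>p\<in>UNIV. bsign (anticomm1 q p)) = (if q = (False,False) then 4 else 0)"
  unfolding sum_UNIV_pair using bool_pair_cases[of q] by (elim disjE; simp add: bsign_def anticomm1_def)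

lemma card_Gset: "finite Q \<Longrightarrow> card (Gset Q) = 4 ^ card Q"
proof -
  assume fQ: "finite Q"
  have "(\<Sum>f\<in>Gset Q. \<Prod>j\<in>Q. (1::nat)) = (\<Prod>j\<in>Q. \<Sum>p\<in>(UNIV :: (bool\<times>bool) set). (1::nat))"
    by (rule sum_Gset_prod[OF fQ])
  then show ?thesis by (simp add: UNIV_bool_pair eval_nat_numeral)
qed

lemma sum_bsign_symp_Gset:
  assumes fQ: "finite Q" and v: "v \<in> Gset Q"
  shows "(\<Sum>h\<in>Gset Q. bsign (symp Q v h)) = (if v = gzero then 4 ^ card Q else 0)"
proof -
  have "(\<Sum>h\<in>Gset Q. bsign (symp Q v h)) = (\<Sum>h\<in>Gset Q. \<Prod>j\<in>Q. bsign (anticomm1 (v j) (h j)))"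
    by (simp add: bsign_symp[OF fQ])
  also have "\<dots> = (\<Prod>j\<in>Q. \<Sum>p\<in>UNIV. bsign (anticomm1 (v j) p))"
    by (rule sum_Gset_prod[OF fQ])
  also have "\<dots> = (\<Prod>j\<in>Q. if v j = (False,False) then 4 else 0)"
    by (simp add: bsign_anticomm1_sum)
  also have "\<dots> = (if \<forall>j\<in>Q. v j = (False,False) then 4 ^ card Q else 0)"
    using fQ by (simp add: prod_zero_iff)
  also have "(\<forall>j\<in>Q. v j = (False,False)) \<longleftrightarrow> v = gzero"
    using v by (auto simp: Gset_def gzero_def fun_eq_iff)
  finally show ?thesis .
qed

lemma sum_bsign_symp_subspace:
  assumes fQ: "finite Q" and V: "gsubspace V" "V \<subseteq> Gset Q" and h: "h \<in> Gset Q"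
  shows "(\<Sum>v\<in>V. bsign (symp Q v h)) = (if h \<in> symp_perp Q V then of_nat (card V) else 0)"
proof (cases "h \<in> symp_perp Q V")
  case True
  then have "\<And>v. v \<in> V \<Longrightarrow> bsign (symp Q v h) = 1" by (simp add: symp_perp_def bsign_def)
  then show ?thesis using True by simp
next
  case False
  then obtain v0 where v0: "v0 \<in> V" "symp Q v0 h" using h by (auto simp: symp_perp_def)
  have fV: "finite V" using V(2) finite_Gset[OF fQ] finite_subset by blast
  have Vc: "\<And>v w. v \<in> V \<Longrightarrow> w \<in> V \<Longrightarrow> gadd v w \<in> V" using V(1) by (simp add: gsubspace_def)
  have "(\<Sum>v\<in>V. bsign (symp Q v h)) = (\<Sum>v\<in>V. bsign (symp Q (gadd v v0) h))"
    by (rule sum.reindex_bij_witness[where i = "\<lambda>v. gadd v v0" and j = "\<lambda>v. gadd v v0"])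
       (auto simp: Vc v0)
  also have "\<dots> = - (\<Sum>v\<in>V. bsign (symp Q v h))"
  proof -
    have "\<And>v. bsign (symp Q (gadd v v0) h) = - bsign (symp Q v h)"
      using v0(2) by (simp add: symp_gadd_left[OF fQ] bsign_def)
    then show ?thesis by (simp add: sum_negf)
  qed
  finally have "(\<Sum>v\<in>V. bsign (symp Q v h)) = 0" by simp
  then show ?thesis using False by simp
qed

lemma card_mult_card_symp_perp:
  assumes fQ: "finite Q" and V: "gsubspace V" "V \<subseteq> Gset Q"
  shows "card V * card (symp_perp Q V) = 4 ^ card Q"
proof -
  have fG: "finite (Gset Q)" using finite_Gset[OF fQ] .
  have fV: "finite V" using V(2) fG finite_subset by blast
  have z: "gzero \<in> V" using V(1) by (simp add: gsubspace_def)
  have "(\<Sum>v\<in>V. \<Sum>h\<in>Gset Q. bsign (symp Q v h)) = (\<Sum>v\<in>V. if v = gzero then 4 ^ card Q else 0)"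
    by (rule sum.cong[OF refl]) (use V(2) sum_bsign_symp_Gset[OF fQ] in blast)
  also have "\<dots> = 4 ^ card Q" using fV z by simp
  finally have A: "(\<Sum>v\<in>V. \<Sum>h\<in>Gset Q. bsign (symp Q v h)) = 4 ^ card Q" .
  have "(\<Sum>h\<in>Gset Q. \<Sum>v\<in>V. bsign (symp Q v h)) = (\<Sum>h\<in>Gset Q. if h \<in> symp_perp Q V then of_nat (card V) else 0)"
    by (rule sum.cong[OF refl]) (rule sum_bsign_symp_subspace[OF fQ V])
  also have "\<dots> = of_nat (card V) * of_nat (card (symp_perp Q V))"
  proof -
    have "symp_perp Q V \<subseteq> Gset Q" by (auto simp: symp_perp_def)
    then have "Gset Q \<inter> symp_perp Q V = symp_perp Q V" by blast
    then show ?thesis using fG by (simp add: sum.If_cases)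
  qed
  finally have B: "(\<Sum>h\<in>Gset Q. \<Sum>v\<in>V. bsign (symp Q v h)) = of_nat (card V) * of_nat (card (symp_perp Q V))" .
  have "(of_nat (card V * card (symp_perp Q V)) :: complex) = of_nat (4 ^ card Q)"
  proof -
    have "(\<Sum>v\<in>V. \<Sum>h\<in>Gset Q. bsign (symp Q v h)) = (\<Sum>h\<in>Gset Q. \<Sum>v\<in>V. bsign (symp Q v h))"
      by (rule sum.swap)
    then show ?thesis using A B by simp
  qed
  then show ?thesis using of_nat_eq_iff by blast
qed

lemma symp_nondegenerate:
  assumes fQ: "finite Q" and h: "h \<in> Gset Q" and all: "\<And>g. g \<in> Gset Q \<Longrightarrow> \<not> symp Q h g"
  shows "h = gzero"
proof (rule ccontr)
  assume "h \<noteq> gzero"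
  then have "(\<Sum>g\<in>Gset Q. bsign (symp Q h g)) = 0" using sum_bsign_symp_Gset[OF fQ h] by simp
  moreover have "(\<Sum>g\<in>Gset Q. bsign (symp Q h g)) = of_nat (card (Gset Q))"
    using all by (simp add: bsign_def)
  moreover have "card (Gset Q) > 0" using finite_Gset[OF fQ] Gset_gzero card_gt_0_iff by blast
  ultimately show False by simp
qed

lemma subspace_eq_Gset_if_perp_trivial:
  assumes fQ: "finite Q" and V: "gsubspace V" "V \<subseteq> Gset Q" and p: "symp_perp Q V \<subseteq> {gzero}"
  shows "V = Gset Q"
proof -
  have "symp_perp Q V = {gzero}" using p by (auto simp: symp_perp_def)
  then have "card V = 4 ^ card Q" using card_mult_card_symp_perp[OF fQ V] by simp
  then have "card V = card (Gset Q)" using card_Gset[OF fQ] by simp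
  then show ?thesis using V(2) finite_Gset[OF fQ] by (simp add: card_subset_eq)
qed

section \<open>Symmetric sign cocycles are coboundaries\<close>

definition trivializes :: "(pauli_vec \<Rightarrow> pauli_vec \<Rightarrow> complex) \<Rightarrow> pauli_vec set \<Rightarrow> (pauli_vec \<Rightarrow> complex) \<Rightarrow> bool" where
  "trivializes \<rho> V c \<longleftrightarrow> (\<forall>v\<in>V. c v = 1 \<or> c v = -1) \<and> (\<forall>v\<in>V. \<forall>w\<in>V. c v * c w * \<rho> v w = c (gadd v w))"

lemma gsubspace_translate_union:
  assumes "gsubspace V"
  shows "gsubspace (V \<union> (\<lambda>v. gadd v e) ` V)"
  unfolding gsubspace_def
proof (intro conjI ballI)
  show "gzero \<in> V \<union> (\<lambda>v. gadd v e) ` V" using assms by (simp add: gsubspace_def)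
next
  fix x y assume "x \<in> V \<union> (\<lambda>v. gadd v e) ` V" "y \<in> V \<union> (\<lambda>v. gadd v e) ` V"
  then obtain v w where "v \<in> V" "w \<in> V" "x = v \<or> x = gadd v e" "y = w \<or> y = gadd w e" by blast
  moreover have "gadd v w \<in> V" using assms \<open>v \<in> V\<close> \<open>w \<in> V\<close> by (simp add: gsubspace_def)
  ultimately show "gadd x y \<in> V \<union> (\<lambda>v. gadd v e) ` V"
    by (auto simp: gadd_ac)
qed

text \<open>The central extension defined by a symmetric \<open>\<plusminus>1\<close>-valued cocycle with \<open>\<rho> f f = 1\<close> is abelian
  of exponent 2, hence split.\<close>

locale sign_cocycle =
  fixes G :: "pauli_vec set" and \<rho> :: "pauli_vec \<Rightarrow> pauli_vec \<Rightarrow> complex"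
  assumes subspace: "gsubspace G" and finite_G: "finite G"
    and square: "\<And>f g. f \<in> G \<Longrightarrow> g \<in> G \<Longrightarrow> \<rho> f g * \<rho> f g = 1"
    and sym: "\<And>f g. f \<in> G \<Longrightarrow> g \<in> G \<Longrightarrow> \<rho> f g = \<rho> g f"
    and cocycle: "\<And>f g h. f \<in> G \<Longrightarrow> g \<in> G \<Longrightarrow> h \<in> G \<Longrightarrow>
      \<rho> f g * \<rho> (gadd f g) h = \<rho> g h * \<rho> f (gadd g h)"
    and diag: "\<And>f. f \<in> G \<Longrightarrow> \<rho> f f = 1"
begin

lemma zero_mem: "gzero \<in> G"
  using subspace by (simp add: gsubspace_def)

lemma add_mem: "f \<in> G \<Longrightarrow> g \<in> G \<Longrightarrow> gadd f g \<in> G"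
  using subspace by (simp add: gsubspace_def)

lemma values_pm1: "f \<in> G \<Longrightarrow> g \<in> G \<Longrightarrow> \<rho> f g = 1 \<or> \<rho> f g = -1"
  using square square_eq_1_iff by blast

lemma zero_right: "f \<in> G \<Longrightarrow> \<rho> f gzero = 1"
  using cocycle[of f gzero gzero] diag[of gzero] values_pm1[of f gzero] zero_mem by auto

lemma trivializes_translate_law:
  assumes c: "trivializes \<rho> V c" and VG: "V \<subseteq> G" and V: "gsubspace V"
    and e: "e \<in> G" and v: "v \<in> V" and w: "w \<in> V"
  shows "c v * (c w * \<rho> w e) * \<rho> v (gadd w e) = c (gadd v w) * \<rho> (gadd v w) e"
    and "(c v * \<rho> v e) * (c w * \<rho> w e) * \<rho> (gadd v e) (gadd w e) = c (gadd v w)"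
proof -
  have vG: "v \<in> G" and wG: "w \<in> G" using v w VG by auto
  have law: "c v * c w * \<rho> v w = c (gadd v w)" using c v w by (simp add: trivializes_def)
  have "c v * (c w * \<rho> w e) * \<rho> v (gadd w e) = c v * c w * (\<rho> w e * \<rho> v (gadd w e))"
    by (simp only: mult.assoc)
  also have "\<dots> = (c v * c w * \<rho> v w) * \<rho> (gadd v w) e"
    using cocycle[OF vG wG e] by (simp only: mult.assoc)
  finally show "c v * (c w * \<rho> w e) * \<rho> v (gadd w e) = c (gadd v w) * \<rho> (gadd v w) e"
    using law by simp
  have "\<rho> v e * \<rho> (gadd v e) (gadd w e) = \<rho> e (gadd w e) * \<rho> v w"
    using cocycle[OF vG e add_mem[OF wG e]] by (simp add: gadd_ac)
  moreover have "\<rho> w e * \<rho> e (gadd w e) = 1"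
    using cocycle[OF wG e e] sym[OF e add_mem[OF wG e]] diag[OF e] zero_right[OF wG] by simp
  ultimately show "(c v * \<rho> v e) * (c w * \<rho> w e) * \<rho> (gadd v e) (gadd w e) = c (gadd v w)"
    using law by (metis (no_types, lifting) mult.assoc mult.left_commute mult_1_right)
qed

lemma trivializes_translate:
  assumes c: "trivializes \<rho> V c" and VG: "V \<subseteq> G" and V: "gsubspace V"
    and e: "e \<in> G" "e \<notin> V"
  shows "trivializes \<rho> (V \<union> (\<lambda>v. gadd v e) ` V)
           (\<lambda>x. if x \<in> V then c x else c (gadd x e) * \<rho> (gadd x e) e)"
proof -
  define c' where "c' = (\<lambda>x. if x \<in> V then c x else c (gadd x e) * \<rho> (gadd x e) e)"
  have notV: "gadd v e \<notin> V" if "v \<in> V" for v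
    using that e(2) V by (metis gadd_cancel_left gsubspace_def)
  have c1: "c' v = c v" and c2: "c' (gadd v e) = c v * \<rho> v e" if "v \<in> V" for v
    using that notV by (auto simp: c'_def)
  have cV: "c v = 1 \<or> c v = -1" if "v \<in> V" for v
    using that c by (simp add: trivializes_def)
  have vwV: "gadd v w \<in> V" if "v \<in> V" "w \<in> V" for v w
    using that V by (simp add: gsubspace_def)
  note law = trivializes_translate_law[OF c VG V e(1)]
  have "trivializes \<rho> (V \<union> (\<lambda>v. gadd v e) ` V) c'"
    unfolding trivializes_def
  proof (intro conjI ballI)
    fix x assume "x \<in> V \<union> (\<lambda>v. gadd v e) ` V"
    then obtain v where v: "v \<in> V" "x = v \<or> x = gadd v e" by blast
    have "c v * \<rho> v e = 1 \<or> c v * \<rho> v e = -1"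
      using cV[OF v(1)] values_pm1[OF _ e(1), of v] v(1) VG by auto
    then show "c' x = 1 \<or> c' x = -1"
      using v cV c1 c2 by metis
  next
    fix x y assume "x \<in> V \<union> (\<lambda>v. gadd v e) ` V" "y \<in> V \<union> (\<lambda>v. gadd v e) ` V"
    then obtain v w where v: "v \<in> V" "x = v \<or> x = gadd v e" and w: "w \<in> V" "y = w \<or> y = gadd w e"
      by blast
    have vG: "v \<in> G" and wG: "w \<in> G" using v w VG by auto
    have sums: "gadd v (gadd w e) = gadd (gadd v w) e" "gadd (gadd v e) w = gadd (gadd v w) e"
      "gadd (gadd v e) (gadd w e) = gadd v w" "gadd w v = gadd v w"
      by (simp_all add: gadd_ac)
    from v(2) w(2) show "c' x * c' y * \<rho> x y = c' (gadd x y)"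
    proof (elim disjE)
      assume "x = v" "y = w"
      then show ?thesis using c v w c1 vwV by (simp add: trivializes_def)
    next
      assume "x = v" "y = gadd w e"
      then show ?thesis using law(1)[OF v(1) w(1)] v w vwV by (simp only: c1 c2 sums)
    next
      assume "x = gadd v e" "y = w"
      then show ?thesis
        using law(1)[OF w(1) v(1)] v w vwV sym[OF add_mem[OF vG e(1)] wG]
        by (simp only: c1 c2 sums mult_ac)
    next
      assume "x = gadd v e" "y = gadd w e"
      then show ?thesis using law(2)[OF v(1) w(1)] v w vwV by (simp only: c1 c2 sums)
    qed
  qed
  then show ?thesis by (simp only: c'_def)
qed

lemma coboundary: "\<exists>c. trivializes \<rho> G c"
proof -
  have "\<exists>V c. gsubspace V \<and> V \<subseteq> G \<and> E \<subseteq> V \<and> trivializes \<rho> V c" if "finite E" "E \<subseteq> G" for E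
    using that
  proof (induction E rule: finite_induct)
    case empty
    have "trivializes \<rho> {gzero} (\<lambda>_. 1)"
      using diag[OF zero_mem] by (simp add: trivializes_def)
    then show ?case using zero_mem by (intro exI[of _ "{gzero}"]) (auto simp: gsubspace_def)
  next
    case (insert e E)
    then obtain V c where V: "gsubspace V" "V \<subseteq> G" "E \<subseteq> V" "trivializes \<rho> V c" by auto
    show ?case
    proof (cases "e \<in> V")
      case True
      then show ?thesis using V by blast
    next
      case False
      have "V \<union> (\<lambda>v. gadd v e) ` V \<subseteq> G" using V(2) insert.prems add_mem by auto
      moreover have "e \<in> (\<lambda>v. gadd v e) ` V" using V(1) by (force simp: gsubspace_def)
      ultimately show ?thesis
        using gsubspace_translate_union[OF V(1)] trivializes_translate[OF V(4,2,1) _ False] insert.prems V(3)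
        by blast
    qed
  qed
  from this[OF finite_G order_refl] obtain V c where "V \<subseteq> G" "G \<subseteq> V" "trivializes \<rho> V c"
    by blast
  then show ?thesis by (metis subset_antisym)
qed

end

section \<open>Operators commuting with all Paulis are scalar\<close>

lemma commutes_with_z_imp_diagonal:
  assumes fQ: "finite Q"
    and comm: "\<And>j. j \<in> Q \<Longrightarrow> op_eq Q (mmul Q (pauli Q (z_at j)) H) (mmul Q H (pauli Q (z_at j)))"
    and xy: "x \<noteq> y" "x \<in> basis Q" "y \<in> basis Q"
  shows "H x y = 0"
proof -
  have fb: "finite (basis Q)" using fQ finite_basis by blast
  obtain j where j: "j \<in> Q" "x j \<noteq> y j" using xy basis_eq_iff[of x Q y] by blast
  have "mmul Q (pauli Q (z_at j)) H x y = mmul Q H (pauli Q (z_at j)) x y"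
    using comm[OF j(1)] xy by (simp add: op_eq_def)
  moreover have "mmul Q (pauli Q (z_at j)) H x y = (if x j then -1 else 1) * H x y"
  proof -
    have "mmul Q (pauli Q (z_at j)) H x y = (\<Sum>z\<in>basis Q. (if x = z then (if x j then -1 else 1) * H x y else 0))"
      unfolding mmul_def by (rule sum.cong) (auto simp: pauli_z_at[OF fQ j(1) xy(2)])
    then show ?thesis using fb xy(2) by simp
  qed
  moreover have "mmul Q H (pauli Q (z_at j)) x y = H x y * (if y j then -1 else 1)"
  proof -
    have "mmul Q H (pauli Q (z_at j)) x y = (\<Sum>z\<in>basis Q. (if y = z then H x y * (if y j then -1 else 1) else 0))"
      unfolding mmul_def by (rule sum.cong) (auto simp: pauli_z_at[OF fQ j(1) _ xy(3)])
    then show ?thesis using fb xy(3) by simp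
  qed
  ultimately have "(if x j then -1 else 1) * H x y = H x y * (if y j then -1 else 1)" by simp
  then show "H x y = 0" using j(2) by (cases "x j") auto
qed

lemma commutes_with_x_imp_shift:
  assumes fQ: "finite Q"
    and comm: "\<And>b. b \<in> basis Q \<Longrightarrow> op_eq Q (mmul Q (pauli Q (x_string b)) H) (mmul Q H (pauli Q (x_string b)))"
    and xya: "x \<in> basis Q" "y \<in> basis Q" "a \<in> basis Q"
  shows "H x (bits_xor Q y a) = H (bits_xor Q x a) y"
proof -
  have fb: "finite (basis Q)" using fQ finite_basis by blast
  have "mmul Q (pauli Q (x_string a)) H x y = mmul Q H (pauli Q (x_string a)) x y"
    using comm[OF xya(3)] xya by (simp add: op_eq_def)
  moreover have "mmul Q (pauli Q (x_string a)) H x y = H (bits_xor Q x a) y"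
  proof -
    have "mmul Q (pauli Q (x_string a)) H x y = (\<Sum>z\<in>basis Q. (if bits_xor Q x a = z then H (bits_xor Q x a) y else 0))"
      unfolding mmul_def by (rule sum.cong) (auto simp: pauli_x_string[OF fQ xya(1)])
    then show ?thesis using fb bits_xor_basis[of Q x a] by simp
  qed
  moreover have "mmul Q H (pauli Q (x_string a)) x y = H x (bits_xor Q y a)"
  proof -
    have "mmul Q H (pauli Q (x_string a)) x y = (\<Sum>z\<in>basis Q. (if bits_xor Q y a = z then H x (bits_xor Q y a) else 0))"
      unfolding mmul_def
    proof (rule sum.cong[OF refl])
      fix z assume z: "z \<in> basis Q"
      have "y = bits_xor Q z a \<longleftrightarrow> bits_xor Q y a = z"
        using bits_xor_involution[OF z, of a] bits_xor_involution[OF xya(2), of a] by metis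
      then show "H x z * pauli Q (x_string a) z y = (if bits_xor Q y a = z then H x (bits_xor Q y a) else 0)"
        using pauli_x_string[OF fQ z xya(2)] by auto
    qed
    then show ?thesis using fb bits_xor_basis[of Q y a] by simp
  qed
  ultimately show ?thesis by simp
qed

lemma commutes_with_paulis_imp_scalar:
  assumes fQ: "finite Q"
    and comm: "\<And>g. g \<in> Gset Q \<Longrightarrow> op_eq Q (mmul Q (pauli Q g) H) (mmul Q H (pauli Q g))"
    and x: "x \<in> basis Q" and y: "y \<in> basis Q" and y0: "y0 \<in> basis Q"
  shows "H x y = (if x = y then H y0 y0 else 0)"
proof -
  have commX: "op_eq Q (mmul Q (pauli Q (x_string a)) H) (mmul Q H (pauli Q (x_string a)))"
    if "a \<in> basis Q" for a
    using comm[OF x_string_Gset[OF that]] .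
  have commZ: "op_eq Q (mmul Q (pauli Q (z_at j)) H) (mmul Q H (pauli Q (z_at j)))" if "j \<in> Q" for j
    using comm[OF z_at_Gset[OF that]] .
  have shift: "H x (bits_xor Q y a) = H (bits_xor Q x a) y"
    if "x \<in> basis Q" "y \<in> basis Q" "a \<in> basis Q" for x y a
    using commutes_with_x_imp_shift[OF fQ _ that] commX by blast
  have diag: "H x x = H y0 y0" if "x \<in> basis Q" for x
  proof -
    define a where "a = bits_xor Q x y0"
    have a: "a \<in> basis Q" by (simp add: a_def bits_xor_basis)
    have "bits_xor Q y0 a = x" using that y0 by (auto simp: a_def bits_xor_def basis_def fun_eq_iff)
    moreover have "bits_xor Q x a = y0" using that y0 by (auto simp: a_def bits_xor_def basis_def fun_eq_iff)
    ultimately show ?thesis using shift[OF that y0 a] by simp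
  qed
  show ?thesis
    using commutes_with_z_imp_diagonal[OF fQ commZ _ x y] diag[OF x] by auto
qed

definition clifford_action :: "nat set \<Rightarrow> op \<Rightarrow> (pauli_vec \<Rightarrow> pauli_vec) \<Rightarrow> (pauli_vec \<Rightarrow> complex) \<Rightarrow> bool" where
  "clifford_action Q U u s \<longleftrightarrow> unitary Q U \<and>
     (\<forall>f\<in>Gset Q. u f \<in> Gset Q \<and> (s f = 1 \<or> s f = -1) \<and>
        op_eq Q (conj_op Q U (pauli Q f)) (smul (s f) (pauli Q (u f))))"

lemma clifford_iff_action: "clifford Q U \<longleftrightarrow> (\<exists>u s. clifford_action Q U u s)"
proof
  assume "clifford Q U"
  then obtain u where U: "unitary Q U" and u: "\<forall>f\<in>Gset Q. u f \<in> Gset Q \<and> (\<exists>s::complex. (s = 1 \<or> s = -1) \<and>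
      op_eq Q (conj_op Q U (pauli Q f)) (smul s (pauli Q (u f))))"
    by (auto simp: clifford_def conj_op_def smul_eta)
  then obtain s where "\<forall>f\<in>Gset Q. (s f = 1 \<or> s f = -1) \<and>
      op_eq Q (conj_op Q U (pauli Q f)) (smul (s f) (pauli Q (u f)))"
    by metis
  then show "\<exists>u s. clifford_action Q U u s" using U u by (auto simp: clifford_action_def)
next
  assume "\<exists>u s. clifford_action Q U u s"
  then show "clifford Q U" by (force simp: clifford_def clifford_action_def conj_op_def smul_eta)
qed

lemma clifford_actionD:
  assumes "clifford_action Q U u s"
  shows "op_eq Q (mmul Q (adj U) U) id_op"
    and "f \<in> Gset Q \<Longrightarrow> u f \<in> Gset Q"
    and "f \<in> Gset Q \<Longrightarrow> s f = 1 \<or> s f = -1"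
    and "f \<in> Gset Q \<Longrightarrow> op_eq Q (conj_op Q U (pauli Q f)) (smul (s f) (pauli Q (u f)))"
  using assms by (auto simp: clifford_action_def unitary_iff)

lemma clifford_action_conj_mult:
  assumes fQ: "finite Q" and U: "clifford_action Q U u s" and f: "f \<in> Gset Q" and g: "g \<in> Gset Q"
  shows "op_eq Q (conj_op Q U (mmul Q (pauli Q f) (pauli Q g)))
           (smul (s f * s g) (mmul Q (pauli Q (u f)) (pauli Q (u g))))"
proof -
  note cj = clifford_actionD(4)[OF U]
  have "op_eq Q (conj_op Q U (mmul Q (pauli Q f) (pauli Q g))) (mmul Q (conj_op Q U (pauli Q f)) (conj_op Q U (pauli Q g)))"
    using conj_op_mult[OF fQ clifford_actionD(1)[OF U]] op_eq_sym by blast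
  also have "op_eq Q \<dots> (mmul Q (smul (s f) (pauli Q (u f))) (smul (s g) (pauli Q (u g))))"
    by (rule mmul_cong[OF cj[OF f] cj[OF g]])
  also have "mmul Q (smul (s f) (pauli Q (u f))) (smul (s g) (pauli Q (u g))) = smul (s f * s g) (mmul Q (pauli Q (u f)) (pauli Q (u g)))"
    by (simp add: smul_mmul_left smul_mmul_right smul_smul mult.commute)
  finally show ?thesis .
qed

lemma clifford_action_gadd:
  assumes fQ: "finite Q" and U: "clifford_action Q U u s" and f: "f \<in> Gset Q" and g: "g \<in> Gset Q"
  shows "u (gadd f g) = gadd (u f) (u g)"
proof -
  note prod = clifford_action_conj_mult[OF fQ U] and cj = clifford_actionD(4)[OF U]
    and uG = clifford_actionD(2)[OF U]
  have snz: "\<And>f. f \<in> Gset Q \<Longrightarrow> s f \<noteq> 0" using clifford_actionD(3)[OF U] by fastforce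
  have fg: "gadd f g \<in> Gset Q" using f g Gset_gadd by blast
  have "op_eq Q (smul (phase Q f g) (conj_op Q U (pauli Q (gadd f g)))) (smul (s f * s g) (smul (phase Q (u f) (u g)) (pauli Q (gadd (u f) (u g)))))"
    using prod[OF f g] by (simp add: pauli_mult_eq[OF fQ] conj_op_smul)
  moreover have "op_eq Q (smul (phase Q f g) (conj_op Q U (pauli Q (gadd f g)))) (smul (phase Q f g) (smul (s (gadd f g)) (pauli Q (u (gadd f g)))))"
    by (rule smul_cong[OF cj[OF fg]])
  ultimately have "op_eq Q (smul (s f * s g * phase Q (u f) (u g)) (pauli Q (gadd (u f) (u g)))) (smul (phase Q f g * s (gadd f g)) (pauli Q (u (gadd f g))))"
    by (simp add: smul_smul) (meson op_eq_sym op_eq_trans)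
  then have "op_eq Q (pauli Q (gadd (u f) (u g))) (smul ((phase Q f g * s (gadd f g)) / (s f * s g * phase Q (u f) (u g))) (pauli Q (u (gadd f g))))"
    using snz[OF f] snz[OF g]
    by (auto simp: op_eq_def smul_def field_simps)
  moreover have "(phase Q f g * s (gadd f g)) / (s f * s g * phase Q (u f) (u g)) \<noteq> 0"
    using snz[OF f] snz[OF g] snz[OF fg] by simp
  ultimately show ?thesis
    using pauli_proportional_imp_eq[OF fQ Gset_gadd[OF uG[OF f] uG[OF g]] uG[OF fg]] by metis
qed

lemma clifford_action_symp:
  assumes fQ: "finite Q" and U: "clifford_action Q U u s" and f: "f \<in> Gset Q" and g: "g \<in> Gset Q"
  shows "symp Q (u f) (u g) = symp Q f g"
proof -
  note prod = clifford_action_conj_mult[OF fQ U] and cj = clifford_actionD(4)[OF U]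
    and uG = clifford_actionD(2)[OF U]
  have snz: "\<And>f. f \<in> Gset Q \<Longrightarrow> s f \<noteq> 0" using clifford_actionD(3)[OF U] by fastforce
  have "op_eq Q (smul (s f * s g) (mmul Q (pauli Q (u f)) (pauli Q (u g)))) (conj_op Q U (mmul Q (pauli Q f) (pauli Q g)))"
    using prod[OF f g] op_eq_sym by blast
  also have "conj_op Q U (mmul Q (pauli Q f) (pauli Q g)) = smul (bsign (symp Q f g)) (conj_op Q U (mmul Q (pauli Q g) (pauli Q f)))"
  proof -
    have "mmul Q (pauli Q f) (pauli Q g) = smul (bsign (symp Q f g)) (mmul Q (pauli Q g) (pauli Q f))"
      by (simp add: fun_eq_iff smul_def pauli_mult_comm_apply[OF fQ, of f g])
    then show ?thesis by (simp add: conj_op_smul)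
  qed
  also have "op_eq Q \<dots> (smul (bsign (symp Q f g)) (smul (s g * s f) (mmul Q (pauli Q (u g)) (pauli Q (u f)))))"
    by (rule smul_cong[OF prod[OF g f]])
  finally have E: "op_eq Q (smul (s f * s g) (mmul Q (pauli Q (u f)) (pauli Q (u g))))
      (smul (bsign (symp Q f g) * (s g * s f)) (mmul Q (pauli Q (u g)) (pauli Q (u f))))"
    by (simp add: smul_smul)
  have M: "mmul Q (pauli Q (u f)) (pauli Q (u g)) = smul (bsign (symp Q (u f) (u g))) (mmul Q (pauli Q (u g)) (pauli Q (u f)))"
    by (simp add: fun_eq_iff smul_def pauli_mult_comm_apply[OF fQ, of "u f" "u g"])
  obtain x y where xy: "x \<in> basis Q" "y \<in> basis Q" "pauli Q (gadd (u g) (u f)) x y \<noteq> 0"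
    using pauli_nonzero_entry[OF fQ] by blast
  have "s f * s g * (bsign (symp Q (u f) (u g)) * mmul Q (pauli Q (u g)) (pauli Q (u f)) x y)
      = bsign (symp Q f g) * (s g * s f) * mmul Q (pauli Q (u g)) (pauli Q (u f)) x y"
    using op_eq_D[OF E xy(1,2)] M by (simp add: smul_def)
  moreover have "mmul Q (pauli Q (u g)) (pauli Q (u f)) x y \<noteq> 0"
    using xy(3) by (simp add: pauli_mult[OF fQ])
  ultimately have "bsign (symp Q (u f) (u g)) = bsign (symp Q f g)"
    using snz[OF f] snz[OF g] by (simp add: mult_ac)
  then show ?thesis by (simp add: bsign_inj)
qed

lemma clifford_action_inj:
  assumes fQ: "finite Q" and U: "clifford_action Q U u s"
  shows "inj_on u (Gset Q)"
proof (rule inj_onI)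
  fix f g assume f: "f \<in> Gset Q" and g: "g \<in> Gset Q" and e: "u f = u g"
  note UU = clifford_actionD(1)[OF U] and cj = clifford_actionD(4)[OF U]
  have snz: "s f \<noteq> 0" "s g \<noteq> 0" and ssq: "s g * s g = 1"
    using clifford_actionD(3)[OF U f] clifford_actionD(3)[OF U g] by auto
  have A: "op_eq Q (pauli Q f) (mmul Q (mmul Q (adj U) (smul (s f) (pauli Q (u f)))) U)"
    using op_eq_trans[OF op_eq_sym[OF conj_op_cancel[OF fQ UU, of "pauli Q f"]]
          mmul_cong[OF mmul_cong[OF op_eq_refl cj[OF f]] op_eq_refl]] .
  have B: "op_eq Q (pauli Q g) (mmul Q (mmul Q (adj U) (smul (s g) (pauli Q (u f)))) U)"
    using op_eq_trans[OF op_eq_sym[OF conj_op_cancel[OF fQ UU, of "pauli Q g"]]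
          mmul_cong[OF mmul_cong[OF op_eq_refl cj[OF g]] op_eq_refl]] e by simp
  define X where "X = mmul Q (mmul Q (adj U) (pauli Q (u f))) U"
  have A': "op_eq Q (pauli Q f) (smul (s f) X)"
    using A by (simp add: X_def smul_mmul_left smul_mmul_right)
  have B': "op_eq Q (pauli Q g) (smul (s g) X)"
    using B by (simp add: X_def smul_mmul_left smul_mmul_right)
  have X: "op_eq Q X (smul (s g) (pauli Q g))"
    using smul_cong[OF B', of "s g"] ssq by (simp add: smul_smul op_eq_sym)
  have "op_eq Q (pauli Q f) (smul (s f) (smul (s g) (pauli Q g)))"
    using op_eq_trans[OF A' smul_cong[OF X]] .
  then have "op_eq Q (pauli Q f) (smul (s f * s g) (pauli Q g))"
    by (simp add: smul_smul)
  moreover have "s f * s g \<noteq> 0" using snz by simp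
  ultimately show "f = g" using pauli_proportional_imp_eq[OF fQ f g] by blast
qed

lemma clifford_action_pauli_mult:
  assumes fQ: "finite Q" and U: "clifford_action Q U u s"
  shows "clifford_action Q (mmul Q (pauli Q h) U) u (\<lambda>g. s g * bsign (symp Q h (u g)))"
  unfolding clifford_action_def
proof (intro conjI ballI)
  show "unitary Q (mmul Q (pauli Q h) U)"
    using unitary_mult[OF fQ unitary_pauli[OF fQ]] U by (simp add: clifford_action_def)
next
  fix g assume g: "g \<in> Gset Q"
  show "u g \<in> Gset Q" by (rule clifford_actionD(2)[OF U g])
  show "s g * bsign (symp Q h (u g)) = 1 \<or> s g * bsign (symp Q h (u g)) = -1"
    using clifford_actionD(3)[OF U g] by (auto simp: bsign_def)
  have "op_eq Q (conj_op Q (mmul Q (pauli Q h) U) (pauli Q g)) (conj_op Q (pauli Q h) (conj_op Q U (pauli Q g)))"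
    by (rule conj_op_comp[OF fQ])
  also have "op_eq Q \<dots> (conj_op Q (pauli Q h) (smul (s g) (pauli Q (u g))))"
    by (rule conj_op_cong[OF clifford_actionD(4)[OF U g]])
  also have "op_eq Q \<dots> (smul (s g) (smul (bsign (symp Q h (u g))) (pauli Q (u g))))"
    unfolding conj_op_smul by (rule smul_cong[OF pauli_conj[OF fQ]])
  finally show "op_eq Q (conj_op Q (mmul Q (pauli Q h) U) (pauli Q g))
      (smul (s g * bsign (symp Q h (u g))) (pauli Q (u g)))"
    by (simp add: smul_smul)
qed

section \<open>Realising a symplectic map by a Clifford unitary\<close>

definition symplectic_map :: "nat set \<Rightarrow> (pauli_vec \<Rightarrow> pauli_vec) \<Rightarrow> bool" where
  "symplectic_map Q u \<longleftrightarrow> bij_betw u (Gset Q) (Gset Q) \<and>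
     (\<forall>f\<in>Gset Q. \<forall>g\<in>Gset Q. u (gadd f g) = gadd (u f) (u g) \<and> symp Q (u f) (u g) = symp Q f g)"

text \<open>The phases of \<open>\<sigma>(u f) \<sigma>(u g)\<close> and \<open>\<sigma>(f) \<sigma>(g)\<close> differ by a symmetric sign cocycle, because
  \<open>u\<close> preserves commutation; its coboundary \<open>c\<close> makes \<open>f \<mapsto> c f \<sigma>(u f)\<close> a projective representation
  with the same phases as \<open>\<sigma>\<close>.\<close>

lemma symplectic_map_sign_lift:
  assumes fQ: "finite Q" and u: "symplectic_map Q u"
  shows "\<exists>c. (\<forall>f\<in>Gset Q. c f = 1 \<or> c f = -1) \<and>
    (\<forall>f\<in>Gset Q. \<forall>g\<in>Gset Q. c f * c g * phase Q (u f) (u g) = phase Q f g * c (gadd f g))"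
proof -
  have uadd: "u (gadd f g) = gadd (u f) (u g)" and usymp: "symp Q (u f) (u g) = symp Q f g"
    if "f \<in> Gset Q" "g \<in> Gset Q" for f g
    using u that by (auto simp: symplectic_map_def)
  define \<rho> where "\<rho> f g = phase Q (u f) (u g) / phase Q f g" for f g
  have "sign_cocycle (Gset Q) \<rho>"
  proof
    show "gsubspace (Gset Q)" "finite (Gset Q)" by (simp_all add: gsubspace_Gset finite_Gset fQ)
  next
    fix f g assume f: "f \<in> Gset Q" and g: "g \<in> Gset Q"
    show "\<rho> f g * \<rho> f g = 1"
      using phase_sq[OF fQ, of "u f" "u g"] phase_sq[OF fQ, of f g] usymp[OF f g] by (simp add: \<rho>_def)
    show "\<rho> f g = \<rho> g f"
      using phase_comm[OF fQ, of "u f" "u g"] phase_comm[OF fQ, of f g] usymp[OF f g] by (simp add: \<rho>_def)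
  next
    fix f g h assume f: "f \<in> Gset Q" and g: "g \<in> Gset Q" and h: "h \<in> Gset Q"
    have "phase Q (u f) (u g) * phase Q (u (gadd f g)) (u h) = phase Q (u g) (u h) * phase Q (u f) (u (gadd g h))"
      using uadd[OF f g] uadd[OF g h] phase_cocycle by simp
    then show "\<rho> f g * \<rho> (gadd f g) h = \<rho> g h * \<rho> f (gadd g h)"
      using phase_cocycle[of Q f g h] by (simp add: \<rho>_def field_simps)
  qed (simp add: \<rho>_def)
  then obtain c where c: "trivializes \<rho> (Gset Q) c"
    using sign_cocycle.coboundary by blast
  have "c f * c g * phase Q (u f) (u g) = phase Q f g * c (gadd f g)"
    if "f \<in> Gset Q" "g \<in> Gset Q" for f g
    using c that by (simp add: trivializes_def \<rho>_def field_simps)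
  then show ?thesis using c by (auto simp: trivializes_def)
qed

definition pauli_twirl :: "nat set \<Rightarrow> (pauli_vec \<Rightarrow> op) \<Rightarrow> bits \<Rightarrow> bits \<Rightarrow> op" where
  "pauli_twirl Q \<tau> x0 y0 x y = (\<Sum>f\<in>Gset Q. \<tau> f x x0 * pauli Q f y0 y)"

lemma pauli_twirl_intertwines:
  assumes fQ: "finite Q" and g: "g \<in> Gset Q"
    and \<tau>: "\<And>f. f \<in> Gset Q \<Longrightarrow> mmul Q (\<tau> g) (\<tau> f) = smul (phase Q g f) (\<tau> (gadd g f))"
  shows "mmul Q (\<tau> g) (pauli_twirl Q \<tau> x0 y0) = mmul Q (pauli_twirl Q \<tau> x0 y0) (pauli Q g)"
proof (intro ext)
  fix x y
  have "mmul Q (\<tau> g) (pauli_twirl Q \<tau> x0 y0) x y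
      = (\<Sum>f\<in>Gset Q. \<Sum>z\<in>basis Q. \<tau> g x z * \<tau> f z x0 * pauli Q f y0 y)"
    unfolding mmul_def pauli_twirl_def
    by (subst sum.swap) (simp add: sum_distrib_left mult.assoc)
  also have "\<dots> = (\<Sum>f\<in>Gset Q. phase Q g f * \<tau> (gadd g f) x x0 * pauli Q f y0 y)"
    by (rule sum.cong) (simp_all add: sum_distrib_right[symmetric] fun_cong[OF fun_cong[OF \<tau>]]
        mmul_def[symmetric] smul_def)
  also have "\<dots> = (\<Sum>f\<in>Gset Q. \<tau> (gadd f g) x x0 * (phase Q (gadd f g) g * pauli Q (gadd (gadd f g) g) y0 y))"
    by (intro sum.cong refl) (simp only: gadd_cancel_right phase_gadd_swap gadd_comm[of g] mult_ac)
  also have "\<dots> = (\<Sum>f\<in>Gset Q. \<tau> f x x0 * (phase Q f g * pauli Q (gadd f g) y0 y))"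
    by (rule sum_Gset_shift[OF g])
  also have "\<dots> = (\<Sum>f\<in>Gset Q. \<Sum>z\<in>basis Q. \<tau> f x x0 * pauli Q f y0 z * pauli Q g z y)"
    by (simp add: pauli_mult[OF fQ, symmetric] mmul_def sum_distrib_left mult.assoc)
  also have "\<dots> = mmul Q (pauli_twirl Q \<tau> x0 y0) (pauli Q g) x y"
    unfolding mmul_def pauli_twirl_def
    by (subst sum.swap) (simp add: sum_distrib_right)
  finally show "mmul Q (\<tau> g) (pauli_twirl Q \<tau> x0 y0) x y = mmul Q (pauli_twirl Q \<tau> x0 y0) (pauli Q g) x y" .
qed

text \<open>Only \<open>f = 0\<close> contributes to the trace of \<open>x0 \<mapsto> pauli_twirl Q \<tau> x0 y0 x0 y0\<close>.\<close>

lemma pauli_twirl_nonzero: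
  assumes fQ: "finite Q" and u: "symplectic_map Q u" and c0: "c gzero = 1" and y0: "y0 \<in> basis Q"
  shows "\<exists>x0\<in>basis Q. pauli_twirl Q (\<lambda>f. smul (c f) (pauli Q (u f))) x0 y0 x0 y0 \<noteq> 0"
proof (rule ccontr)
  assume "\<not> ?thesis"
  then have zero: "(\<Sum>x\<in>basis Q. pauli_twirl Q (\<lambda>f. smul (c f) (pauli Q (u f))) x y0 x y0) = 0"
    by simp
  have inj: "inj_on u (Gset Q)" and uG: "\<And>f. f \<in> Gset Q \<Longrightarrow> u f \<in> Gset Q"
    using u by (auto simp: symplectic_map_def bij_betw_def)
  have "u (gadd gzero gzero) = gadd (u gzero) (u gzero)"
    using u Gset_gzero unfolding symplectic_map_def by blast
  then have u0: "u gzero = gzero" by simp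
  have "(\<Sum>x\<in>basis Q. pauli_twirl Q (\<lambda>f. smul (c f) (pauli Q (u f))) x y0 x y0)
      = (\<Sum>f\<in>Gset Q. c f * (\<Sum>x\<in>basis Q. pauli Q (u f) x x) * pauli Q f y0 y0)"
    unfolding pauli_twirl_def
    by (subst sum.swap) (simp add: smul_def sum_distrib_left sum_distrib_right mult_ac)
  also have "\<dots> = (\<Sum>f\<in>Gset Q. if f = gzero then 2 ^ card Q else 0)"
  proof (rule sum.cong[OF refl])
    fix f assume f: "f \<in> Gset Q"
    have "(\<forall>j\<in>Q. u f j = (False, False)) \<longleftrightarrow> u f = gzero"
      using uG[OF f] by (auto simp: Gset_def fun_eq_iff)
    also have "\<dots> \<longleftrightarrow> f = gzero"
      using inj f u0 by (metis Gset_gzero inj_onD)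
    finally have "(\<forall>j\<in>Q. u f j = (False, False)) \<longleftrightarrow> f = gzero" .
    then show "c f * (\<Sum>x\<in>basis Q. pauli Q (u f) x x) * pauli Q f y0 y0 = (if f = gzero then 2 ^ card Q else 0)"
      using c0 pauli_zero_basis[OF fQ y0 y0] by (simp add: pauli_trace[OF fQ])
  qed
  also have "\<dots> = 2 ^ card Q" using finite_Gset[OF fQ] by simp
  finally show False using zero by simp
qed

text \<open>Taking adjoints of \<open>A W = W B\<close> gives \<open>W\<^sup>\<dagger> A = B W\<^sup>\<dagger>\<close>.\<close>

lemma intertwiner_gram_commute:
  assumes fQ: "finite Q" and AW: "op_eq Q (mmul Q A W) (mmul Q W B)"
    and A: "adj A = A" and B: "adj B = B"
  shows "op_eq Q (mmul Q B (mmul Q (adj W) W)) (mmul Q (mmul Q (adj W) W) B)"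
    and "op_eq Q (mmul Q A (mmul Q W (adj W))) (mmul Q (mmul Q W (adj W)) A)"
proof -
  have WA: "op_eq Q (mmul Q (adj W) A) (mmul Q B (adj W))"
  proof -
    have "op_eq Q (mmul Q (adj W) (adj A)) (adj (mmul Q A W))"
      using adj_mmul_eq op_eq_sym by blast
    also have "op_eq Q \<dots> (adj (mmul Q W B))" by (rule adj_cong[OF AW])
    also have "op_eq Q \<dots> (mmul Q (adj B) (adj W))" by (rule adj_mmul_eq)
    finally show ?thesis by (simp add: A B)
  qed
  note assoc = mmul_assoc_eq[OF fQ] and assoc' = op_eq_sym[OF mmul_assoc_eq[OF fQ]]
  have "op_eq Q (mmul Q B (mmul Q (adj W) W)) (mmul Q (mmul Q B (adj W)) W)" by (rule assoc')
  also have "op_eq Q \<dots> (mmul Q (mmul Q (adj W) A) W)" by (rule mmul_cong[OF op_eq_sym[OF WA] op_eq_refl])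
  also have "op_eq Q \<dots> (mmul Q (adj W) (mmul Q A W))" by (rule assoc)
  also have "op_eq Q \<dots> (mmul Q (adj W) (mmul Q W B))" by (rule mmul_cong[OF op_eq_refl AW])
  also have "op_eq Q \<dots> (mmul Q (mmul Q (adj W) W) B)" by (rule assoc')
  finally show "op_eq Q (mmul Q B (mmul Q (adj W) W)) (mmul Q (mmul Q (adj W) W) B)" .
  have "op_eq Q (mmul Q A (mmul Q W (adj W))) (mmul Q (mmul Q A W) (adj W))" by (rule assoc')
  also have "op_eq Q \<dots> (mmul Q (mmul Q W B) (adj W))" by (rule mmul_cong[OF AW op_eq_refl])
  also have "op_eq Q \<dots> (mmul Q W (mmul Q B (adj W)))" by (rule assoc)
  also have "op_eq Q \<dots> (mmul Q W (mmul Q (adj W) A))" by (rule mmul_cong[OF op_eq_refl op_eq_sym[OF WA]])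
  also have "op_eq Q \<dots> (mmul Q (mmul Q W (adj W)) A)" by (rule assoc')
  finally show "op_eq Q (mmul Q A (mmul Q W (adj W))) (mmul Q (mmul Q W (adj W)) A)" .
qed

text \<open>The Gram operators \<open>W\<^sup>\<dagger>W\<close> and \<open>WW\<^sup>\<dagger>\<close> commute with all Paulis, so both are scalar, and
  \<open>WW\<^sup>\<dagger>W = W(W\<^sup>\<dagger>W)\<close> shows that the two scalars agree.\<close>

lemma intertwiner_gram_scalar:
  assumes fQ: "finite Q" and x0: "x0 \<in> basis Q" and y0: "y0 \<in> basis Q" and W0: "W x0 y0 \<noteq> 0"
    and int: "\<And>g. g \<in> Gset Q \<Longrightarrow> mmul Q (\<tau> g) W = mmul Q W (pauli Q g)"
    and herm: "\<And>g. g \<in> Gset Q \<Longrightarrow> adj (\<tau> g) = \<tau> g"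
    and span: "\<And>h. h \<in> Gset Q \<Longrightarrow> \<exists>g\<in>Gset Q. \<exists>a. a \<noteq> 0 \<and> \<tau> g = smul a (pauli Q h)"
  shows "op_eq Q (mmul Q (adj W) W) (smul (complex_of_real (\<Sum>x\<in>basis Q. (cmod (W x y0))\<^sup>2)) id_op)"
    and "op_eq Q (mmul Q W (adj W)) (smul (complex_of_real (\<Sum>x\<in>basis Q. (cmod (W x y0))\<^sup>2)) id_op)"
proof -
  have fb: "finite (basis Q)" using fQ finite_basis by blast
  define H where "H = mmul Q (adj W) W"
  define K where "K = mmul Q W (adj W)"
  define r where "r = (\<Sum>x\<in>basis Q. (cmod (W x y0))\<^sup>2)"
  have int': "op_eq Q (mmul Q (\<tau> g) W) (mmul Q W (pauli Q g))" if "g \<in> Gset Q" for g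
    using int[OF that] by simp
  have H_comm: "op_eq Q (mmul Q (pauli Q g) H) (mmul Q H (pauli Q g))" if "g \<in> Gset Q" for g
    unfolding H_def by (rule intertwiner_gram_commute(1)[OF fQ int' herm adj_pauli]) (use that in simp_all)
  have K_comm: "op_eq Q (mmul Q (pauli Q h) K) (mmul Q K (pauli Q h))" if h: "h \<in> Gset Q" for h
  proof -
    obtain g a where g: "g \<in> Gset Q" and a: "a \<noteq> 0" "\<tau> g = smul a (pauli Q h)"
      using span[OF h] by blast
    have "op_eq Q (mmul Q (\<tau> g) K) (mmul Q K (\<tau> g))"
      unfolding K_def by (rule intertwiner_gram_commute(2)[OF fQ int' herm adj_pauli]) (use g in simp_all)
    then show ?thesis using a by (simp add: smul_mmul_left smul_mmul_right smul_cancel)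
  qed
  have H_scal: "H x y = (if x = y then H y0 y0 else 0)" if "x \<in> basis Q" "y \<in> basis Q" for x y
    using commutes_with_paulis_imp_scalar[OF fQ H_comm that y0] by blast
  have K_scal: "K x y = (if x = y then K y0 y0 else 0)" if "x \<in> basis Q" "y \<in> basis Q" for x y
    using commutes_with_paulis_imp_scalar[OF fQ K_comm that y0] by blast
  have Hr: "H y0 y0 = complex_of_real r"
    unfolding H_def r_def mmul_def adj_def of_real_sum using cnj_mult_self by simp
  have "mmul Q K W x0 y0 = mmul Q W H x0 y0"
    unfolding K_def H_def using mmul_assoc[OF fQ] by simp
  moreover have "mmul Q K W x0 y0 = K y0 y0 * W x0 y0"
  proof -
    have "mmul Q K W x0 y0 = (\<Sum>z\<in>basis Q. if x0 = z then K y0 y0 * W x0 y0 else 0)"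
      unfolding mmul_def by (rule sum.cong[OF refl]) (auto simp: K_scal[OF x0])
    then show ?thesis using fb x0 by simp
  qed
  moreover have "mmul Q W H x0 y0 = W x0 y0 * H y0 y0"
  proof -
    have "mmul Q W H x0 y0 = (\<Sum>z\<in>basis Q. if y0 = z then W x0 y0 * H y0 y0 else 0)"
      unfolding mmul_def by (rule sum.cong[OF refl]) (auto simp: H_scal[OF _ y0])
    then show ?thesis using fb y0 by simp
  qed
  ultimately have Kr: "K y0 y0 = complex_of_real r" using W0 Hr by (simp add: mult.commute)
  show "op_eq Q (mmul Q (adj W) W) (smul (complex_of_real (\<Sum>x\<in>basis Q. (cmod (W x y0))\<^sup>2)) id_op)"
    using H_scal Hr by (auto simp: op_eq_def smul_def id_op_def H_def r_def)
  show "op_eq Q (mmul Q W (adj W)) (smul (complex_of_real (\<Sum>x\<in>basis Q. (cmod (W x y0))\<^sup>2)) id_op)"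
    using K_scal Kr by (auto simp: op_eq_def smul_def id_op_def K_def r_def)
qed

lemma intertwiner_normalise:
  assumes fQ: "finite Q" and x0: "x0 \<in> basis Q" and y0: "y0 \<in> basis Q" and W0: "W x0 y0 \<noteq> 0"
    and int: "\<And>g. g \<in> Gset Q \<Longrightarrow> mmul Q (\<tau> g) W = mmul Q W (pauli Q g)"
    and herm: "\<And>g. g \<in> Gset Q \<Longrightarrow> adj (\<tau> g) = \<tau> g"
    and span: "\<And>h. h \<in> Gset Q \<Longrightarrow> \<exists>g\<in>Gset Q. \<exists>a. a \<noteq> 0 \<and> \<tau> g = smul a (pauli Q h)"
  shows "\<exists>U. unitary Q U \<and> (\<forall>g\<in>Gset Q. op_eq Q (conj_op Q U (pauli Q g)) (\<tau> g))"
proof -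
  define r where "r = (\<Sum>x\<in>basis Q. (cmod (W x y0))\<^sup>2)"
  note gram = intertwiner_gram_scalar[OF fQ x0 y0 W0 int herm span, folded r_def]
  have r_pos: "r > 0"
  proof -
    have "(cmod (W x0 y0))\<^sup>2 \<le> r"
      unfolding r_def using finite_basis[OF fQ] x0 by (intro member_le_sum) auto
    moreover have "(cmod (W x0 y0))\<^sup>2 > 0" using W0 by simp
    ultimately show ?thesis by linarith
  qed
  define U where "U = smul (1 / complex_of_real (sqrt r)) W"
  have scale: "mmul Q (mmul Q U A) (adj U) = smul (1 / complex_of_real r) (mmul Q (mmul Q W A) (adj W))"
    "mmul Q (adj U) U = smul (1 / complex_of_real r) (mmul Q (adj W) W)"
    "mmul Q U (adj U) = smul (1 / complex_of_real r) (mmul Q W (adj W))"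
    for A
    using r_pos
    by (simp_all add: U_def adj_smul smul_mmul_left smul_mmul_right smul_smul
        of_real_mult[symmetric] del: of_real_mult)
  have normalised: "op_eq Q (smul (1 / complex_of_real r) A) id_op"
    if "op_eq Q A (smul (complex_of_real r) id_op)" for A
    using smul_cong[OF that, of "1 / complex_of_real r"] r_pos by (simp add: smul_smul)
  have "unitary Q U"
    unfolding unitary_iff scale using normalised gram by blast
  moreover have "op_eq Q (conj_op Q U (pauli Q g)) (\<tau> g)" if g: "g \<in> Gset Q" for g
  proof -
    have "op_eq Q (mmul Q (mmul Q W (pauli Q g)) (adj W)) (mmul Q (\<tau> g) (mmul Q W (adj W)))"
      unfolding int[OF g, symmetric] by (rule mmul_assoc_eq[OF fQ])
    also have "op_eq Q \<dots> (mmul Q (\<tau> g) (smul (complex_of_real r) id_op))"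
      by (rule mmul_cong[OF op_eq_refl gram(2)])
    also have "op_eq Q \<dots> (smul (complex_of_real r) (\<tau> g))"
      by (simp add: smul_mmul_right smul_cong mmul_id_right_eq[OF fQ])
    finally have "op_eq Q (conj_op Q U (pauli Q g)) (smul (1 / complex_of_real r) (smul (complex_of_real r) (\<tau> g)))"
      unfolding conj_op_def scale by (rule smul_cong)
    then show ?thesis using r_pos by (simp add: smul_smul)
  qed
  ultimately show ?thesis by blast
qed

lemma symplectic_map_clifford_realisation:
  assumes fQ: "finite Q" and u: "symplectic_map Q u"
  shows "\<exists>U s. clifford_action Q U u s"
proof -
  obtain c where c_pm: "\<And>f. f \<in> Gset Q \<Longrightarrow> c f = 1 \<or> c f = -1"
    and c_mul: "\<And>f g. f \<in> Gset Q \<Longrightarrow> g \<in> Gset Q \<Longrightarrow> c f * c g * phase Q (u f) (u g) = phase Q f g * c (gadd f g)"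
    using symplectic_map_sign_lift[OF fQ u] by blast
  have c0: "c gzero = 1"
    using c_mul[of gzero gzero] c_pm[of gzero] by auto
  have uG: "u f \<in> Gset Q" if "f \<in> Gset Q" for f
    using u that by (auto simp: symplectic_map_def bij_betw_def)
  define \<tau> where "\<tau> = (\<lambda>f. smul (c f) (pauli Q (u f)))"
  have \<tau>_mult: "mmul Q (\<tau> g) (\<tau> f) = smul (phase Q g f) (\<tau> (gadd g f))"
    if g: "g \<in> Gset Q" and f: "f \<in> Gset Q" for g f
    using c_mul[OF g f] u g f
    by (simp add: \<tau>_def smul_mmul_left smul_mmul_right smul_smul pauli_mult_eq[OF fQ] symplectic_map_def mult_ac)
  define y0 :: bits where "y0 = (\<lambda>j. False)"
  have y0: "y0 \<in> basis Q" by (simp add: y0_def basis_def)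
  obtain x0 where x0: "x0 \<in> basis Q" "pauli_twirl Q \<tau> x0 y0 x0 y0 \<noteq> 0"
    using pauli_twirl_nonzero[OF fQ u, of c, OF c0 y0] unfolding \<tau>_def by blast
  have span: "\<exists>g\<in>Gset Q. \<exists>a. a \<noteq> 0 \<and> \<tau> g = smul a (pauli Q h)" if h: "h \<in> Gset Q" for h
  proof -
    have "h \<in> u ` Gset Q" using u h by (simp add: symplectic_map_def bij_betw_def)
    then obtain g where g: "g \<in> Gset Q" "h = u g" by blast
    moreover have "c g \<noteq> 0" using c_pm[OF g(1)] by auto
    ultimately show ?thesis unfolding \<tau>_def by blast
  qed
  have int: "mmul Q (\<tau> g) (pauli_twirl Q \<tau> x0 y0) = mmul Q (pauli_twirl Q \<tau> x0 y0) (pauli Q g)"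
    if "g \<in> Gset Q" for g
    using pauli_twirl_intertwines[OF fQ that \<tau>_mult[OF that]] .
  have herm: "adj (\<tau> g) = \<tau> g" if "g \<in> Gset Q" for g
    using c_pm[OF that] by (auto simp: \<tau>_def adj_smul adj_pauli)
  obtain U where "unitary Q U" and conj: "\<forall>g\<in>Gset Q. op_eq Q (conj_op Q U (pauli Q g)) (\<tau> g)"
    using intertwiner_normalise[OF fQ x0(1) y0 x0(2) int herm span] by blast
  then have "clifford_action Q U u c"
    using uG c_pm by (simp add: clifford_action_def \<tau>_def)
  then show ?thesis by blast
qed

section \<open>Stabilizer states\<close>

lemma braket_anticommuting_pauli:
  assumes fQ: "finite Q" and sgs: "symp Q g s"
    and es: "e = 1 \<or> e = -1"
    and \<psi>: "eigvec Q (pauli Q s) \<psi> e" and \<phi>: "eigvec Q (pauli Q s) \<phi> e"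
  shows "braket Q \<phi> (apply_op Q (pauli Q g) \<psi>) = 0"
proof -
  define X where "X = braket Q \<phi> (apply_op Q (pauli Q g) \<psi>)"
  have "braket Q \<phi> (apply_op Q (pauli Q g) (apply_op Q (pauli Q s) \<psi>)) = e * X"
  proof -
    have "braket Q \<phi> (apply_op Q (pauli Q g) (apply_op Q (pauli Q s) \<psi>)) = braket Q \<phi> (\<lambda>x. e * apply_op Q (pauli Q g) \<psi> x)"
      by (intro braket_cong refl apply_op_eigvec[OF fQ \<psi>])
    then show ?thesis by (simp add: braket_scale_right X_def)
  qed
  moreover have "braket Q \<phi> (apply_op Q (pauli Q g) (apply_op Q (pauli Q s) \<psi>))
      = - braket Q \<phi> (apply_op Q (pauli Q s) (apply_op Q (pauli Q g) \<psi>))"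
  proof -
    have "braket Q \<phi> (apply_op Q (pauli Q g) (apply_op Q (pauli Q s) \<psi>)) = braket Q \<phi> (apply_op Q (mmul Q (pauli Q g) (pauli Q s)) \<psi>)"
      by (simp add: braket_apply_mmul[OF fQ])
    also have "\<dots> = braket Q \<phi> (\<lambda>x. - apply_op Q (mmul Q (pauli Q s) (pauli Q g)) \<psi> x)"
    proof (rule braket_cong)
      fix x show "apply_op Q (mmul Q (pauli Q g) (pauli Q s)) \<psi> x = - apply_op Q (mmul Q (pauli Q s) (pauli Q g)) \<psi> x"
        using sgs by (simp add: apply_op_def pauli_mult_comm_apply[OF fQ, of g s] bsign_def sum_negf)
    qed simp
    also have "\<dots> = - braket Q \<phi> (apply_op Q (pauli Q s) (apply_op Q (pauli Q g) \<psi>))"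
      using braket_scale_right[of Q \<phi> "-1"] by (simp add: braket_apply_mmul[OF fQ])
    finally show ?thesis .
  qed
  moreover have "braket Q \<phi> (apply_op Q (pauli Q s) (apply_op Q (pauli Q g) \<psi>)) = e * X"
  proof -
    have "braket Q \<phi> (apply_op Q (pauli Q s) (apply_op Q (pauli Q g) \<psi>)) = braket Q (apply_op Q (pauli Q s) \<phi>) (apply_op Q (pauli Q g) \<psi>)"
      by (rule braket_pauli_move)
    also have "\<dots> = cnj e * X" unfolding X_def by (rule braket_eig_left[OF \<phi>])
    finally show ?thesis using es by auto
  qed
  ultimately have "e * X = - (e * X)" by simp
  then have "e * X = 0" by auto
  then show ?thesis using es by (auto simp: X_def)
qed

lemma pauli_expansion_outer:
  assumes fQ: "finite Q" and x: "x \<in> basis Q" and y: "y \<in> basis Q"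
  shows "2 ^ card Q * (\<phi> x * cnj (\<psi> y))
       = (\<Sum>g\<in>Gset Q. pauli Q g x y * cnj (braket Q \<phi> (apply_op Q (pauli Q g) \<psi>)))"
proof -
  have fb: "finite (basis Q)" using fQ finite_basis by blast
  have c: "cnj (braket Q \<phi> (apply_op Q (pauli Q g) \<psi>))
      = (\<Sum>x'\<in>basis Q. \<Sum>y'\<in>basis Q. \<phi> x' * cnj (\<psi> y') * cnj (pauli Q g x' y'))" for g
    by (simp add: braket_def apply_op_def sum_distrib_left mult_ac)
  have "(\<Sum>g\<in>Gset Q. pauli Q g x y * cnj (braket Q \<phi> (apply_op Q (pauli Q g) \<psi>)))
      = (\<Sum>g\<in>Gset Q. \<Sum>x'\<in>basis Q. \<Sum>y'\<in>basis Q. \<phi> x' * cnj (\<psi> y') * (pauli Q g x y * cnj (pauli Q g x' y')))"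
    unfolding c by (simp add: sum_distrib_left mult_ac)
  also have "\<dots> = (\<Sum>x'\<in>basis Q. \<Sum>g\<in>Gset Q. \<Sum>y'\<in>basis Q. \<phi> x' * cnj (\<psi> y') * (pauli Q g x y * cnj (pauli Q g x' y')))"
    by (rule sum.swap)
  also have "\<dots> = (\<Sum>x'\<in>basis Q. \<Sum>y'\<in>basis Q. \<Sum>g\<in>Gset Q. \<phi> x' * cnj (\<psi> y') * (pauli Q g x y * cnj (pauli Q g x' y')))"
    by (rule sum.cong[OF refl], rule sum.swap)
  also have "\<dots> = (\<Sum>x'\<in>basis Q. \<Sum>y'\<in>basis Q. \<phi> x' * cnj (\<psi> y') * (if x = x' \<and> y = y' then 2 ^ card Q else 0))"
  proof (intro sum.cong refl)
    fix x' y' assume x': "x' \<in> basis Q" and y': "y' \<in> basis Q"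
    have "(\<forall>j\<in>Q. x j = x' j \<and> y j = y' j) \<longleftrightarrow> x = x' \<and> y = y'"
      using basis_eq_iff[OF x x'] basis_eq_iff[OF y y'] by blast
    then show "(\<Sum>g\<in>Gset Q. \<phi> x' * cnj (\<psi> y') * (pauli Q g x y * cnj (pauli Q g x' y')))
        = \<phi> x' * cnj (\<psi> y') * (if x = x' \<and> y = y' then 2 ^ card Q else 0)"
      by (simp add: sum_distrib_left[symmetric] pauli_complete[OF fQ])
  qed
  also have "\<dots> = 2 ^ card Q * (\<phi> x * cnj (\<psi> y))"
  proof -
    have e: "(\<Sum>y'\<in>basis Q. \<phi> x' * cnj (\<psi> y') * (if x = x' \<and> y = y' then 2 ^ card Q else 0))
        = (if x = x' then \<phi> x' * cnj (\<psi> y) * 2 ^ card Q else 0)" for x'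
    proof -
      have "(\<Sum>y'\<in>basis Q. \<phi> x' * cnj (\<psi> y') * (if x = x' \<and> y = y' then 2 ^ card Q else 0))
        = (\<Sum>y'\<in>basis Q. if y = y' then (if x = x' then \<phi> x' * cnj (\<psi> y) * 2 ^ card Q else 0) else 0)"
        by (rule sum.cong) auto
      also have "\<dots> = (if x = x' then \<phi> x' * cnj (\<psi> y) * 2 ^ card Q else 0)"
        using fb y by (subst sum.delta') simp_all
      finally show ?thesis .
    qed
    show ?thesis unfolding e using fb x by (subst sum.delta') (simp_all add: mult_ac)
  qed
  finally show ?thesis by simp
qed

text \<open>\<open>|\<chi>\<rangle>\<langle>\<psi>| = \<langle>\<psi>|\<chi>\<rangle> 2\<^sup>-\<^sup>n \<Sum>\<^sub>g\<^sub>\<in>\<^sub>S e(g) \<sigma>(g)\<close>: in the Pauli expansion of \<open>|\<chi>\<rangle>\<langle>\<psi>|\<close> the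
  coefficient of a Pauli outside \<open>S = S\<^sup>\<bottom>\<close> vanishes, because it anticommutes with some
  stabilizer.\<close>

lemma stabilizer_outer_product:
  assumes fQ: "finite Q" and SG: "S \<subseteq> Gset Q"
    and perp: "\<And>g. g \<in> Gset Q \<Longrightarrow> g \<notin> S \<Longrightarrow> \<exists>s\<in>S. symp Q g s"
    and e: "\<And>s. s \<in> S \<Longrightarrow> e s = 1 \<or> e s = -1"
    and \<chi>: "\<And>s. s \<in> S \<Longrightarrow> eigvec Q (pauli Q s) \<chi> (e s)"
    and \<psi>: "\<And>s. s \<in> S \<Longrightarrow> eigvec Q (pauli Q s) \<psi> (e s)"
    and x: "x \<in> basis Q" and y: "y \<in> basis Q"
  shows "2 ^ card Q * (\<chi> x * cnj (\<psi> y)) = cnj (braket Q \<chi> \<psi>) * (\<Sum>g\<in>S. pauli Q g x y * e g)"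
proof -
  have fG: "finite (Gset Q)" using fQ finite_Gset by blast
  have "2 ^ card Q * (\<chi> x * cnj (\<psi> y)) = (\<Sum>g\<in>Gset Q. pauli Q g x y * cnj (braket Q \<chi> (apply_op Q (pauli Q g) \<psi>)))"
    by (rule pauli_expansion_outer[OF fQ x y])
  also have "\<dots> = (\<Sum>g\<in>S. pauli Q g x y * cnj (braket Q \<chi> (apply_op Q (pauli Q g) \<psi>)))"
  proof (rule sum.mono_neutral_right[OF fG SG, symmetric, THEN sym])
    show "\<forall>g\<in>Gset Q - S. pauli Q g x y * cnj (braket Q \<chi> (apply_op Q (pauli Q g) \<psi>)) = 0"
    proof
      fix g assume g: "g \<in> Gset Q - S"
      then obtain s where s: "s \<in> S" "symp Q g s" using perp by blast
      have "braket Q \<chi> (apply_op Q (pauli Q g) \<psi>) = 0"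
        using braket_anticommuting_pauli[OF fQ s(2) e[OF s(1)] \<psi>[OF s(1)] \<chi>[OF s(1)]] .
      then show "pauli Q g x y * cnj (braket Q \<chi> (apply_op Q (pauli Q g) \<psi>)) = 0" by simp
    qed
  qed
  also have "\<dots> = (\<Sum>g\<in>S. pauli Q g x y * cnj (e g * braket Q \<chi> \<psi>))"
    by (rule sum.cong[OF refl]) (simp add: braket_eig_right[OF \<psi>])
  also have "\<dots> = cnj (braket Q \<chi> \<psi>) * (\<Sum>g\<in>S. pauli Q g x y * e g)"
  proof -
    have "\<And>g. g \<in> S \<Longrightarrow> cnj (e g) = e g" using e by fastforce
    then show ?thesis unfolding sum_distrib_left
      by (intro sum.cong refl) (simp add: mult_ac)
  qed
  finally show ?thesis .
qed

lemma stabilizer_state_unique: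
  assumes fQ: "finite Q" and SG: "S \<subseteq> Gset Q"
    and perp: "\<And>g. g \<in> Gset Q \<Longrightarrow> g \<notin> S \<Longrightarrow> \<exists>s\<in>S. symp Q g s"
    and e: "\<And>s. s \<in> S \<Longrightarrow> e s = 1 \<or> e s = -1"
    and \<phi>: "\<And>s. s \<in> S \<Longrightarrow> eigvec Q (pauli Q s) \<phi> (e s)"
    and \<psi>: "\<And>s. s \<in> S \<Longrightarrow> eigvec Q (pauli Q s) \<psi> (e s)"
    and u: "unit_state Q \<psi>"
    and x: "x \<in> basis Q"
  shows "\<phi> x = braket Q \<psi> \<phi> * \<psi> x"
proof -
  have eq: "\<phi> x * cnj (\<psi> y) = braket Q \<psi> \<phi> * (\<psi> x * cnj (\<psi> y))" if y: "y \<in> basis Q" for y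
  proof -
    have "2 ^ card Q * (\<phi> x * cnj (\<psi> y)) = cnj (braket Q \<phi> \<psi>) * (\<Sum>g\<in>S. pauli Q g x y * e g)"
      by (rule stabilizer_outer_product[where e = e]) (use fQ SG perp e \<phi> \<psi> x y in auto)
    moreover have "2 ^ card Q * (\<psi> x * cnj (\<psi> y)) = cnj (braket Q \<psi> \<psi>) * (\<Sum>g\<in>S. pauli Q g x y * e g)"
      by (rule stabilizer_outer_product[where e = e]) (use fQ SG perp e \<psi> x y in auto)
    moreover have "braket Q \<psi> \<psi> = 1" using u by (simp add: unit_state_iff)
    ultimately have "2 ^ card Q * (\<phi> x * cnj (\<psi> y)) = 2 ^ card Q * (braket Q \<psi> \<phi> * (\<psi> x * cnj (\<psi> y)))"
      by (simp add: cnj_braket)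
    then show ?thesis by simp
  qed
  have "\<phi> x * braket Q \<psi> \<psi> = braket Q \<psi> \<phi> * \<psi> x * braket Q \<psi> \<psi>"
  proof -
    have "\<phi> x * braket Q \<psi> \<psi> = (\<Sum>y\<in>basis Q. \<phi> x * cnj (\<psi> y) * \<psi> y)"
      by (simp add: braket_def sum_distrib_left mult.assoc)
    also have "\<dots> = (\<Sum>y\<in>basis Q. braket Q \<psi> \<phi> * (\<psi> x * cnj (\<psi> y)) * \<psi> y)"
      by (rule sum.cong[OF refl]) (simp add: eq)
    also have "\<dots> = braket Q \<psi> \<phi> * \<psi> x * braket Q \<psi> \<psi>"
      unfolding braket_def[of Q \<psi> \<psi>] by (simp add: sum_distrib_left mult_ac)
    finally show ?thesis .
  qed
  then show ?thesis using u by (simp add: unit_state_iff)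
qed

lemma stabilizer_states_equal_up_to_phase:
  assumes fQ: "finite Q" and SG: "S \<subseteq> Gset Q"
    and perp: "\<And>g. g \<in> Gset Q \<Longrightarrow> g \<notin> S \<Longrightarrow> \<exists>s\<in>S. symp Q g s"
    and e: "\<And>s. s \<in> S \<Longrightarrow> e s = 1 \<or> e s = -1"
    and \<phi>: "\<And>s. s \<in> S \<Longrightarrow> eigvec Q (pauli Q s) \<phi> (e s)" and u\<phi>: "unit_state Q \<phi>"
    and \<psi>: "\<And>s. s \<in> S \<Longrightarrow> eigvec Q (pauli Q s) \<psi> (e s)" and u\<psi>: "unit_state Q \<psi>"
  shows "\<exists>c. cmod c = 1 \<and> (\<forall>x\<in>basis Q. \<phi> x = c * \<psi> x)"
proof -
  define c where "c = braket Q \<psi> \<phi>"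
  have eq: "\<phi> x = c * \<psi> x" if "x \<in> basis Q" for x
    unfolding c_def by (rule stabilizer_state_unique[OF fQ SG perp e \<phi> \<psi> u\<psi> that])
  have "braket Q \<phi> \<phi> = braket Q (\<lambda>x. c * \<psi> x) (\<lambda>x. c * \<psi> x)"
    by (rule braket_cong) (simp_all add: eq)
  also have "\<dots> = cnj c * c * braket Q \<psi> \<psi>" by (simp add: braket_scale_left braket_scale_right)
  finally have "cnj c * c = 1"
    using u\<phi> u\<psi> by (simp add: unit_state_iff)
  then have "complex_of_real ((cmod c)\<^sup>2) = 1"
    by (simp add: cnj_mult_self)
  then have "(cmod c)\<^sup>2 = 1"
    using of_real_eq_1_iff by blast
  then have "cmod c = 1"
    using norm_ge_zero[of c] by (auto simp: power2_eq_1_iff)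
  then show ?thesis using eq by blast
qed

lemma eigvec_pauli_apply:
  assumes fQ: "finite Q" and \<chi>: "eigvec Q (pauli Q s) \<chi> e"
  shows "eigvec Q (pauli Q s) (apply_op Q (pauli Q h) \<chi>) (bsign (symp Q s h) * e)"
  unfolding eigvec_def
proof
  fix z assume z: "z \<in> basis Q"
  have "apply_op Q (pauli Q s) (apply_op Q (pauli Q h) \<chi>) z = apply_op Q (mmul Q (pauli Q s) (pauli Q h)) \<chi> z"
    by (simp add: apply_op_mmul[OF fQ])
  also have "\<dots> = bsign (symp Q s h) * apply_op Q (mmul Q (pauli Q h) (pauli Q s)) \<chi> z"
    by (simp add: apply_op_def pauli_mult_comm_apply[OF fQ, of s h] sum_distrib_left mult.assoc)
  also have "\<dots> = bsign (symp Q s h) * (e * apply_op Q (pauli Q h) \<chi> z)"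
    by (simp add: apply_op_mmul[OF fQ] apply_op_eigvec[OF fQ \<chi> z])
  finally show "apply_op Q (pauli Q s) (apply_op Q (pauli Q h) \<chi>) z = bsign (symp Q s h) * e * apply_op Q (pauli Q h) \<chi> z"
    by (simp add: mult.assoc)
qed

lemma eigvec_braket_nonzero_imp_eq:
  assumes \<psi>: "eigvec Q (pauli Q s) \<psi> e1" and e1: "e1 = 1 \<or> e1 = -1"
    and \<chi>: "eigvec Q (pauli Q s) \<chi> e2" and nz: "braket Q \<psi> \<chi> \<noteq> 0"
  shows "e2 = e1"
proof -
  have "e2 * braket Q \<psi> \<chi> = braket Q \<psi> (apply_op Q (pauli Q s) \<chi>)"
    by (rule braket_eig_right[OF \<chi>, symmetric])
  also have "\<dots> = braket Q (apply_op Q (pauli Q s) \<psi>) \<chi>"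
    by (rule braket_pauli_move)
  also have "\<dots> = e1 * braket Q \<psi> \<chi>"
    using braket_eig_left[OF \<psi>] e1 by auto
  finally show ?thesis using nz by simp
qed

text \<open>Some \<open>\<sigma>(h) \<chi>\<close> has nonzero overlap with \<open>\<psi>\<close>, since the Paulis span all operators; overlapping
  common eigenvectors of the \<open>\<sigma>(s)\<close> have the same eigenvalues.\<close>

lemma pauli_correction_of_signs:
  assumes fQ: "finite Q"
    and e1: "\<And>s. s \<in> S \<Longrightarrow> e1 s = 1 \<or> e1 s = -1"
    and \<psi>: "\<And>s. s \<in> S \<Longrightarrow> eigvec Q (pauli Q s) \<psi> (e1 s)" and u\<psi>: "unit_state Q \<psi>"
    and \<chi>_eig: "\<And>s. s \<in> S \<Longrightarrow> \<exists>e. eigvec Q (pauli Q s) \<chi> e"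
    and u\<chi>: "unit_state Q \<chi>"
  shows "\<exists>h\<in>Gset Q. (\<forall>s\<in>S. eigvec Q (pauli Q s) (apply_op Q (pauli Q h) \<chi>) (e1 s))
           \<and> unit_state Q (apply_op Q (pauli Q h) \<chi>)"
proof -
  obtain e2 where \<chi>: "\<And>s. s \<in> S \<Longrightarrow> eigvec Q (pauli Q s) \<chi> (e2 s)"
    using \<chi>_eig by metis
  obtain x where x: "x \<in> basis Q" "\<psi> x \<noteq> 0" using unit_nonzero[OF fQ u\<psi>] by blast
  obtain y where y: "y \<in> basis Q" "\<chi> y \<noteq> 0" using unit_nonzero[OF fQ u\<chi>] by blast
  have "2 ^ card Q * (\<psi> x * cnj (\<chi> y)) \<noteq> 0" using x y by simp
  then have "(\<Sum>g\<in>Gset Q. pauli Q g x y * cnj (braket Q \<psi> (apply_op Q (pauli Q g) \<chi>))) \<noteq> 0"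
    using pauli_expansion_outer[OF fQ x(1) y(1)] by simp
  then obtain h where h: "h \<in> Gset Q" "pauli Q h x y * cnj (braket Q \<psi> (apply_op Q (pauli Q h) \<chi>)) \<noteq> 0"
    using sum.not_neutral_contains_not_neutral by blast
  have "eigvec Q (pauli Q s) (apply_op Q (pauli Q h) \<chi>) (e1 s)" if s: "s \<in> S" for s
    using eigvec_braket_nonzero_imp_eq[OF \<psi>[OF s] e1[OF s] eigvec_pauli_apply[OF fQ \<chi>[OF s]]] h(2)
      eigvec_pauli_apply[OF fQ \<chi>[OF s], of h] by auto
  moreover have "braket Q (apply_op Q (pauli Q h) \<chi>) (apply_op Q (pauli Q h) \<chi>) = braket Q \<chi> \<chi>"
    by (rule braket_unitary[OF fQ pauli_adj_mult_self[OF fQ]])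
  ultimately show ?thesis using h(1) u\<chi> by (auto simp: unit_state_iff)
qed

lemma stab_stateD:
  assumes "stab_state n \<psi> S"
  shows "S \<subseteq> Gset {..<n}" "gsubspace S" "unit_state {..<n} \<psi>"
    "\<And>g. g \<in> Gset {..<n} \<Longrightarrow> g \<notin> S \<Longrightarrow> \<exists>s\<in>S. symp {..<n} g s"
    "\<And>g. g \<in> Gset {..<n} \<Longrightarrow> (\<forall>s\<in>S. \<not> symp {..<n} g s) \<Longrightarrow> g \<in> S"
    "\<exists>e. \<forall>f\<in>S. (e f = 1 \<or> e f = -1) \<and> eigvec {..<n} (pauli {..<n} f) \<psi> (e f)"
    "symp_perp {..<n} S = S"
proof -
  have sd: "self_dual n S" and u: "unit_state {..<n} \<psi>"
    and ev: "\<forall>f\<in>S. \<exists>e::complex. (e = 1 \<or> e = -1) \<and> (\<forall>x\<in>basis {..<n}. apply_op {..<n} (pauli {..<n} f) \<psi> x = e * \<psi> x)"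
    using assms by (auto simp: stab_state_def)
  show "S \<subseteq> Gset {..<n}" "gsubspace S" using sd by (auto simp: self_dual_def is_subspace_def gsubspace_def)
  show "unit_state {..<n} \<psi>" by fact
  have p: "perp n S = S" using sd by (simp add: self_dual_def)
  show "\<exists>s\<in>S. symp {..<n} g s" if "g \<in> Gset {..<n}" "g \<notin> S" for g
    using that p by (auto simp: perp_def)
  show "g \<in> S" if "g \<in> Gset {..<n}" "\<forall>s\<in>S. \<not> symp {..<n} g s" for g
    using that p by (auto simp: perp_def)
  show "\<exists>e. \<forall>f\<in>S. (e f = 1 \<or> e f = -1) \<and> eigvec {..<n} (pauli {..<n} f) \<psi> (e f)"
    using bchoice[OF ev] unfolding eigvec_def by blast
  show "symp_perp {..<n} S = S"
    using p by (auto simp: perp_def symp_perp_def symp_comm)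
qed

lemma card_stabilizer:
  assumes "stab_state n \<psi> S"
  shows "card S = 2 ^ n"
proof -
  have "card S * card S = 4 ^ n"
    using card_mult_card_symp_perp[of "{..<n}" S] stab_stateD(1,2,7)[OF assms] by simp
  also have "(4::nat) ^ n = 2 ^ n * 2 ^ n"
    by (simp add: power_mult_distrib[symmetric])
  finally have "(card S) ^ 2 = (2 ^ n) ^ 2"
    by (simp add: power2_eq_square)
  then show ?thesis
    using power_eq_iff_eq_base[of 2 "card S" "2 ^ n"] by simp
qed

lemma eigvec_imp_stabilizer:
  assumes st: "stab_state n \<psi> S" and g: "g \<in> Gset {..<n}"
    and e: "eigvec {..<n} (pauli {..<n} g) \<psi> e" "e \<noteq> 0"
  shows "g \<in> S"
proof (rule stab_stateD(5)[OF st g], rule ballI)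
  fix s assume s: "s \<in> S"
  obtain es where es: "es s = 1 \<or> es s = -1" "eigvec {..<n} (pauli {..<n} s) \<psi> (es s)"
    using stab_stateD(6)[OF st] s by blast
  obtain x0 where "x0 \<in> basis {..<n}" "\<psi> x0 \<noteq> 0"
    using unit_nonzero[OF _ stab_stateD(3)[OF st]] by blast
  moreover have "es s \<noteq> 0" using es(1) by auto
  ultimately show "\<not> symp {..<n} g s"
    using common_eigvec_imp_commute[OF _ e(1) es(2) e(2)] by blast
qed

lemma qubits_finite: "finite (qubits n part \<alpha>)"
  by (simp add: qubits_def)

lemma qubits_sub: "qubits n part \<alpha> \<subseteq> {..<n}"
  by (auto simp: qubits_def)

lemma qubits_disj: "\<alpha> \<noteq> \<beta> \<Longrightarrow> qubits n part \<alpha> \<inter> qubits n part \<beta> = {}"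
  by (auto simp: qubits_def)

lemma qubits_Union: "\<forall>j<n. part j \<in> M \<Longrightarrow> (\<Union>\<alpha>\<in>M. qubits n part \<alpha>) = {..<n}"
  by (auto simp: qubits_def)

lemma restr_basis[simp]: "restr Q x \<in> basis Q"
  by (simp add: restr_def basis_def)

lemma restr_restr: "A \<subseteq> B \<Longrightarrow> restr A (restr B z) = restr A z"
  by (auto simp: restr_def fun_eq_iff)

lemma sum_basis_blocks:
  fixes F :: "'p \<Rightarrow> bits \<Rightarrow> complex"
  assumes "finite M" "\<forall>\<alpha>\<in>M. finite (Qs \<alpha>)" "\<forall>\<alpha>\<in>M. \<forall>\<beta>\<in>M. \<alpha> \<noteq> \<beta> \<longrightarrow> Qs \<alpha> \<inter> Qs \<beta> = {}"
  shows "(\<Sum>z\<in>basis (\<Union>\<alpha>\<in>M. Qs \<alpha>). \<Prod>\<alpha>\<in>M. F \<alpha> (restr (Qs \<alpha>) z)) = (\<Prod>\<alpha>\<in>M. \<Sum>w\<in>basis (Qs \<alpha>). F \<alpha> w)"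
  using assms
proof (induction M rule: finite_induct)
  case empty
  have "basis {} = {\<lambda>j. False}" by (auto simp: basis_def)
  then show ?case by simp
next
  case (insert \<beta> M)
  define R where "R = (\<Union>\<alpha>\<in>M. Qs \<alpha>)"
  have disj: "Qs \<beta> \<inter> R = {}" using insert.prems(2) insert.hyps(2) by (auto simp: R_def)
  have IH: "(\<Sum>z\<in>basis R. \<Prod>\<alpha>\<in>M. F \<alpha> (restr (Qs \<alpha>) z)) = (\<Prod>\<alpha>\<in>M. \<Sum>w\<in>basis (Qs \<alpha>). F \<alpha> w)"
    unfolding R_def using insert by auto
  have fin1: "finite (basis (Qs \<beta>))" using insert.prems(1) finite_basis by blast
  have finR: "finite R" unfolding R_def using insert by auto
  have fin2: "finite (basis R)" using finR finite_basis by blast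
  have U: "(\<Union>\<alpha>\<in>insert \<beta> M. Qs \<alpha>) = Qs \<beta> \<union> R" by (simp add: R_def)
  have "(\<Sum>z\<in>basis (Qs \<beta> \<union> R). \<Prod>\<alpha>\<in>insert \<beta> M. F \<alpha> (restr (Qs \<alpha>) z))
      = (\<Sum>p\<in>basis (Qs \<beta>) \<times> basis R. F \<beta> (fst p) * (\<Prod>\<alpha>\<in>M. F \<alpha> (restr (Qs \<alpha>) (snd p))))"
  proof (rule sum.reindex_bij_witness[where i = "\<lambda>p k. fst p k \<or> snd p k" and j = "\<lambda>z. (restr (Qs \<beta>) z, restr R z)"])
    fix z assume z: "z \<in> basis (Qs \<beta> \<union> R)"
    show "(\<lambda>k. fst (restr (Qs \<beta>) z, restr R z) k \<or> snd (restr (Qs \<beta>) z, restr R z) k) = z"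
      using z by (auto simp: restr_def basis_def fun_eq_iff)
    show "(restr (Qs \<beta>) z, restr R z) \<in> basis (Qs \<beta>) \<times> basis R" by simp
    have "\<And>\<alpha>. \<alpha> \<in> M \<Longrightarrow> restr (Qs \<alpha>) (restr R z) = restr (Qs \<alpha>) z"
      by (rule restr_restr) (auto simp: R_def)
    then show "F \<beta> (fst (restr (Qs \<beta>) z, restr R z)) * (\<Prod>\<alpha>\<in>M. F \<alpha> (restr (Qs \<alpha>) (snd (restr (Qs \<beta>) z, restr R z))))
        = (\<Prod>\<alpha>\<in>insert \<beta> M. F \<alpha> (restr (Qs \<alpha>) z))"
      using insert.hyps by simp
  next
    fix p assume p: "p \<in> basis (Qs \<beta>) \<times> basis R"
    show "(restr (Qs \<beta>) (\<lambda>k. fst p k \<or> snd p k), restr R (\<lambda>k. fst p k \<or> snd p k)) = p"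
      using p disj by (cases p) (auto simp: restr_def basis_def fun_eq_iff)
    show "(\<lambda>k. fst p k \<or> snd p k) \<in> basis (Qs \<beta> \<union> R)"
      using p by (auto simp: basis_def)
  qed
  also have "\<dots> = (\<Sum>w\<in>basis (Qs \<beta>). F \<beta> w) * (\<Sum>z\<in>basis R. \<Prod>\<alpha>\<in>M. F \<alpha> (restr (Qs \<alpha>) z))"
    by (simp add: sum_product sum.cartesian_product case_prod_beta')
  finally show ?case using IH U insert.hyps by simp
qed

lemma tensor_mmul:
  assumes M: "finite M" and P: "\<forall>j<n. part j \<in> M"
  shows "mmul {..<n} (tensor_op n part M A) (tensor_op n part M B)
       = tensor_op n part M (\<lambda>\<alpha>. mmul (qubits n part \<alpha>) (A \<alpha>) (B \<alpha>))"
proof (rule ext, rule ext)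
  fix x y
  have "mmul {..<n} (tensor_op n part M A) (tensor_op n part M B) x y
      = (\<Sum>z\<in>basis (\<Union>\<alpha>\<in>M. qubits n part \<alpha>). \<Prod>\<alpha>\<in>M. A \<alpha> (restr (qubits n part \<alpha>) x) (restr (qubits n part \<alpha>) z)
             * B \<alpha> (restr (qubits n part \<alpha>) z) (restr (qubits n part \<alpha>) y))"
    by (simp add: mmul_def tensor_op_def qubits_Union[OF P] prod.distrib)
  also have "\<dots> = (\<Prod>\<alpha>\<in>M. \<Sum>w\<in>basis (qubits n part \<alpha>). A \<alpha> (restr (qubits n part \<alpha>) x) w * B \<alpha> w (restr (qubits n part \<alpha>) y))"
    by (rule sum_basis_blocks[OF M]) (auto simp: qubits_finite qubits_disj)
  also have "\<dots> = tensor_op n part M (\<lambda>\<alpha>. mmul (qubits n part \<alpha>) (A \<alpha>) (B \<alpha>)) x y"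
    by (simp add: tensor_op_def mmul_def)
  finally show "mmul {..<n} (tensor_op n part M A) (tensor_op n part M B) x y
      = tensor_op n part M (\<lambda>\<alpha>. mmul (qubits n part \<alpha>) (A \<alpha>) (B \<alpha>)) x y" .
qed

lemma tensor_adj: "adj (tensor_op n part M A) = tensor_op n part M (\<lambda>\<alpha>. adj (A \<alpha>))"
  by (simp add: fun_eq_iff adj_def tensor_op_def)

lemma tensor_smul: "tensor_op n part M (\<lambda>\<alpha>. smul (c \<alpha>) (A \<alpha>)) = smul (\<Prod>\<alpha>\<in>M. c \<alpha>) (tensor_op n part M A)"
  by (simp add: fun_eq_iff smul_def tensor_op_def prod.distrib)

lemma tensor_cong: "(\<And>\<alpha>. \<alpha> \<in> M \<Longrightarrow> op_eq (qubits n part \<alpha>) (A \<alpha>) (B \<alpha>)) \<Longrightarrow> tensor_op n part M A = tensor_op n part M B"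
  by (auto simp: fun_eq_iff tensor_op_def op_eq_def intro!: prod.cong)

lemma tensor_pauli:
  assumes M: "finite M" and P: "\<forall>j<n. part j \<in> M"
  shows "pauli {..<n} f = tensor_op n part M (\<lambda>\<alpha>. pauli (qubits n part \<alpha>) f)"
proof (rule ext, rule ext)
  fix x y
  have "pauli {..<n} f x y = (\<Prod>j\<in>(\<Union>\<alpha>\<in>M. qubits n part \<alpha>). pauli1 (f j) (x j) (y j))"
    by (simp add: pauli_def qubits_Union[OF P])
  also have "\<dots> = (\<Prod>\<alpha>\<in>M. \<Prod>j\<in>qubits n part \<alpha>. pauli1 (f j) (x j) (y j))"
    by (rule prod.UNION_disjoint[OF M]) (auto simp: qubits_finite qubits_disj)
  also have "\<dots> = tensor_op n part M (\<lambda>\<alpha>. pauli (qubits n part \<alpha>) f) x y"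
    unfolding tensor_op_def pauli_def
    by (intro prod.cong refl) (simp add: restr_def)
  finally show "pauli {..<n} f x y = tensor_op n part M (\<lambda>\<alpha>. pauli (qubits n part \<alpha>) f) x y" .
qed

lemma tensor_id_op:
  assumes M: "finite M" and P: "\<forall>j<n. part j \<in> M"
  shows "op_eq {..<n} (tensor_op n part M (\<lambda>\<alpha>. id_op)) id_op"
proof (rule op_eq_I)
  fix x y assume x: "x \<in> basis {..<n}" and y: "y \<in> basis {..<n}"
  have "tensor_op n part M (\<lambda>\<alpha>. id_op) x y = (if \<forall>\<alpha>\<in>M. restr (qubits n part \<alpha>) x = restr (qubits n part \<alpha>) y then 1 else 0)"
    using M by (simp add: tensor_op_def id_op_def prod_zero_iff)
  also have "(\<forall>\<alpha>\<in>M. restr (qubits n part \<alpha>) x = restr (qubits n part \<alpha>) y) \<longleftrightarrow> x = y"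
  proof
    assume A: "\<forall>\<alpha>\<in>M. restr (qubits n part \<alpha>) x = restr (qubits n part \<alpha>) y"
    show "x = y"
    proof
      fix j show "x j = y j"
      proof (cases "j < n")
        case True
        then have "part j \<in> M" "j \<in> qubits n part (part j)" using P by (auto simp: qubits_def)
        then show ?thesis using fun_cong[OF A[rule_format, OF \<open>part j \<in> M\<close>], of j] by (simp add: restr_def)
      next
        case False then show ?thesis using x y by (simp add: basis_def)
      qed
    qed
  qed simp
  finally show "tensor_op n part M (\<lambda>\<alpha>. id_op) x y = id_op x y" by (simp add: id_op_eta)
qed

lemma tensor_unitary:
  assumes M: "finite M" and P: "\<forall>j<n. part j \<in> M" and U: "\<And>\<alpha>. \<alpha> \<in> M \<Longrightarrow> unitary (qubits n part \<alpha>) (Us \<alpha>)"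
  shows "unitary {..<n} (tensor_op n part M Us)"
proof -
  have "mmul {..<n} (tensor_op n part M Us) (adj (tensor_op n part M Us)) = tensor_op n part M (\<lambda>\<alpha>. id_op)"
    unfolding tensor_adj tensor_mmul[OF M P]
    by (rule tensor_cong) (use U in \<open>simp add: unitary_iff\<close>)
  moreover have "mmul {..<n} (adj (tensor_op n part M Us)) (tensor_op n part M Us) = tensor_op n part M (\<lambda>\<alpha>. id_op)"
    unfolding tensor_adj tensor_mmul[OF M P]
    by (rule tensor_cong) (use U in \<open>simp add: unitary_iff\<close>)
  ultimately show ?thesis using tensor_id_op[OF M P] by (simp add: unitary_iff)
qed

lemma tensor_conj:
  assumes M: "finite M" and P: "\<forall>j<n. part j \<in> M"
  shows "conj_op {..<n} (tensor_op n part M Us) (tensor_op n part M A)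
       = tensor_op n part M (\<lambda>\<alpha>. conj_op (qubits n part \<alpha>) (Us \<alpha>) (A \<alpha>))"
  unfolding conj_op_def tensor_adj tensor_mmul[OF M P] ..

definition proj :: "nat set \<Rightarrow> pauli_vec \<Rightarrow> pauli_vec" where
  "proj R f = (\<lambda>j. if j \<in> R then f j else (False, False))"

lemma proj_Gset[simp]: "proj R f \<in> Gset R"
  by (simp add: proj_def Gset_def)

lemma proj_gadd: "proj R (gadd f g) = gadd (proj R f) (proj R g)"
  by (auto simp: proj_def gadd_def fun_eq_iff)

lemma pauli_proj: "pauli R (proj R f) = pauli R f"
  by (simp add: pauli_def proj_def fun_eq_iff)

lemma symp_proj: "symp R (proj R f) (proj R g) = symp R f g"
proof -
  have "{j \<in> R. (fst (proj R f j) \<and> snd (proj R g j)) \<noteq> (snd (proj R f j) \<and> fst (proj R g j))}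
      = {j \<in> R. (fst (f j) \<and> snd (g j)) \<noteq> (snd (f j) \<and> fst (g j))}"
    by (auto simp: proj_def)
  then show ?thesis by (simp only: symp_def)
qed

lemma symp_proj_left: "symp R (proj R f) g = symp R f g"
proof -
  have "{j \<in> R. (fst (proj R f j) \<and> snd (g j)) \<noteq> (snd (proj R f j) \<and> fst (g j))}
      = {j \<in> R. (fst (f j) \<and> snd (g j)) \<noteq> (snd (f j) \<and> fst (g j))}"
    by (auto simp: proj_def)
  then show ?thesis by (simp only: symp_def)
qed

lemma symp_sub:
  assumes "R \<subseteq> Q'" "h \<in> Gset R"
  shows "symp Q' h f = symp R h f"
proof -
  have "{j \<in> Q'. (fst (h j) \<and> snd (f j)) \<noteq> (snd (h j) \<and> fst (f j))} = {j \<in> R. (fst (h j) \<and> snd (f j)) \<noteq> (snd (h j) \<and> fst (f j))}"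
    using assms by (auto simp: Gset_def)
  then show ?thesis by (simp add: symp_def)
qed

lemma symp_zero_on: "(\<forall>j\<in>R. d j = (False, False)) \<Longrightarrow> symp R d g = False"
proof -
  assume "\<forall>j\<in>R. d j = (False, False)"
  then have "{j \<in> R. (fst (d j) \<and> snd (g j)) \<noteq> (snd (d j) \<and> fst (g j))} = {}" by auto
  then show ?thesis by (simp only: symp_def) simp
qed

lemma gsubspace_proj_image:
  assumes "gsubspace S"
  shows "gsubspace (proj R ` S)"
  unfolding gsubspace_def
proof (intro conjI ballI)
  have "proj R gzero = gzero" by (simp add: proj_def gzero_def fun_eq_iff)
  then show "gzero \<in> proj R ` S" using assms by (force simp: gsubspace_def)
next
  fix v w assume "v \<in> proj R ` S" "w \<in> proj R ` S"
  then obtain f g where "f \<in> S" "g \<in> S" "v = proj R f" "w = proj R g" by blast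
  moreover have "gadd f g \<in> S" using assms \<open>f \<in> S\<close> \<open>g \<in> S\<close> by (simp add: gsubspace_def)
  ultimately show "gadd v w \<in> proj R ` S" by (auto simp: proj_gadd[symmetric])
qed

lemma local_perp_in_local_sub:
  assumes st: "stab_state n \<psi> S" and hG: "h \<in> Gset (qubits n part \<alpha>)"
    and hp: "\<And>f. f \<in> S \<Longrightarrow> \<not> symp (qubits n part \<alpha>) (proj (qubits n part \<alpha>) f) h"
  shows "h \<in> local_sub n part M S \<alpha>"
proof -
  let ?q = "qubits n part"
  have "\<not> symp {..<n} h s" if s: "s \<in> S" for s
  proof -
    have "symp {..<n} h s = symp (?q \<alpha>) h s" by (rule symp_sub[OF qubits_sub hG])
    also have "\<dots> = symp (?q \<alpha>) (proj (?q \<alpha>) s) h" by (metis symp_comm symp_proj_left)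
    finally show ?thesis using hp[OF s] by simp
  qed
  then have hS: "h \<in> S" using stab_stateD(5)[OF st Gset_mono[OF qubits_sub hG]] by blast
  show ?thesis
    unfolding local_sub_def
  proof (intro CollectI conjI ballI impI hS)
    fix \<beta> j assume "\<beta> \<in> M" "\<beta> \<noteq> \<alpha>" "j \<in> ?q \<beta>"
    then have "j \<notin> ?q \<alpha>" using qubits_disj[of \<beta> \<alpha> n part] by blast
    then show "h j = (False, False)" using hG by (simp add: Gset_def)
  qed
qed

text \<open>A Pauli on party \<open>\<alpha>\<close> that is \<open>\<omega>\<^sub>\<alpha>\<close>-orthogonal to the projection of \<open>S\<close> is orthogonal to \<open>S\<close>,
  so it lies in \<open>S\<^sub>\<alpha> = 0\<close>; a subspace with trivial orthogonal complement is everything.\<close>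

lemma full_local_ranks_proj_surj:
  assumes st: "stab_state n \<psi> S" and flr: "full_local_ranks n part M S" and a: "\<alpha> \<in> M"
  shows "proj (qubits n part \<alpha>) ` S = Gset (qubits n part \<alpha>)"
proof (rule subspace_eq_Gset_if_perp_trivial[OF qubits_finite gsubspace_proj_image[OF stab_stateD(2)[OF st]]])
  show "proj (qubits n part \<alpha>) ` S \<subseteq> Gset (qubits n part \<alpha>)" by auto
  show "symp_perp (qubits n part \<alpha>) (proj (qubits n part \<alpha>) ` S) \<subseteq> {gzero}"
  proof
    fix h assume "h \<in> symp_perp (qubits n part \<alpha>) (proj (qubits n part \<alpha>) ` S)"
    then have "h \<in> local_sub n part M S \<alpha>"
      by (intro local_perp_in_local_sub[OF st]) (auto simp: symp_perp_def)
    then show "h \<in> {gzero}" using flr a unfolding full_local_ranks_def by blast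
  qed
qed

definition glue :: "nat \<Rightarrow> (nat \<Rightarrow> 'p) \<Rightarrow> ('p \<Rightarrow> pauli_vec \<Rightarrow> pauli_vec) \<Rightarrow> pauli_vec \<Rightarrow> pauli_vec" where
  "glue n part u f = (\<lambda>j. if j < n then u (part j) (proj (qubits n part (part j)) f) j else (False, False))"

lemma glue_Gset: "glue n part u f \<in> Gset {..<n}"
  by (simp add: glue_def Gset_def)

lemma proj_glue:
  assumes "u \<alpha> (proj (qubits n part \<alpha>) f) \<in> Gset (qubits n part \<alpha>)"
  shows "proj (qubits n part \<alpha>) (glue n part u f) = u \<alpha> (proj (qubits n part \<alpha>) f)"
  using assms by (auto simp: proj_def glue_def qubits_def Gset_def fun_eq_iff)

lemma glue_unique:
  assumes P: "\<forall>j<n. part j \<in> M" and T: "T \<in> Gset {..<n}"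
    and proj: "\<And>\<alpha>. \<alpha> \<in> M \<Longrightarrow> proj (qubits n part \<alpha>) T = u \<alpha> (proj (qubits n part \<alpha>) f)"
  shows "T = glue n part u f"
proof
  fix j show "T j = glue n part u f j"
  proof (cases "j < n")
    case True
    then have "part j \<in> M" "j \<in> qubits n part (part j)" using P by (auto simp: qubits_def)
    then show ?thesis
      using fun_cong[OF proj[of "part j"], of j] True by (simp add: proj_def glue_def)
  next
    case False
    then show ?thesis using T by (simp add: glue_def Gset_def)
  qed
qed

lemma glue_gadd:
  assumes P: "\<forall>j<n. part j \<in> M"
    and u: "\<And>\<alpha> f g. \<alpha> \<in> M \<Longrightarrow> f \<in> Gset (qubits n part \<alpha>) \<Longrightarrow> g \<in> Gset (qubits n part \<alpha>) \<Longrightarrow>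
      u \<alpha> (gadd f g) = gadd (u \<alpha> f) (u \<alpha> g)"
  shows "glue n part u (gadd f g) = gadd (glue n part u f) (glue n part u g)"
proof
  fix j show "glue n part u (gadd f g) j = gadd (glue n part u f) (glue n part u g) j"
    using P u[OF _ proj_Gset proj_Gset] by (auto simp: glue_def proj_gadd gadd_apply padd_def)
qed

lemma glue_inj:
  assumes P: "\<forall>j<n. part j \<in> M"
    and uG: "\<And>\<alpha> f. \<alpha> \<in> M \<Longrightarrow> f \<in> Gset (qubits n part \<alpha>) \<Longrightarrow> u \<alpha> f \<in> Gset (qubits n part \<alpha>)"
    and inj: "\<And>\<alpha>. \<alpha> \<in> M \<Longrightarrow> inj_on (u \<alpha>) (Gset (qubits n part \<alpha>))"
  shows "inj_on (glue n part u) (Gset {..<n})"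
proof (rule inj_onI)
  fix f g assume f: "f \<in> Gset {..<n}" and g: "g \<in> Gset {..<n}" and e: "glue n part u f = glue n part u g"
  show "f = g"
  proof
    fix j show "f j = g j"
    proof (cases "j < n")
      case True
      then have a: "part j \<in> M" and jq: "j \<in> qubits n part (part j)" using P by (auto simp: qubits_def)
      have "u (part j) (proj (qubits n part (part j)) f) = u (part j) (proj (qubits n part (part j)) g)"
        using proj_glue[of u "part j" n part f] proj_glue[of u "part j" n part g] uG[OF a proj_Gset] e
        by simp
      then have "proj (qubits n part (part j)) f = proj (qubits n part (part j)) g"
        using inj[OF a] by (simp add: inj_on_def)
      then have "proj (qubits n part (part j)) f j = proj (qubits n part (part j)) g j" by simp
      then show ?thesis using jq by (simp add: proj_def)
    next
      case False then show ?thesis using f g by (simp add: Gset_def)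
    qed
  qed
qed

lemma local_clifford_actions:
  assumes "\<forall>\<alpha>\<in>M. clifford (qubits n part \<alpha>) (Us \<alpha>)"
  shows "\<exists>u s. \<forall>\<alpha>\<in>M. clifford_action (qubits n part \<alpha>) (Us \<alpha>) (u \<alpha>) (s \<alpha>)"
proof -
  have "\<forall>\<alpha>\<in>M. \<exists>p. clifford_action (qubits n part \<alpha>) (Us \<alpha>) (fst p) (snd p)"
    using assms by (auto simp: clifford_iff_action)
  then obtain F where "\<forall>\<alpha>\<in>M. clifford_action (qubits n part \<alpha>) (Us \<alpha>) (fst (F \<alpha>)) (snd (F \<alpha>))"
    by (rule bchoice[THEN exE])
  then show ?thesis
    by (intro exI[of _ "\<lambda>\<alpha>. fst (F \<alpha>)"] exI[of _ "\<lambda>\<alpha>. snd (F \<alpha>)"])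
qed

lemma local_clifford_realisations:
  assumes "\<forall>\<alpha>\<in>M. symplectic_map (qubits n part \<alpha>) (u \<alpha>)"
  shows "\<exists>Us s. \<forall>\<alpha>\<in>M. clifford_action (qubits n part \<alpha>) (Us \<alpha>) (u \<alpha>) (s \<alpha>)"
proof -
  have "\<forall>\<alpha>\<in>M. \<exists>p. clifford_action (qubits n part \<alpha>) (fst p) (u \<alpha>) (snd p)"
    using assms symplectic_map_clifford_realisation[OF qubits_finite] by fastforce
  then obtain F where "\<forall>\<alpha>\<in>M. clifford_action (qubits n part \<alpha>) (fst (F \<alpha>)) (u \<alpha>) (snd (F \<alpha>))"
    by (rule bchoice[THEN exE])
  then show ?thesis
    by (intro exI[of _ "\<lambda>\<alpha>. fst (F \<alpha>)"] exI[of _ "\<lambda>\<alpha>. snd (F \<alpha>)"])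
qed

lemma conj_tensor_pauli:
  assumes M: "finite M" and P: "\<forall>j<n. part j \<in> M"
    and act: "\<forall>\<alpha>\<in>M. clifford_action (qubits n part \<alpha>) (Us \<alpha>) (u \<alpha>) (s \<alpha>)"
  shows "conj_op {..<n} (tensor_op n part M Us) (pauli {..<n} f)
       = smul (\<Prod>\<alpha>\<in>M. s \<alpha> (proj (qubits n part \<alpha>) f)) (pauli {..<n} (glue n part u f))"
proof -
  let ?q = "qubits n part"
  have "conj_op {..<n} (tensor_op n part M Us) (pauli {..<n} f)
      = tensor_op n part M (\<lambda>\<alpha>. conj_op (?q \<alpha>) (Us \<alpha>) (pauli (?q \<alpha>) (proj (?q \<alpha>) f)))"
    unfolding tensor_pauli[OF M P, of f] tensor_conj[OF M P] pauli_proj ..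
  also have "\<dots> = tensor_op n part M (\<lambda>\<alpha>. smul (s \<alpha> (proj (?q \<alpha>) f)) (pauli (?q \<alpha>) (glue n part u f)))"
  proof (rule tensor_cong)
    fix \<alpha> assume a: "\<alpha> \<in> M"
    note uG = clifford_actionD(2)[OF act[rule_format, OF a] proj_Gset]
    note proj_glue[of u \<alpha> n part f, OF uG]
    show "op_eq (?q \<alpha>) (conj_op (?q \<alpha>) (Us \<alpha>) (pauli (?q \<alpha>) (proj (?q \<alpha>) f)))
        (smul (s \<alpha> (proj (?q \<alpha>) f)) (pauli (?q \<alpha>) (glue n part u f)))"
      using clifford_actionD(4)[OF act[rule_format, OF a] proj_Gset]
      by (simp add: pauli_proj[symmetric, of "?q \<alpha>" "glue n part u f"] \<open>proj (?q \<alpha>) (glue n part u f) = u \<alpha> (proj (?q \<alpha>) f)\<close>)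
  qed
  also have "\<dots> = smul (\<Prod>\<alpha>\<in>M. s \<alpha> (proj (?q \<alpha>) f)) (pauli {..<n} (glue n part u f))"
    unfolding tensor_smul tensor_pauli[OF M P, of "glue n part u f"] ..
  finally show ?thesis .
qed

lemma local_sign_product_square:
  assumes "\<forall>\<alpha>\<in>M. clifford_action (qubits n part \<alpha>) (Us \<alpha>) (u \<alpha>) (s \<alpha>)"
  shows "(\<Prod>\<alpha>\<in>M. s \<alpha> (proj (qubits n part \<alpha>) f)) * (\<Prod>\<alpha>\<in>M. s \<alpha> (proj (qubits n part \<alpha>) f)) = 1"
proof -
  have "s \<alpha> (proj (qubits n part \<alpha>) f) * s \<alpha> (proj (qubits n part \<alpha>) f) = 1" if "\<alpha> \<in> M" for \<alpha>
    using clifford_actionD(3)[OF assms[rule_format, OF that], of "proj (qubits n part \<alpha>) f"] by auto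
  then show ?thesis by (simp add: prod.distrib[symmetric])
qed

lemma tensor_clifford_eigvec:
  assumes M: "finite M" and P: "\<forall>j<n. part j \<in> M"
    and act: "\<forall>\<alpha>\<in>M. clifford_action (qubits n part \<alpha>) (Us \<alpha>) (u \<alpha>) (s \<alpha>)"
    and e: "eigvec {..<n} (pauli {..<n} f) \<psi> e"
  shows "\<exists>\<sigma>. \<sigma> * \<sigma> = 1 \<and>
    eigvec {..<n} (pauli {..<n} (glue n part u f)) (apply_op {..<n} (tensor_op n part M Us) \<psi>) (\<sigma> * e)"
proof -
  have UU: "op_eq {..<n} (mmul {..<n} (adj (tensor_op n part M Us)) (tensor_op n part M Us)) id_op"
    using tensor_unitary[OF M P] act by (simp add: clifford_action_def unitary_iff)
  show ?thesis
    using local_sign_product_square[OF act]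
      eigvec_conj[OF finite_lessThan UU conj_tensor_pauli[OF M P act] local_sign_product_square[OF act] e]
    by blast
qed

lemma glue_clifford_actions:
  assumes P: "\<forall>j<n. part j \<in> M"
    and act: "\<forall>\<alpha>\<in>M. clifford_action (qubits n part \<alpha>) (Us \<alpha>) (u \<alpha>) (s \<alpha>)"
  shows "inj_on (glue n part u) (Gset {..<n})"
    and "glue n part u (gadd f g) = gadd (glue n part u f) (glue n part u g)"
    and "\<alpha> \<in> M \<Longrightarrow> symp (qubits n part \<alpha>) (glue n part u f) (glue n part u g) = symp (qubits n part \<alpha>) f g"
proof -
  let ?q = "qubits n part" and ?T = "glue n part u"
  note act' = act[rule_format]
  show "inj_on ?T (Gset {..<n})"
  proof (rule glue_inj[OF P])
    show "u \<alpha> f \<in> Gset (?q \<alpha>)" if "\<alpha> \<in> M" "f \<in> Gset (?q \<alpha>)" for \<alpha> f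
      using clifford_actionD(2)[OF act'[OF that(1)] that(2)] .
    show "inj_on (u \<alpha>) (Gset (?q \<alpha>))" if "\<alpha> \<in> M" for \<alpha>
      using clifford_action_inj[OF qubits_finite act'[OF that]] .
  qed
  show "?T (gadd f g) = gadd (?T f) (?T g)"
    by (rule glue_gadd[OF P clifford_action_gadd[OF qubits_finite act']])
  assume a: "\<alpha> \<in> M"
  have projT: "proj (?q \<alpha>) (?T h) = u \<alpha> (proj (?q \<alpha>) h)" for h
    using proj_glue[of u \<alpha> n part h] clifford_actionD(2)[OF act'[OF a] proj_Gset[of "?q \<alpha>" h]]
    by blast
  have "symp (?q \<alpha>) (?T f) (?T g) = symp (?q \<alpha>) (proj (?q \<alpha>) (?T f)) (proj (?q \<alpha>) (?T g))"
    by (simp only: symp_proj)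
  also have "\<dots> = symp (?q \<alpha>) (proj (?q \<alpha>) f) (proj (?q \<alpha>) g)"
    using clifford_action_symp[OF qubits_finite act'[OF a] proj_Gset proj_Gset] by (simp add: projT)
  finally show "symp (?q \<alpha>) (?T f) (?T g) = symp (?q \<alpha>) f g" by (simp only: symp_proj)
qed

section \<open>Local Clifford equivalence\<close>

lemma LCU_equiv_imp_local_symplectic_iso:
  assumes M: "finite M" and P: "\<forall>j<n. part j \<in> M"
    and st: "stab_state n \<psi> S" and st': "stab_state n \<psi>' S'"
    and lcu: "LCU_equiv n part M \<psi> \<psi>'"
  shows "\<exists>T. F2_linear_iso S S' T \<and>
       (\<forall>f\<in>S. \<forall>g\<in>S. \<forall>\<alpha>\<in>M. symp (qubits n part \<alpha>) (T f) (T g) = symp (qubits n part \<alpha>) f g)"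
proof -
  obtain Us c where cl: "\<forall>\<alpha>\<in>M. clifford (qubits n part \<alpha>) (Us \<alpha>)"
    and eq: "\<forall>x\<in>basis {..<n}. \<psi>' x = c * apply_op {..<n} (tensor_op n part M Us) \<psi> x"
    using lcu unfolding LCU_equiv_def by blast
  obtain u s where act: "\<forall>\<alpha>\<in>M. clifford_action (qubits n part \<alpha>) (Us \<alpha>) (u \<alpha>) (s \<alpha>)"
    using local_clifford_actions[OF cl] by blast
  let ?T = "glue n part u"
  obtain eS where eS: "\<forall>f\<in>S. (eS f = 1 \<or> eS f = -1) \<and> eigvec {..<n} (pauli {..<n} f) \<psi> (eS f)"
    using stab_stateD(6)[OF st] by blast
  have TS: "?T f \<in> S'" if f: "f \<in> S" for f
  proof -
    obtain \<sigma> where \<sigma>: "\<sigma> * \<sigma> = 1"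
      and ev: "eigvec {..<n} (pauli {..<n} (?T f)) (apply_op {..<n} (tensor_op n part M Us) \<psi>) (\<sigma> * eS f)"
      using tensor_clifford_eigvec[OF M P act] eS f by blast
    from ev have "eigvec {..<n} (pauli {..<n} (?T f)) \<psi>' (\<sigma> * eS f)"
      by (rule eigvec_scale) (use eq in blast)
    moreover have "\<sigma> * eS f \<noteq> 0" using \<sigma> eS f by auto
    ultimately show ?thesis by (rule eigvec_imp_stabilizer[OF st' glue_Gset])
  qed
  have inj: "inj_on ?T S"
    using glue_clifford_actions(1)[OF P act] stab_stateD(1)[OF st] by (rule inj_on_subset)
  have "?T ` S = S'"
  proof (rule card_subset_eq)
    show "finite S'" using stab_stateD(1)[OF st'] finite_Gset finite_subset by blast
    show "?T ` S \<subseteq> S'" using TS by blast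
    show "card (?T ` S) = card S'" using card_image[OF inj] card_stabilizer[OF st] card_stabilizer[OF st'] by simp
  qed
  then show ?thesis
    using inj glue_clifford_actions(2,3)[OF P act] unfolding F2_linear_iso_def bij_betw_def by blast
qed

text \<open>If \<open>f1, f2 \<in> S\<close> agree on party \<open>\<alpha>\<close>, then \<open>T (f1 + f2)\<close> is \<open>\<omega>\<^sub>\<alpha>\<close>-orthogonal to \<open>T S = S'\<close>, whose
  projection to party \<open>\<alpha>\<close> is everything; nondegeneracy of \<open>\<omega>\<^sub>\<alpha>\<close> forces \<open>T f1\<close> and \<open>T f2\<close> to agree there.\<close>

lemma local_symplectic_iso_proj_cong:
  assumes st: "stab_state n \<psi> S" and st': "stab_state n \<psi>' S'"
    and flr': "full_local_ranks n part M S'" and a: "\<alpha> \<in> M"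
    and iso: "F2_linear_iso S S' T"
    and sy: "\<forall>f\<in>S. \<forall>g\<in>S. symp (qubits n part \<alpha>) (T f) (T g) = symp (qubits n part \<alpha>) f g"
    and f1: "f1 \<in> S" and f2: "f2 \<in> S" and e: "proj (qubits n part \<alpha>) f1 = proj (qubits n part \<alpha>) f2"
  shows "proj (qubits n part \<alpha>) (T f1) = proj (qubits n part \<alpha>) (T f2)"
proof -
  let ?q = "qubits n part"
  define d where "d = gadd f1 f2"
  have dS: "d \<in> S" using stab_stateD(2)[OF st] f1 f2 by (simp add: d_def gsubspace_def)
  have dz: "\<forall>j\<in>?q \<alpha>. d j = (False, False)"
  proof
    fix j assume j: "j \<in> ?q \<alpha>"
    have "proj (?q \<alpha>) f1 j = proj (?q \<alpha>) f2 j" using e by simp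
    then show "d j = (False, False)" using j by (simp add: proj_def d_def gadd_def)
  qed
  have "proj (?q \<alpha>) (T d) = gzero"
  proof (rule symp_nondegenerate[OF qubits_finite proj_Gset])
    fix g' assume "g' \<in> Gset (?q \<alpha>)"
    then have "g' \<in> proj (?q \<alpha>) ` T ` S"
      using full_local_ranks_proj_surj[OF st' flr' a] iso by (simp add: F2_linear_iso_def bij_betw_def)
    then obtain g where g: "g \<in> S" "g' = proj (?q \<alpha>) (T g)" by blast
    have "symp (?q \<alpha>) (proj (?q \<alpha>) (T d)) g' = symp (?q \<alpha>) d g"
      using g sy dS by (simp add: symp_proj)
    then show "\<not> symp (?q \<alpha>) (proj (?q \<alpha>) (T d)) g'" using symp_zero_on[OF dz] by simp
  qed
  then have "gadd (proj (?q \<alpha>) (T f1)) (proj (?q \<alpha>) (T f2)) = gzero"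
    using iso f1 f2 by (simp add: F2_linear_iso_def d_def proj_gadd)
  then show ?thesis by (rule gadd_eq_zero)
qed

lemma symplectic_map_of_proj:
  assumes fR: "finite R" and cS: "gsubspace S"
    and surj: "proj R ` S = Gset R" and surj': "proj R ` S' = Gset R"
    and iso: "F2_linear_iso S S' T"
    and sy: "\<forall>f\<in>S. \<forall>g\<in>S. symp R (T f) (T g) = symp R f g"
    and uT: "\<And>f. f \<in> S \<Longrightarrow> u (proj R f) = proj R (T f)"
  shows "symplectic_map R u"
proof -
  have TS: "T ` S = S'" and Tadd: "\<And>f g. f \<in> S \<Longrightarrow> g \<in> S \<Longrightarrow> T (gadd f g) = gadd (T f) (T g)"
    using iso by (auto simp: F2_linear_iso_def bij_betw_def)
  have add: "u (gadd g1 g2) = gadd (u g1) (u g2) \<and> symp R (u g1) (u g2) = symp R g1 g2"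
    if "g1 \<in> Gset R" "g2 \<in> Gset R" for g1 g2
  proof -
    have "g1 \<in> proj R ` S" "g2 \<in> proj R ` S" using surj that by simp_all
    then obtain f1 f2 where f: "f1 \<in> S" "f2 \<in> S" "g1 = proj R f1" "g2 = proj R f2"
      by blast
    have "gadd f1 f2 \<in> S" using cS f by (simp add: gsubspace_def)
    then have "u (proj R (gadd f1 f2)) = proj R (gadd (T f1) (T f2))"
      using uT Tadd[OF f(1,2)] by simp
    then have "u (gadd g1 g2) = gadd (u g1) (u g2)"
      using f uT[OF f(1)] uT[OF f(2)] by (simp only: proj_gadd)
    moreover have "symp R (u g1) (u g2) = symp R g1 g2"
      using f uT[OF f(1)] uT[OF f(2)] sy by (simp only: symp_proj)
    ultimately show ?thesis ..
  qed
  have im: "u ` Gset R = Gset R"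
  proof
    show "u ` Gset R \<subseteq> Gset R"
    proof
      fix y assume "y \<in> u ` Gset R"
      then obtain g where g: "g \<in> Gset R" "y = u g" by blast
      then have "g \<in> proj R ` S" using surj by simp
      then obtain f where "f \<in> S" "g = proj R f" by blast
      then show "y \<in> Gset R" using uT g(2) by simp
    qed
    show "Gset R \<subseteq> u ` Gset R"
    proof
      fix g' assume "g' \<in> Gset R"
      then have "g' \<in> proj R ` T ` S" using surj' TS by simp
      then obtain f where "f \<in> S" "g' = proj R (T f)" by blast
      then have "g' = u (proj R f)" using uT by simp
      then show "g' \<in> u ` Gset R" using proj_Gset by blast
    qed
  qed
  then have "inj_on u (Gset R)"
    by (intro eq_card_imp_inj_on[OF finite_Gset[OF fR]]) simp
  then show ?thesis using im add by (simp add: symplectic_map_def bij_betw_def)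
qed

lemma local_symplectic_maps_of_iso:
  assumes st: "stab_state n \<psi> S" and st': "stab_state n \<psi>' S'"
    and flr: "full_local_ranks n part M S" and flr': "full_local_ranks n part M S'"
    and iso: "F2_linear_iso S S' T"
    and sy: "\<forall>f\<in>S. \<forall>g\<in>S. \<forall>\<alpha>\<in>M. symp (qubits n part \<alpha>) (T f) (T g) = symp (qubits n part \<alpha>) f g"
  shows "\<exists>u. \<forall>\<alpha>\<in>M. symplectic_map (qubits n part \<alpha>) (u \<alpha>) \<and>
           (\<forall>f\<in>S. u \<alpha> (proj (qubits n part \<alpha>) f) = proj (qubits n part \<alpha>) (T f))"
proof -
  let ?q = "qubits n part"
  define u where "u \<alpha> g = proj (?q \<alpha>) (T (SOME f. f \<in> S \<and> proj (?q \<alpha>) f = g))" for \<alpha> g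
  have sy\<alpha>: "\<forall>f\<in>S. \<forall>g\<in>S. symp (?q \<alpha>) (T f) (T g) = symp (?q \<alpha>) f g" if "\<alpha> \<in> M" for \<alpha>
    using sy that by blast
  have uT: "u \<alpha> (proj (?q \<alpha>) f) = proj (?q \<alpha>) (T f)" if a: "\<alpha> \<in> M" and f: "f \<in> S" for \<alpha> f
  proof -
    define f0 where "f0 = (SOME f'. f' \<in> S \<and> proj (?q \<alpha>) f' = proj (?q \<alpha>) f)"
    have "f0 \<in> S \<and> proj (?q \<alpha>) f0 = proj (?q \<alpha>) f"
      using someI_ex[of "\<lambda>f'. f' \<in> S \<and> proj (?q \<alpha>) f' = proj (?q \<alpha>) f"] f unfolding f0_def by blast
    then have "proj (?q \<alpha>) (T f0) = proj (?q \<alpha>) (T f)"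
      using local_symplectic_iso_proj_cong[OF st st' flr' a iso sy\<alpha>[OF a] _ f] by blast
    then show ?thesis by (simp add: u_def f0_def)
  qed
  have "symplectic_map (?q \<alpha>) (u \<alpha>)" if a: "\<alpha> \<in> M" for \<alpha>
    by (rule symplectic_map_of_proj[OF qubits_finite stab_stateD(2)[OF st]
        full_local_ranks_proj_surj[OF st flr a] full_local_ranks_proj_surj[OF st' flr' a] iso sy\<alpha>[OF a]
        uT[OF a]])
  then show ?thesis using uT by blast
qed

text \<open>\<open>U = \<Otimes>\<^sub>\<alpha> U\<^sub>\<alpha>\<close> maps \<open>\<psi>\<close> to a state stabilised by \<open>S'\<close> up to signs; a Pauli correction \<open>\<sigma>(h)\<close>,
  which is again a product of local Cliffords, fixes the signs, and uniqueness of stabilizer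
  states does the rest.\<close>

lemma LCU_equiv_of_local_clifford_actions:
  assumes M: "finite M" and P: "\<forall>j<n. part j \<in> M"
    and st: "stab_state n \<psi> S" and st': "stab_state n \<psi>' S'"
    and act: "\<forall>\<alpha>\<in>M. clifford_action (qubits n part \<alpha>) (Us \<alpha>) (u \<alpha>) (s \<alpha>)"
    and image: "glue n part u ` S = S'"
  shows "LCU_equiv n part M \<psi> \<psi>'"
proof -
  let ?Q = "{..<n} :: nat set" and ?q = "qubits n part" and ?U = "tensor_op n part M Us"
  have UU: "op_eq ?Q (mmul ?Q (adj ?U) ?U) id_op"
    using tensor_unitary[OF M P] act by (simp add: clifford_action_def unitary_iff)
  obtain eS where eS: "\<forall>f\<in>S. (eS f = 1 \<or> eS f = -1) \<and> eigvec ?Q (pauli ?Q f) \<psi> (eS f)"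
    using stab_stateD(6)[OF st] by blast
  obtain eS' where eS': "\<forall>f\<in>S'. (eS' f = 1 \<or> eS' f = -1) \<and> eigvec ?Q (pauli ?Q f) \<psi>' (eS' f)"
    using stab_stateD(6)[OF st'] by blast
  define \<chi> where "\<chi> = apply_op ?Q ?U \<psi>"
  have u\<chi>: "unit_state ?Q \<chi>"
    using braket_unitary[OF _ UU, of \<psi> \<psi>] stab_stateD(3)[OF st] by (simp add: unit_state_iff \<chi>_def)
  have \<chi>_eig: "\<exists>e. eigvec ?Q (pauli ?Q s') \<chi> e" if s': "s' \<in> S'" for s'
  proof -
    obtain f where "f \<in> S" "s' = glue n part u f" using image s' by blast
    then show ?thesis
      using tensor_clifford_eigvec[OF M P act] eS unfolding \<chi>_def by blast
  qed
  obtain h where h: "h \<in> Gset ?Q"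
    and h_eig: "\<forall>s'\<in>S'. eigvec ?Q (pauli ?Q s') (apply_op ?Q (pauli ?Q h) \<chi>) (eS' s')"
    and h_unit: "unit_state ?Q (apply_op ?Q (pauli ?Q h) \<chi>)"
    using pauli_correction_of_signs[of "{..<n}" S' eS' \<psi>' \<chi>] \<chi>_eig u\<chi> eS' stab_stateD(3)[OF st'] by blast
  obtain c where c: "cmod c = 1" "\<forall>x\<in>basis ?Q. \<psi>' x = c * apply_op ?Q (pauli ?Q h) \<chi> x"
    using stabilizer_states_equal_up_to_phase[OF _ stab_stateD(1,4)[OF st'], of eS' \<psi>' "apply_op ?Q (pauli ?Q h) \<chi>"]
      eS' stab_stateD(3)[OF st'] h_eig h_unit by blast
  define Vs where "Vs \<alpha> = mmul (?q \<alpha>) (pauli (?q \<alpha>) h) (Us \<alpha>)" for \<alpha>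
  have "clifford (?q \<alpha>) (Vs \<alpha>)" if "\<alpha> \<in> M" for \<alpha>
    using clifford_action_pauli_mult[OF qubits_finite act[rule_format, OF that]]
    by (auto simp: clifford_iff_action Vs_def)
  moreover have "tensor_op n part M Vs = mmul ?Q (pauli ?Q h) ?U"
    unfolding Vs_def tensor_pauli[OF M P, of h] tensor_mmul[OF M P] ..
  then have "\<forall>x\<in>basis ?Q. \<psi>' x = c * apply_op ?Q (tensor_op n part M Vs) \<psi> x"
    using c(2) by (simp add: apply_op_mmul \<chi>_def)
  ultimately show ?thesis
    using c(1) unfolding LCU_equiv_def by blast
qed

lemma local_symplectic_iso_imp_LCU_equiv:
  assumes M: "finite M" and P: "\<forall>j<n. part j \<in> M"
    and st: "stab_state n \<psi> S" and st': "stab_state n \<psi>' S'"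
    and flr: "full_local_ranks n part M S" and flr': "full_local_ranks n part M S'"
    and iso: "F2_linear_iso S S' T"
    and sy: "\<forall>f\<in>S. \<forall>g\<in>S. \<forall>\<alpha>\<in>M. symp (qubits n part \<alpha>) (T f) (T g) = symp (qubits n part \<alpha>) f g"
  shows "LCU_equiv n part M \<psi> \<psi>'"
proof -
  obtain u where u: "\<forall>\<alpha>\<in>M. symplectic_map (qubits n part \<alpha>) (u \<alpha>)"
    and uT: "\<forall>\<alpha>\<in>M. \<forall>f\<in>S. u \<alpha> (proj (qubits n part \<alpha>) f) = proj (qubits n part \<alpha>) (T f)"
    using local_symplectic_maps_of_iso[OF st st' flr flr' iso sy] by blast
  obtain Us s where act: "\<forall>\<alpha>\<in>M. clifford_action (qubits n part \<alpha>) (Us \<alpha>) (u \<alpha>) (s \<alpha>)"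
    using local_clifford_realisations[OF u] by blast
  have "T f = glue n part u f" if "f \<in> S" for f
  proof (rule glue_unique[OF P])
    show "T f \<in> Gset {..<n}"
      using that iso stab_stateD(1)[OF st'] by (auto simp: F2_linear_iso_def bij_betw_def)
  qed (use uT that in auto)
  then have "glue n part u ` S = S'"
    using iso by (auto simp: F2_linear_iso_def bij_betw_def)
  then show ?thesis by (rule LCU_equiv_of_local_clifford_actions[OF M P st st' act])
qed

theorem theorem1:
  fixes n :: nat and part :: "nat \<Rightarrow> 'p" and M :: "'p set"
    and \<psi> \<psi>' :: state and S S' :: "pauli_vec set"
  assumes "finite M"
    and "\<forall>j<n. part j \<in> M"
    and "stab_state n \<psi> S" and "stab_state n \<psi>' S'"
    and "full_local_ranks n part M S" and "full_local_ranks n part M S'"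
  shows "LCU_equiv n part M \<psi> \<psi>' \<longleftrightarrow>
    (\<exists>T. F2_linear_iso S S' T \<and>
       (\<forall>f\<in>S. \<forall>g\<in>S. \<forall>\<alpha>\<in>M.
          symp (qubits n part \<alpha>) (T f) (T g) = symp (qubits n part \<alpha>) f g))"
  using LCU_equiv_imp_local_symplectic_iso[OF assms(1-4)] local_symplectic_iso_imp_LCU_equiv[OF assms]
  by blast

end
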